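(* Let $(G_x \mid x \in \mathbb{N}_0)$ be the coclass family defined by $\eta \in H^3(P,T)$, let $L$ be an elementary abelian subgroup of $P$ and $x \in \mathbb{N}_0$. Then: (a) $\overline{L}_x$ splits over $M_x$ if and only if $L \in \mathcal{L}_\eta$; (b) if $\overline{L}_x$ splits over $M_x$, then $\overline{L}$ splits over $T$.
   Context: Conventions: normalised cocycles $Z^n$, coboundaries $B^n$, cohomology $H^n$ for right modules written additively; $\mathrm{Ext}(\tau)$ for $\tau\in Z^2(G,M)$ is $G\times M$ with $(g,m)(h,n)=(gh,m^h+n+\tau(g,h))$. Setting: $S$ an infinite pro-$p$-group of finite coclass; $T = \gamma_\ell(S)$ ($\ell$ large) with $T\cong \mathbb{Z}_p^d$, $P = S/T$ finite with $|P| = p^m$, the series $T_0=T$, $T_{i+1}=[T_i,S]$ with all indices $p$; $T$ an additive $P$-module via conjugation; $S = \mathrm{Ext}(\rho)$, $\rho \in Z^2(P,T)$. For $L\leq P$, $\overline{L}$ is the full preimage of $L$ in $S$. $\mathcal{L}$ is the set of elementary abelian $L\leq P$ with $\rho_L \in B^2(L,T)$, and $\mathcal{L}_\eta = \{L\in\mathcal{L} \mid \mathrm{res}^P_L(\eta) = 0 \in H^3(L,T)\}$. Coclass family: $e=3m$, $M_x = T/p^{x+e}T$; $pro_x: Z^2(P,T)\to Z^2(P,M_x)$ induced by projection, with image $I^2(P,M_x)$; $J^2(P,M_x)$ the image of $Z^2(P,p^{x+e-m}T/p^{x+e}T)\to Z^2(P,M_x)$ induced by inclusion; $K^2(P,M_x)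 \leq J^2(P,M_x)$ fixed complements of $I^2(P,M_x)$ in $Z^2(P,M_x)$ with $mul(K^2(P,M_x)) = K^2(P,M_{x+1})$, $mul$ induced by $t+p^{x+e}T\mapsto pt+p^{x+e+1}T$. The composite $Z^2(P,M_x)\to H^2(P,M_x)\to H^3(P,p^{x+e}T)\to H^3(P,T)$ (quotient, connecting homomorphism, division by $p^{x+e}$) restricts to an isomorphism on $K^2(P,M_x)$; $\eta_x\in K^2(P,M_x)$ is the preimage of $\eta$, $\rho_x = pro_x(\rho)$, $G_x = \mathrm{Ext}(\rho_x+\eta_x)$, with $M_x$ identified with $\{(1,m)\}$. For $L \leq P$, $\overline{L}_x$ is the full preimage of $L$ under $G_x \to P$, $(g,m)\mapsto g$. *)

theory Defs
  imports "HOL-Algebra.Algebra"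
begin

text \<open>The additive group of the p-adic integers, realised as the inverse limit of the
  groups Z/p^k Z: coherent sequences of residues.\<close>

definition Zp :: "nat \<Rightarrow> (nat \<Rightarrow> int) monoid" where
  "Zp p = \<lparr>carrier = {f. \<forall>k. 0 \<le> f k \<and> f k < int p ^ k \<and> f (Suc k) mod (int p ^ k) = f k},
           monoid.mult = (\<lambda>f g k. (f k + g k) mod (int p ^ k)),
           one = (\<lambda>k. 0)\<rparr>"

section \<open>Normalised cochains, cocycles, coboundaries (right modules, written additively;
  in HOL-Algebra the module A is a commutative group written multiplicatively)\<close>

text \<open>Cochains are extended by zero outside the carrier, so that equal cochains are
  equal functions.\<close>

definition C1 :: "'g monoid \<Rightarrow> 'a monoid \<Rightarrow> ('g \<Rightarrow> 'a) set" where
  "C1 P A = {f. (\<forall>g\<in>carrier P. f g \<in> carrier A) \<and> (\<forall>g. g \<notin> carrier P \<longrightarrow> f g = \<one>\<^bsub>A\<^esub>)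
               \<and> f \<one>\<^bsub>P\<^esub> = \<one>\<^bsub>A\<^esub>}"

definition C2 :: "'g monoid \<Rightarrow> 'a monoid \<Rightarrow> ('g \<Rightarrow> 'g \<Rightarrow> 'a) set" where
  "C2 P A = {f. (\<forall>g\<in>carrier P. \<forall>h\<in>carrier P. f g h \<in> carrier A)
               \<and> (\<forall>g h. (g \<notin> carrier P \<or> h \<notin> carrier P) \<longrightarrow> f g h = \<one>\<^bsub>A\<^esub>)
               \<and> (\<forall>g\<in>carrier P. f \<one>\<^bsub>P\<^esub> g = \<one>\<^bsub>A\<^esub> \<and> f g \<one>\<^bsub>P\<^esub> = \<one>\<^bsub>A\<^esub>)}"

definition C3 :: "'g monoid \<Rightarrow> 'a monoid \<Rightarrow> ('g \<Rightarrow> 'g \<Rightarrow> 'g \<Rightarrow> 'a) set" where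
  "C3 P A = {f. (\<forall>g\<in>carrier P. \<forall>h\<in>carrier P. \<forall>k\<in>carrier P. f g h k \<in> carrier A)
               \<and> (\<forall>g h k. (g \<notin> carrier P \<or> h \<notin> carrier P \<or> k \<notin> carrier P) \<longrightarrow> f g h k = \<one>\<^bsub>A\<^esub>)
               \<and> (\<forall>g\<in>carrier P. \<forall>h\<in>carrier P. f \<one>\<^bsub>P\<^esub> g h = \<one>\<^bsub>A\<^esub> \<and> f g \<one>\<^bsub>P\<^esub> h = \<one>\<^bsub>A\<^esub>
                                           \<and> f g h \<one>\<^bsub>P\<^esub> = \<one>\<^bsub>A\<^esub>)}"

text \<open>Coboundary maps; \<open>\<alpha> g a\<close> is the right action \<open>a^g\<close>.
  (\<delta>f)(g1,..,g(n+1)) = f(g2,..) + sum (-1)^i f(..,gi gi+1,..) + (-1)^(n+1) f(g1,..,gn)^g(n+1).\<close>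

definition d1 :: "'g monoid \<Rightarrow> 'a monoid \<Rightarrow> ('g \<Rightarrow> 'a \<Rightarrow> 'a) \<Rightarrow> ('g \<Rightarrow> 'a) \<Rightarrow> ('g \<Rightarrow> 'g \<Rightarrow> 'a)" where
  "d1 P A \<alpha> f = (\<lambda>g h. if g \<in> carrier P \<and> h \<in> carrier P
      then f h \<otimes>\<^bsub>A\<^esub> inv\<^bsub>A\<^esub> (f (g \<otimes>\<^bsub>P\<^esub> h)) \<otimes>\<^bsub>A\<^esub> \<alpha> h (f g) else \<one>\<^bsub>A\<^esub>)"

definition d2 :: "'g monoid \<Rightarrow> 'a monoid \<Rightarrow> ('g \<Rightarrow> 'a \<Rightarrow> 'a) \<Rightarrow> ('g \<Rightarrow> 'g \<Rightarrow> 'a) \<Rightarrow> ('g \<Rightarrow> 'g \<Rightarrow> 'g \<Rightarrow> 'a)" where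
  "d2 P A \<alpha> f = (\<lambda>g h k. if g \<in> carrier P \<and> h \<in> carrier P \<and> k \<in> carrier P
      then f h k \<otimes>\<^bsub>A\<^esub> inv\<^bsub>A\<^esub> (f (g \<otimes>\<^bsub>P\<^esub> h) k) \<otimes>\<^bsub>A\<^esub> f g (h \<otimes>\<^bsub>P\<^esub> k)
           \<otimes>\<^bsub>A\<^esub> inv\<^bsub>A\<^esub> (\<alpha> k (f g h))
      else \<one>\<^bsub>A\<^esub>)"

definition d3 :: "'g monoid \<Rightarrow> 'a monoid \<Rightarrow> ('g \<Rightarrow> 'a \<Rightarrow> 'a) \<Rightarrow> ('g \<Rightarrow> 'g \<Rightarrow> 'g \<Rightarrow> 'a) \<Rightarrow> ('g \<Rightarrow> 'g \<Rightarrow> 'g \<Rightarrow> 'g \<Rightarrow> 'a)" where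
  "d3 P A \<alpha> f = (\<lambda>g h k l. if g \<in> carrier P \<and> h \<in> carrier P \<and> k \<in> carrier P \<and> l \<in> carrier P
      then f h k l \<otimes>\<^bsub>A\<^esub> inv\<^bsub>A\<^esub> (f (g \<otimes>\<^bsub>P\<^esub> h) k l) \<otimes>\<^bsub>A\<^esub> f g (h \<otimes>\<^bsub>P\<^esub> k) l
           \<otimes>\<^bsub>A\<^esub> inv\<^bsub>A\<^esub> (f g h (k \<otimes>\<^bsub>P\<^esub> l)) \<otimes>\<^bsub>A\<^esub> \<alpha> l (f g h k)
      else \<one>\<^bsub>A\<^esub>)"

definition Z2 :: "'g monoid \<Rightarrow> 'a monoid \<Rightarrow> ('g \<Rightarrow> 'a \<Rightarrow> 'a) \<Rightarrow> ('g \<Rightarrow> 'g \<Rightarrow> 'a) set" where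
  "Z2 P A \<alpha> = {f \<in> C2 P A. \<forall>g\<in>carrier P. \<forall>h\<in>carrier P. \<forall>k\<in>carrier P. d2 P A \<alpha> f g h k = \<one>\<^bsub>A\<^esub>}"

definition B2 :: "'g monoid \<Rightarrow> 'a monoid \<Rightarrow> ('g \<Rightarrow> 'a \<Rightarrow> 'a) \<Rightarrow> ('g \<Rightarrow> 'g \<Rightarrow> 'a) set" where
  "B2 P A \<alpha> = d1 P A \<alpha> ` C1 P A"

definition Z3 :: "'g monoid \<Rightarrow> 'a monoid \<Rightarrow> ('g \<Rightarrow> 'a \<Rightarrow> 'a) \<Rightarrow> ('g \<Rightarrow> 'g \<Rightarrow> 'g \<Rightarrow> 'a) set" where
  "Z3 P A \<alpha> = {f \<in> C3 P A. \<forall>g\<in>carrier P. \<forall>h\<in>carrier P. \<forall>k\<in>carrier P. \<forall>l\<in>carrier P.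
                              d3 P A \<alpha> f g h k l = \<one>\<^bsub>A\<^esub>}"

definition B3 :: "'g monoid \<Rightarrow> 'a monoid \<Rightarrow> ('g \<Rightarrow> 'a \<Rightarrow> 'a) \<Rightarrow> ('g \<Rightarrow> 'g \<Rightarrow> 'g \<Rightarrow> 'a) set" where
  "B3 P A \<alpha> = d2 P A \<alpha> ` C2 P A"

definition cls3 :: "'g monoid \<Rightarrow> 'a monoid \<Rightarrow> ('g \<Rightarrow> 'a \<Rightarrow> 'a) \<Rightarrow> ('g \<Rightarrow> 'g \<Rightarrow> 'g \<Rightarrow> 'a)
                    \<Rightarrow> ('g \<Rightarrow> 'g \<Rightarrow> 'g \<Rightarrow> 'a) set" where
  "cls3 P A \<alpha> z = {w \<in> Z3 P A \<alpha>. (\<lambda>g h k. w g h k \<otimes>\<^bsub>A\<^esub> inv\<^bsub>A\<^esub> (z g h k)) \<in> B3 P A \<alpha>}"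

definition H3 :: "'g monoid \<Rightarrow> 'a monoid \<Rightarrow> ('g \<Rightarrow> 'a \<Rightarrow> 'a) \<Rightarrow> ('g \<Rightarrow> 'g \<Rightarrow> 'g \<Rightarrow> 'a) set set" where
  "H3 P A \<alpha> = cls3 P A \<alpha> ` Z3 P A \<alpha>"

definition res2 :: "'a monoid \<Rightarrow> 'g set \<Rightarrow> ('g \<Rightarrow> 'g \<Rightarrow> 'a) \<Rightarrow> ('g \<Rightarrow> 'g \<Rightarrow> 'a)" where
  "res2 A L f = (\<lambda>g h. if g \<in> L \<and> h \<in> L then f g h else \<one>\<^bsub>A\<^esub>)"

definition res3 :: "'a monoid \<Rightarrow> 'g set \<Rightarrow> ('g \<Rightarrow> 'g \<Rightarrow> 'g \<Rightarrow> 'a) \<Rightarrow> ('g \<Rightarrow> 'g \<Rightarrow> 'g \<Rightarrow> 'a)" where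
  "res3 A L f = (\<lambda>g h k. if g \<in> L \<and> h \<in> L \<and> k \<in> L then f g h k else \<one>\<^bsub>A\<^esub>)"

definition resH3 :: "'g monoid \<Rightarrow> 'a monoid \<Rightarrow> ('g \<Rightarrow> 'a \<Rightarrow> 'a) \<Rightarrow> 'g set
                     \<Rightarrow> ('g \<Rightarrow> 'g \<Rightarrow> 'g \<Rightarrow> 'a) set \<Rightarrow> ('g \<Rightarrow> 'g \<Rightarrow> 'g \<Rightarrow> 'a) set" where
  "resH3 P A \<alpha> L \<eta> = cls3 (P\<lparr>carrier := L\<rparr>) A \<alpha> (res3 A L (SOME z. z \<in> \<eta>))"

definition elem_abelian :: "'g monoid \<Rightarrow> nat \<Rightarrow> 'g set \<Rightarrow> bool" where
  "elem_abelian P p L \<longleftrightarrow> subgroup L P \<and> comm_group (P\<lparr>carrier := L\<rparr>)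
                          \<and> (\<forall>g\<in>L. g [^]\<^bsub>P\<^esub> p = \<one>\<^bsub>P\<^esub>)"

definition calL :: "'g monoid \<Rightarrow> 'a monoid \<Rightarrow> ('g \<Rightarrow> 'a \<Rightarrow> 'a) \<Rightarrow> nat \<Rightarrow> ('g \<Rightarrow> 'g \<Rightarrow> 'a) \<Rightarrow> 'g set set" where
  "calL P A \<alpha> p \<rho> = {L. elem_abelian P p L \<and> res2 A L \<rho> \<in> B2 (P\<lparr>carrier := L\<rparr>) A \<alpha>}"

definition calL_eta :: "'g monoid \<Rightarrow> 'a monoid \<Rightarrow> ('g \<Rightarrow> 'a \<Rightarrow> 'a) \<Rightarrow> nat \<Rightarrow> ('g \<Rightarrow> 'g \<Rightarrow> 'a)
                        \<Rightarrow> ('g \<Rightarrow> 'g \<Rightarrow> 'g \<Rightarrow> 'a) set \<Rightarrow> 'g set set" where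
  "calL_eta P A \<alpha> p \<rho> \<eta> = {L \<in> calL P A \<alpha> p \<rho>.
       resH3 P A \<alpha> L \<eta> = cls3 (P\<lparr>carrier := L\<rparr>) A \<alpha> (\<lambda>_ _ _. \<one>\<^bsub>A\<^esub>)}"

definition Ext :: "'g monoid \<Rightarrow> 'a monoid \<Rightarrow> ('g \<Rightarrow> 'a \<Rightarrow> 'a) \<Rightarrow> ('g \<Rightarrow> 'g \<Rightarrow> 'a) \<Rightarrow> ('g \<times> 'a) monoid" where
  "Ext P A \<alpha> \<tau> = \<lparr>carrier = carrier P \<times> carrier A,
      monoid.mult = (\<lambda>x y. (fst x \<otimes>\<^bsub>P\<^esub> fst y, \<alpha> (fst y) (snd x) \<otimes>\<^bsub>A\<^esub> snd y \<otimes>\<^bsub>A\<^esub> \<tau> (fst x) (fst y))),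
      one = (\<one>\<^bsub>P\<^esub>, \<one>\<^bsub>A\<^esub>)\<rparr>"

text \<open>The module A identified with {(1,m)}, and full preimages of subgroups L of P.\<close>

definition base :: "'g monoid \<Rightarrow> 'a monoid \<Rightarrow> ('g \<times> 'a) set" where
  "base P A = {(\<one>\<^bsub>P\<^esub>, m) | m. m \<in> carrier A}"

definition preim :: "('g \<times> 'a) monoid \<Rightarrow> 'g set \<Rightarrow> ('g \<times> 'a) set" where
  "preim E L = {x \<in> carrier E. fst x \<in> L}"

definition splits_over :: "('b, 'c) monoid_scheme \<Rightarrow> 'b set \<Rightarrow> 'b set \<Rightarrow> bool" where
  "splits_over G Y N \<longleftrightarrow> (\<exists>C. subgroup C G \<and> C \<subseteq> Y \<and> C \<inter> N = {\<one>\<^bsub>G\<^esub>} \<and> set_mult G C N = Y)"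

definition commsub :: "('b, 'c) monoid_scheme \<Rightarrow> 'b set \<Rightarrow> 'b set \<Rightarrow> 'b set" where
  "commsub G A B = generate G {a \<otimes>\<^bsub>G\<^esub> b \<otimes>\<^bsub>G\<^esub> inv\<^bsub>G\<^esub> a \<otimes>\<^bsub>G\<^esub> inv\<^bsub>G\<^esub> b | a b. a \<in> A \<and> b \<in> B}"

text \<open>lcs G i = gamma_i(G), with gamma_1(G) = G.\<close>

fun lcs :: "('b, 'c) monoid_scheme \<Rightarrow> nat \<Rightarrow> 'b set" where
  "lcs G 0 = carrier G"
| "lcs G (Suc 0) = carrier G"
| "lcs G (Suc (Suc n)) = commsub G (lcs G (Suc n)) (carrier G)"

definition finite_coclass :: "('b, 'c) monoid_scheme \<Rightarrow> nat \<Rightarrow> bool" where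
  "finite_coclass G p \<longleftrightarrow> (\<exists>r::nat. \<forall>i\<ge>1. finite (rcosets\<^bsub>G\<^esub> (lcs G (Suc i)))
                               \<and> card (rcosets\<^bsub>G\<^esub> (lcs G (Suc i))) \<le> p ^ (i + r))"

primrec Tser :: "('b, 'c) monoid_scheme \<Rightarrow> 'b set \<Rightarrow> nat \<Rightarrow> 'b set" where
  "Tser G T0 0 = T0"
| "Tser G T0 (Suc n) = commsub G (Tser G T0 n) (carrier G)"

definition pT :: "'a monoid \<Rightarrow> nat \<Rightarrow> nat \<Rightarrow> 'a set" where
  "pT A p k = {t [^]\<^bsub>A\<^esub> (p ^ k) | t. t \<in> carrier A}"

definition Mq :: "'a monoid \<Rightarrow> nat \<Rightarrow> nat \<Rightarrow> 'a set monoid" where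
  "Mq A p k = A Mod (pT A p k)"

definition actM :: "('g \<Rightarrow> 'a \<Rightarrow> 'a) \<Rightarrow> 'g \<Rightarrow> 'a set \<Rightarrow> 'a set" where
  "actM \<alpha> g C = \<alpha> g ` C"

definition proj2 :: "'g monoid \<Rightarrow> 'a monoid \<Rightarrow> nat \<Rightarrow> nat \<Rightarrow> ('g \<Rightarrow> 'g \<Rightarrow> 'a) \<Rightarrow> ('g \<Rightarrow> 'g \<Rightarrow> 'a set)" where
  "proj2 P A p k \<tau> = (\<lambda>g h. if g \<in> carrier P \<and> h \<in> carrier P
        then r_coset A (pT A p k) (\<tau> g h) else pT A p k)"

definition mulc :: "'a monoid \<Rightarrow> nat \<Rightarrow> nat \<Rightarrow> 'a set \<Rightarrow> 'a set" where
  "mulc A p k C = set_mult A (pT A p (Suc k)) ((\<lambda>t. t [^]\<^bsub>A\<^esub> p) ` C)"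

definition mul2 :: "'g monoid \<Rightarrow> 'a monoid \<Rightarrow> nat \<Rightarrow> nat \<Rightarrow> ('g \<Rightarrow> 'g \<Rightarrow> 'a set) \<Rightarrow> ('g \<Rightarrow> 'g \<Rightarrow> 'a set)" where
  "mul2 P A p k \<kappa> = (\<lambda>g h. if g \<in> carrier P \<and> h \<in> carrier P
        then mulc A p k (\<kappa> g h) else pT A p (Suc k))"

definition cadd2 :: "('b, 'c) monoid_scheme \<Rightarrow> ('g \<Rightarrow> 'g \<Rightarrow> 'b) \<Rightarrow> ('g \<Rightarrow> 'g \<Rightarrow> 'b) \<Rightarrow> ('g \<Rightarrow> 'g \<Rightarrow> 'b)" where
  "cadd2 M f f' = (\<lambda>g h. f g h \<otimes>\<^bsub>M\<^esub> f' g h)"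

definition cneg2 :: "('b, 'c) monoid_scheme \<Rightarrow> ('g \<Rightarrow> 'g \<Rightarrow> 'b) \<Rightarrow> ('g \<Rightarrow> 'g \<Rightarrow> 'b)" where
  "cneg2 M f = (\<lambda>g h. inv\<^bsub>M\<^esub> (f g h))"

definition is_complement2 :: "('b, 'c) monoid_scheme \<Rightarrow> ('g \<Rightarrow> 'g \<Rightarrow> 'b) set \<Rightarrow> ('g \<Rightarrow> 'g \<Rightarrow> 'b) set
                              \<Rightarrow> ('g \<Rightarrow> 'g \<Rightarrow> 'b) set \<Rightarrow> bool" where
  "is_complement2 M Z I K \<longleftrightarrow> K \<subseteq> Z \<and> (\<lambda>_ _. \<one>\<^bsub>M\<^esub>) \<in> K
     \<and> (\<forall>a\<in>K. \<forall>b\<in>K. cadd2 M a b \<in> K) \<and> (\<forall>a\<in>K. cneg2 M a \<in> K)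
     \<and> K \<inter> I = {\<lambda>_ _. \<one>\<^bsub>M\<^esub>} \<and> (\<forall>z\<in>Z. \<exists>a\<in>K. \<exists>b\<in>I. z = cadd2 M a b)"

definition I2 :: "'g monoid \<Rightarrow> 'a monoid \<Rightarrow> ('g \<Rightarrow> 'a \<Rightarrow> 'a) \<Rightarrow> nat \<Rightarrow> nat \<Rightarrow> ('g \<Rightarrow> 'g \<Rightarrow> 'a set) set" where
  "I2 P A \<alpha> p k = proj2 P A p k ` Z2 P A \<alpha>"

text \<open>J^2(P, A/p^k A): image of Z^2(P, p^(k-m) A / p^k A) under the map induced by inclusion
  (the inclusion is the identity on cosets).\<close>
definition J2 :: "'g monoid \<Rightarrow> 'a monoid \<Rightarrow> ('g \<Rightarrow> 'a \<Rightarrow> 'a) \<Rightarrow> nat \<Rightarrow> nat \<Rightarrow> nat \<Rightarrow> ('g \<Rightarrow> 'g \<Rightarrow> 'a set) set" where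
  "J2 P A \<alpha> p m k = Z2 P ((Mq A p k)\<lparr>carrier := (\<lambda>t. r_coset A (pT A p k) (t)) ` pT A p (k - m)\<rparr>) (actM \<alpha>)"

text \<open>The composite Z^2(P,A/p^kA) -> H^2(P,A/p^kA) -> H^3(P,p^kA) -> H^3(P,A):
  lift \<kappa> to a normalised 2-cochain \<kappa>' with values in A; its coboundary takes values in
  p^k A (connecting homomorphism); divide by p^k and take the class.\<close>
definition conn :: "'g monoid \<Rightarrow> 'a monoid \<Rightarrow> ('g \<Rightarrow> 'a \<Rightarrow> 'a) \<Rightarrow> nat \<Rightarrow> nat
                    \<Rightarrow> ('g \<Rightarrow> 'g \<Rightarrow> 'a set) \<Rightarrow> ('g \<Rightarrow> 'g \<Rightarrow> 'g \<Rightarrow> 'a) set" where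
  "conn P A \<alpha> p k \<kappa> = cls3 P A \<alpha> (SOME z. z \<in> C3 P A \<and>
      (\<exists>\<kappa>'\<in>C2 P A. (\<forall>g\<in>carrier P. \<forall>h\<in>carrier P. \<kappa> g h = r_coset A (pT A p k) (\<kappa>' g h))
         \<and> (\<forall>g\<in>carrier P. \<forall>h\<in>carrier P. \<forall>l\<in>carrier P.
               z g h l [^]\<^bsub>A\<^esub> (p ^ k) = d2 P A \<alpha> \<kappa>' g h l)))"


text \<open>e = 3m; M_x = A / p^(x+e) A; eta_x is the preimage of eta in K^2(P,M_x).\<close>
definition eta_x :: "'g monoid \<Rightarrow> 'a monoid \<Rightarrow> ('g \<Rightarrow> 'a \<Rightarrow> 'a) \<Rightarrow> nat \<Rightarrow> nat
     \<Rightarrow> (nat \<Rightarrow> ('g \<Rightarrow> 'g \<Rightarrow> 'a set) set) \<Rightarrow> ('g \<Rightarrow> 'g \<Rightarrow> 'g \<Rightarrow> 'a) set \<Rightarrow> nat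
     \<Rightarrow> ('g \<Rightarrow> 'g \<Rightarrow> 'a set)" where
  "eta_x P A \<alpha> p m K \<eta> x = (THE \<kappa>. \<kappa> \<in> K x \<and> conn P A \<alpha> p (x + 3 * m) \<kappa> = \<eta>)"

definition Gx :: "'g monoid \<Rightarrow> 'a monoid \<Rightarrow> ('g \<Rightarrow> 'a \<Rightarrow> 'a) \<Rightarrow> nat \<Rightarrow> nat \<Rightarrow> ('g \<Rightarrow> 'g \<Rightarrow> 'a)
     \<Rightarrow> (nat \<Rightarrow> ('g \<Rightarrow> 'g \<Rightarrow> 'a set) set) \<Rightarrow> ('g \<Rightarrow> 'g \<Rightarrow> 'g \<Rightarrow> 'a) set \<Rightarrow> nat
     \<Rightarrow> ('g \<times> 'a set) monoid" where
  "Gx P A \<alpha> p m \<rho> K \<eta> x = Ext P (Mq A p (x + 3 * m)) (actM \<alpha>)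
      (cadd2 (Mq A p (x + 3 * m)) (proj2 P A p (x + 3 * m) \<rho>) (eta_x P A \<alpha> p m K \<eta> x))"

end

theory Submission
  imports Defs
begin

text \<open>Write \<open>k = x + 3m\<close>. The cocycle of \<open>G_x\<close> is \<open>\<rho> + \<kappa>\<close> modulo \<open>p^k T\<close>, where \<open>\<kappa>\<close> lifts
  \<open>\<eta>_x \<in> J^2\<close> to a cochain with values in \<open>p^(k-m) T\<close> and \<open>d\<kappa> = p^k z\<close> for a representative \<open>z\<close>
  of \<open>\<eta>\<close>. Complements of \<open>M_x\<close> in the preimage of \<open>L\<close> correspond to 1-cochains, so that preimage
  splits iff \<open>\<rho> + \<kappa> \<equiv> df (mod p^k)\<close> on \<open>L\<close> for some \<open>f\<close>.
  If \<open>\<rho> + \<kappa> - df = p^k u\<close>, applying \<open>d\<close> and cancelling \<open>p^k\<close> in the torsion-free module \<open>T\<close> gives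
  \<open>z = du\<close> on \<open>L\<close>, i.e. \<open>res \<eta> = 0\<close>. Conversely, if \<open>z = d\<omega>\<close> on \<open>L\<close>, then \<open>\<kappa> - p^k \<omega>\<close> is \<open>p^(k-m)\<close>
  times a cocycle of \<open>L\<close>, hence a coboundary because \<open>|L|\<close> divides \<open>p^(k-m)\<close>; so \<open>\<kappa> \<equiv> dc (mod p^k)\<close>.
  Thus splitting means \<open>res \<eta> = 0\<close> and \<open>\<rho> \<equiv> db (mod p^k)\<close> on \<open>L\<close>, and by the same division
  argument a cocycle that is a coboundary modulo \<open>p^k\<close> is a coboundary. This gives (a), and (b) because
  \<open>\<rho>\<close> being a coboundary on \<open>L\<close> is exactly the splitting of the preimage of \<open>L\<close> in \<open>S\<close>.\<close>

lemma (in comm_group) mult_inv_mult_cancel: "a \<in> carrier G \<Longrightarrow> x \<in> carrier G \<Longrightarrow> y \<in> carrier G \<Longrightarrow>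
   a \<otimes> inv x \<otimes> y \<otimes> x = a \<otimes> y"
proof -
  assume c[simp]: "a \<in> carrier G" "x \<in> carrier G" "y \<in> carrier G"
  have "a \<otimes> inv x \<otimes> y \<otimes> x = a \<otimes> y \<otimes> (inv x \<otimes> x)"
    by (simp only: m_ac inv_closed m_closed c)
  also have "\<dots> = a \<otimes> y" by simp
  finally show ?thesis .
qed

lemma (in comm_group) mult_inv_mult_inv_cancel: "a \<in> carrier G \<Longrightarrow> b \<in> carrier G \<Longrightarrow> c \<in> carrier G \<Longrightarrow> d \<in> carrier G \<Longrightarrow>
   a \<otimes> inv b \<otimes> c \<otimes> inv d \<otimes> b \<otimes> d = a \<otimes> c"
proof -
  assume c[simp]: "a \<in> carrier G" "b \<in> carrier G" "c \<in> carrier G" "d \<in> carrier G"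
  have "a \<otimes> inv b \<otimes> c \<otimes> inv d \<otimes> b \<otimes> d = a \<otimes> c \<otimes> (inv b \<otimes> b) \<otimes> (inv d \<otimes> d)"
    by (simp only: m_ac inv_closed m_closed c)
  also have "\<dots> = a \<otimes> c" by simp
  finally show ?thesis .
qed

lemma (in comm_group) inv_inv_mult_cancel: "a \<in> carrier G \<Longrightarrow> b \<in> carrier G \<Longrightarrow> c \<in> carrier G \<Longrightarrow>
   inv a \<otimes> inv b \<otimes> (b \<otimes> a \<otimes> c) = c"
proof -
  assume e[simp]: "a \<in> carrier G" "b \<in> carrier G" "c \<in> carrier G"
  have "inv a \<otimes> inv b \<otimes> (b \<otimes> a \<otimes> c) = (inv a \<otimes> a) \<otimes> (inv b \<otimes> b) \<otimes> c"
    by (simp only: m_ac inv_closed m_closed e)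
  also have "\<dots> = c" by simp
  finally show ?thesis .
qed

lemma (in comm_group) mult_mult_inv_cancel: "a \<in> carrier G \<Longrightarrow> x \<in> carrier G \<Longrightarrow> a \<otimes> (x \<otimes> inv a) = x"
  by (metis inv_closed m_assoc m_comm r_inv r_one)

lemma (in comm_group) inv_mult_inv_eq:
  assumes [simp]: "a \<in> carrier G" "b \<in> carrier G" "c \<in> carrier G" "d \<in> carrier G"
  shows "a \<otimes> inv (b \<otimes> inv c) = (a \<otimes> d \<otimes> inv b) \<otimes> inv (d \<otimes> inv c)"
proof -
  have "(a \<otimes> d \<otimes> inv b) \<otimes> inv (d \<otimes> inv c) = (a \<otimes> inv b \<otimes> c) \<otimes> (d \<otimes> inv d)"
    by (simp only: inv_mult inv_inv inv_closed m_closed m_ac assms)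
  also have "\<dots> = a \<otimes> inv (b \<otimes> inv c)" by (simp add: inv_mult m_assoc)
  finally show ?thesis by simp
qed

lemma (in comm_group) mult_mult_inv_mult_eq:
  assumes [simp]: "b \<in> carrier G" "c \<in> carrier G" "d \<in> carrier G"
  shows "b \<otimes> d \<otimes> inv (b \<otimes> c) = d \<otimes> inv c"
proof -
  have "b \<otimes> d \<otimes> inv (b \<otimes> c) = (d \<otimes> inv c) \<otimes> (b \<otimes> inv b)"
    by (simp only: inv_mult inv_closed m_closed m_ac assms)
  thus ?thesis by simp
qed

section \<open>The p-adic integers are torsion-free\<close>

lemma Zp_coherent_mod:
  assumes y: "y \<in> carrier (Zp p)" shows "y (k + l) mod (int p ^ k) = y k"
proof (induction l)
  case 0
  then show ?case using y by (simp add: Zp_def)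
next
  case (Suc l)
  have pk: "int p ^ k dvd int p ^ (k + l)" by (simp add: le_imp_power_dvd)
  have "y (k + Suc l) mod (int p ^ k) = (y (Suc (k + l)) mod int p ^ (k + l)) mod (int p ^ k)"
    using pk by (simp add: mod_mod_cancel)
  also have "\<dots> = y (k + l) mod (int p ^ k)" using y by (simp add: Zp_def)
  finally show ?case using Suc by simp
qed

lemma Zp_component_torsion_free:
  assumes p: "p > 0" and y: "y \<in> carrier (Zp p)" and t: "\<forall>k. (int (p ^ j) * y k) mod (int p ^ k) = 0"
  shows "y k = 0"
proof -
  have "int p ^ (k + j) dvd int (p ^ j) * y (k + j)" using t[rule_format, of "k + j"] by (simp add: dvd_eq_mod_eq_0)
  hence "int p ^ k * int p ^ j dvd int p ^ j * y (k + j)" by (simp add: power_add of_nat_power)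
  hence d: "int p ^ k dvd y (k + j)" using p by (simp add: mult.commute)
  have "y k = y (k + j) mod (int p ^ k)" using Zp_coherent_mod[OF y] by simp
  thus ?thesis using d by simp
qed

lemma Zp_idempotent_eq_zero:
  assumes y: "y \<in> carrier (Zp p)" and e: "y \<otimes>\<^bsub>Zp p\<^esub> y = y"
  shows "y = (\<lambda>k. 0)"
proof
  fix k
  have "y k = (y k + y k) mod (int p ^ k)" using fun_cong[OF e, of k] by (simp add: Zp_def)
  moreover have "0 \<le> y k" "y k < int p ^ k" using y by (auto simp: Zp_def)
  ultimately show "y k = 0"
    by (smt (verit, ccfv_threshold) div_mod_decomp_int mod_div_trivial
        mod_eq_self_iff_div_eq_0 nonzero_mult_div_cancel_right)
qed

lemma hom_Zp_product_one:
  assumes T: "monoid T" and hom: "\<phi> \<in> hom T (product_group I (\<lambda>_. Zp p))"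
  shows "\<phi> \<one>\<^bsub>T\<^esub> = (\<lambda>i\<in>I. \<lambda>k. 0)"
proof
  let ?G = "product_group I (\<lambda>_. Zp p)"
  fix i
  have phi1: "\<phi> \<one>\<^bsub>T\<^esub> \<in> carrier ?G" using hom monoid.one_closed[OF T] by (auto simp: hom_def)
  have e: "\<phi> \<one>\<^bsub>T\<^esub> = \<phi> \<one>\<^bsub>T\<^esub> \<otimes>\<^bsub>?G\<^esub> \<phi> \<one>\<^bsub>T\<^esub>"
    using hom monoid.one_closed[OF T] monoid.l_one[OF T] by (metis hom_mult)
  show "\<phi> \<one>\<^bsub>T\<^esub> i = (\<lambda>i\<in>I. \<lambda>k. 0) i"
  proof (cases "i \<in> I")
    case True
    have "\<phi> \<one>\<^bsub>T\<^esub> i \<otimes>\<^bsub>Zp p\<^esub> \<phi> \<one>\<^bsub>T\<^esub> i = \<phi> \<one>\<^bsub>T\<^esub> i"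
      using fun_cong[OF e, of i] True by simp
    thus ?thesis using Zp_idempotent_eq_zero phi1 True by (auto simp: PiE_def Pi_def)
  qed (use phi1 in \<open>auto simp: PiE_def extensional_def\<close>)
qed

lemma hom_Zp_product_pow:
  assumes T: "monoid T" and hom: "\<phi> \<in> hom T (product_group I (\<lambda>_. Zp p))" and t: "t \<in> carrier T"
  shows "\<phi> (t [^]\<^bsub>T\<^esub> n) = (\<lambda>i\<in>I. \<lambda>k. (int n * \<phi> t i k) mod (int p ^ k))"
proof (induction n)
  case 0
  show ?case using hom_Zp_product_one[OF T hom] by simp
next
  case (Suc n)
  let ?G = "product_group I (\<lambda>_. Zp p)"
  have "\<phi> (t [^]\<^bsub>T\<^esub> Suc n) = \<phi> (t [^]\<^bsub>T\<^esub> n) \<otimes>\<^bsub>?G\<^esub> \<phi> t"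
    using t hom monoid.nat_pow_closed[OF T t] by (simp add: hom_mult)
  also have "\<dots> = (\<lambda>i\<in>I. \<lambda>k. (int (Suc n) * \<phi> t i k) mod (int p ^ k))"
    unfolding Suc
  proof
    fix i show "((\<lambda>i\<in>I. \<lambda>k. (int n * \<phi> t i k) mod (int p ^ k)) \<otimes>\<^bsub>?G\<^esub> \<phi> t) i
        = (\<lambda>i\<in>I. \<lambda>k. (int (Suc n) * \<phi> t i k) mod (int p ^ k)) i"
    proof (cases "i \<in> I")
      case True
      have "\<And>k. ((int n * \<phi> t i k) mod (int p ^ k) + \<phi> t i k) mod (int p ^ k)
                = (int (Suc n) * \<phi> t i k) mod (int p ^ k)"
        by (simp add: mod_add_left_eq distrib_right add.commute mod_add_right_eq)
      thus ?thesis using True by (simp add: Zp_def)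
    qed simp
  qed
  finally show ?case .
qed

lemma iso_Zp_product_torsion_free:
  assumes T: "comm_group T" and iso: "T \<cong> product_group I (\<lambda>_. Zp p)" and p: "p > 0"
    and t: "t \<in> carrier T" and tp: "t [^]\<^bsub>T\<^esub> (p ^ j) = \<one>\<^bsub>T\<^esub>"
  shows "t = \<one>\<^bsub>T\<^esub>"
proof -
  interpret T: comm_group T by (rule T)
  obtain \<phi> where phi: "\<phi> \<in> iso T (product_group I (\<lambda>_. Zp p))" using iso unfolding is_iso_def by blast
  have hom: "\<phi> \<in> hom T (product_group I (\<lambda>_. Zp p))" using phi by (simp add: iso_def)
  note one = hom_Zp_product_one[OF T.monoid_axioms hom]
  have "\<phi> t i = (\<lambda>i\<in>I. \<lambda>k. 0) i" for i
  proof (cases "i \<in> I")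
    case True
    have "\<phi> t \<in> carrier (product_group I (\<lambda>_. Zp p))" using hom t by (auto simp: hom_def)
    hence Zc: "\<phi> t i \<in> carrier (Zp p)" using True by (auto simp: PiE_def Pi_def)
    have "(int (p ^ j) * \<phi> t i k) mod (int p ^ k) = 0" for k
      using fun_cong[OF fun_cong[OF hom_Zp_product_pow[OF T.monoid_axioms hom t, of "p ^ j"], of i], of k]
        tp one True by simp
    hence "\<phi> t i k = 0" for k using Zp_component_torsion_free[OF p Zc] by blast
    thus ?thesis using True by auto
  next
    case False
    thus ?thesis using hom t by (auto simp: hom_def PiE_def extensional_def)
  qed
  hence "\<phi> t = \<phi> \<one>\<^bsub>T\<^esub>" using one by auto
  thus ?thesis using phi t T.one_closed by (auto simp: iso_def bij_betw_def dest: inj_onD)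
qed

section \<open>Cochains of a group acting on an abelian group\<close>

text \<open>Coboundaries tested on the carrier only, so that cochains need not vanish outside it.\<close>

definition is_coboundary2 :: "'g monoid \<Rightarrow> 'a monoid \<Rightarrow> ('g \<Rightarrow> 'a \<Rightarrow> 'a) \<Rightarrow> ('g \<Rightarrow> 'g \<Rightarrow> 'a) \<Rightarrow> bool" where
  "is_coboundary2 P A \<alpha> \<tau> \<longleftrightarrow>
     (\<exists>f\<in>C1 P A. \<forall>g\<in>carrier P. \<forall>h\<in>carrier P. \<tau> g h = d1 P A \<alpha> f g h)"

definition is_coboundary3 :: "'g monoid \<Rightarrow> 'a monoid \<Rightarrow> ('g \<Rightarrow> 'a \<Rightarrow> 'a) \<Rightarrow> ('g \<Rightarrow> 'g \<Rightarrow> 'g \<Rightarrow> 'a) \<Rightarrow> bool" where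
  "is_coboundary3 P A \<alpha> z \<longleftrightarrow>
     (\<exists>\<omega>\<in>C2 P A. \<forall>g\<in>carrier P. \<forall>h\<in>carrier P. \<forall>l\<in>carrier P. z g h l = d2 P A \<alpha> \<omega> g h l)"

lemma is_coboundary2_cong:
  "(\<And>g h. g \<in> carrier P \<Longrightarrow> h \<in> carrier P \<Longrightarrow> \<tau> g h = \<tau>' g h) \<Longrightarrow>
   is_coboundary2 P A \<alpha> \<tau> \<longleftrightarrow> is_coboundary2 P A \<alpha> \<tau>'"
  by (simp add: is_coboundary2_def)

lemma is_coboundary3_cong:
  "(\<And>g h l. g \<in> carrier P \<Longrightarrow> h \<in> carrier P \<Longrightarrow> l \<in> carrier P \<Longrightarrow> z g h l = z' g h l) \<Longrightarrow>
   is_coboundary3 P A \<alpha> z \<longleftrightarrow> is_coboundary3 P A \<alpha> z'"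
  by (simp add: is_coboundary3_def)

lemma res2_B2_iff: "res2 A L \<tau> \<in> B2 (P\<lparr>carrier := L\<rparr>) A \<alpha> \<longleftrightarrow> is_coboundary2 (P\<lparr>carrier := L\<rparr>) A \<alpha> \<tau>"
proof
  assume "res2 A L \<tau> \<in> B2 (P\<lparr>carrier := L\<rparr>) A \<alpha>"
  then obtain f where "f \<in> C1 (P\<lparr>carrier := L\<rparr>) A" and "res2 A L \<tau> = d1 (P\<lparr>carrier := L\<rparr>) A \<alpha> f"
    by (auto simp: B2_def)
  thus "is_coboundary2 (P\<lparr>carrier := L\<rparr>) A \<alpha> \<tau>"
    by (auto simp: is_coboundary2_def res2_def fun_eq_iff split: if_splits)
next
  assume "is_coboundary2 (P\<lparr>carrier := L\<rparr>) A \<alpha> \<tau>"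
  then obtain f where "f \<in> C1 (P\<lparr>carrier := L\<rparr>) A"
    and "\<And>g h. g \<in> L \<Longrightarrow> h \<in> L \<Longrightarrow> \<tau> g h = d1 (P\<lparr>carrier := L\<rparr>) A \<alpha> f g h"
    by (auto simp: is_coboundary2_def)
  moreover from this(2) have "res2 A L \<tau> = d1 (P\<lparr>carrier := L\<rparr>) A \<alpha> f"
    by (auto simp: res2_def d1_def fun_eq_iff)
  ultimately show "res2 A L \<tau> \<in> B2 (P\<lparr>carrier := L\<rparr>) A \<alpha>" by (auto simp: B2_def)
qed

locale group_module =
  fixes P :: "'g monoid" and A :: "'b monoid" and \<alpha> :: "'g \<Rightarrow> 'b \<Rightarrow> 'b"
  assumes group_P: "group P" and comm_group_A: "comm_group A"
    and act_hom: "\<And>g. g \<in> carrier P \<Longrightarrow> \<alpha> g \<in> hom A A"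
    and act_unit: "\<And>t. t \<in> carrier A \<Longrightarrow> \<alpha> \<one>\<^bsub>P\<^esub> t = t"
    and act_compose: "\<And>g h t. g \<in> carrier P \<Longrightarrow> h \<in> carrier P \<Longrightarrow> t \<in> carrier A \<Longrightarrow>
                 \<alpha> (g \<otimes>\<^bsub>P\<^esub> h) t = \<alpha> h (\<alpha> g t)"
begin

sublocale P: group P by (rule group_P)
sublocale A: comm_group A by (rule comm_group_A)

lemma act_closed[simp]: "g \<in> carrier P \<Longrightarrow> t \<in> carrier A \<Longrightarrow> \<alpha> g t \<in> carrier A"
  using act_hom by (auto simp: hom_def)

lemma act_mult[simp]: "g \<in> carrier P \<Longrightarrow> s \<in> carrier A \<Longrightarrow> t \<in> carrier A \<Longrightarrow>
   \<alpha> g (s \<otimes>\<^bsub>A\<^esub> t) = \<alpha> g s \<otimes>\<^bsub>A\<^esub> \<alpha> g t"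
  using act_hom by (auto simp: hom_def)

lemma act_group_hom: "g \<in> carrier P \<Longrightarrow> group_hom A A (\<alpha> g)"
  using act_hom by (simp add: group_hom_def group_hom_axioms_def A.is_group)

lemma act_one[simp]: "g \<in> carrier P \<Longrightarrow> \<alpha> g \<one>\<^bsub>A\<^esub> = \<one>\<^bsub>A\<^esub>"
  by (rule group_hom.hom_one[OF act_group_hom])

lemma act_inv[simp]: "g \<in> carrier P \<Longrightarrow> t \<in> carrier A \<Longrightarrow> \<alpha> g (inv\<^bsub>A\<^esub> t) = inv\<^bsub>A\<^esub> (\<alpha> g t)"
  by (rule group_hom.hom_inv[OF act_group_hom])

lemma act_pow[simp]: "g \<in> carrier P \<Longrightarrow> t \<in> carrier A \<Longrightarrow> \<alpha> g (t [^]\<^bsub>A\<^esub> (n::nat)) = (\<alpha> g t) [^]\<^bsub>A\<^esub> n"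
  by (rule group_hom.hom_nat_pow[OF act_group_hom])

lemma act_act_inv: "g \<in> carrier P \<Longrightarrow> t \<in> carrier A \<Longrightarrow> \<alpha> g (\<alpha> (inv\<^bsub>P\<^esub> g) t) = t"
proof -
  assume a: "g \<in> carrier P" "t \<in> carrier A"
  have "\<alpha> g (\<alpha> (inv\<^bsub>P\<^esub> g) t) = \<alpha> (inv\<^bsub>P\<^esub> g \<otimes>\<^bsub>P\<^esub> g) t" using act_compose[of "inv\<^bsub>P\<^esub> g" g t] a by (simp del: P.l_inv)
  also have "\<dots> = t" using a by (simp add: act_unit)
  finally show ?thesis .
qed

lemma C1_closed: "f \<in> C1 P A \<Longrightarrow> g \<in> carrier P \<Longrightarrow> f g \<in> carrier A"
  by (simp add: C1_def)
lemma C1_one: "f \<in> C1 P A \<Longrightarrow> f \<one>\<^bsub>P\<^esub> = \<one>\<^bsub>A\<^esub>"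
  by (simp add: C1_def)
lemma C2_closed: "f \<in> C2 P A \<Longrightarrow> g \<in> carrier P \<Longrightarrow> h \<in> carrier P \<Longrightarrow> f g h \<in> carrier A"
  by (simp add: C2_def)
lemma C2_out: "f \<in> C2 P A \<Longrightarrow> g \<notin> carrier P \<or> h \<notin> carrier P \<Longrightarrow> f g h = \<one>\<^bsub>A\<^esub>"
  by (simp add: C2_def)
lemma C2_one: "f \<in> C2 P A \<Longrightarrow> g \<in> carrier P \<Longrightarrow> f \<one>\<^bsub>P\<^esub> g = \<one>\<^bsub>A\<^esub> \<and> f g \<one>\<^bsub>P\<^esub> = \<one>\<^bsub>A\<^esub>"
  by (simp add: C2_def)

lemma d1_eq:
  assumes f: "\<And>g. g \<in> carrier P \<Longrightarrow> f g \<in> carrier A" and gh: "g \<in> carrier P" "h \<in> carrier P"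
  shows "d1 P A \<alpha> f g h \<otimes>\<^bsub>A\<^esub> f (g \<otimes>\<^bsub>P\<^esub> h) = f h \<otimes>\<^bsub>A\<^esub> \<alpha> h (f g)"
  using gh by (simp add: d1_def A.mult_inv_mult_cancel f)

lemma d1_closed:
  assumes f: "\<And>g. g \<in> carrier P \<Longrightarrow> f g \<in> carrier A"
  shows "d1 P A \<alpha> f g h \<in> carrier A"
  by (simp add: d1_def f)

lemma d1_unique:
  assumes f: "\<And>g. g \<in> carrier P \<Longrightarrow> f g \<in> carrier A" and gh: "g \<in> carrier P" "h \<in> carrier P"
    and w: "w \<in> carrier A" and e: "w \<otimes>\<^bsub>A\<^esub> f (g \<otimes>\<^bsub>P\<^esub> h) = f h \<otimes>\<^bsub>A\<^esub> \<alpha> h (f g)"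
  shows "d1 P A \<alpha> f g h = w"
proof -
  have "d1 P A \<alpha> f g h \<otimes>\<^bsub>A\<^esub> f (g \<otimes>\<^bsub>P\<^esub> h) = w \<otimes>\<^bsub>A\<^esub> f (g \<otimes>\<^bsub>P\<^esub> h)"
    using d1_eq[OF f gh] e by simp
  thus ?thesis using gh w f d1_closed[where f=f, OF f] by (simp del: A.r_cancel_one A.r_cancel_one')
qed

lemma d2_eq:
  assumes f: "\<And>g h. g \<in> carrier P \<Longrightarrow> h \<in> carrier P \<Longrightarrow> f g h \<in> carrier A"
    and ghk: "g \<in> carrier P" "h \<in> carrier P" "k \<in> carrier P"
  shows "d2 P A \<alpha> f g h k \<otimes>\<^bsub>A\<^esub> f (g \<otimes>\<^bsub>P\<^esub> h) k \<otimes>\<^bsub>A\<^esub> \<alpha> k (f g h)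
         = f h k \<otimes>\<^bsub>A\<^esub> f g (h \<otimes>\<^bsub>P\<^esub> k)"
  using ghk by (simp add: d2_def A.mult_inv_mult_inv_cancel f)

lemma d2_closed:
  assumes f: "\<And>g h. g \<in> carrier P \<Longrightarrow> h \<in> carrier P \<Longrightarrow> f g h \<in> carrier A"
  shows "d2 P A \<alpha> f g h k \<in> carrier A"
  by (simp add: d2_def f)

lemma d2_unique:
  assumes f: "\<And>g h. g \<in> carrier P \<Longrightarrow> h \<in> carrier P \<Longrightarrow> f g h \<in> carrier A"
    and ghk: "g \<in> carrier P" "h \<in> carrier P" "k \<in> carrier P"
    and w: "w \<in> carrier A"
    and e: "w \<otimes>\<^bsub>A\<^esub> f (g \<otimes>\<^bsub>P\<^esub> h) k \<otimes>\<^bsub>A\<^esub> \<alpha> k (f g h) = f h k \<otimes>\<^bsub>A\<^esub> f g (h \<otimes>\<^bsub>P\<^esub> k)"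
  shows "d2 P A \<alpha> f g h k = w"
proof -
  have "d2 P A \<alpha> f g h k \<otimes>\<^bsub>A\<^esub> (f (g \<otimes>\<^bsub>P\<^esub> h) k \<otimes>\<^bsub>A\<^esub> \<alpha> k (f g h))
      = w \<otimes>\<^bsub>A\<^esub> (f (g \<otimes>\<^bsub>P\<^esub> h) k \<otimes>\<^bsub>A\<^esub> \<alpha> k (f g h))"
    using d2_eq[OF f ghk] e ghk f w by (simp add: A.m_assoc d2_closed)
  thus ?thesis using ghk w f d2_closed[where f=f, OF f] by (simp del: A.r_cancel_one A.r_cancel_one')
qed

lemma d1_C2: assumes f: "f \<in> C1 P A" shows "d1 P A \<alpha> f \<in> C2 P A"
proof -
  have "d1 P A \<alpha> f \<one>\<^bsub>P\<^esub> g = \<one>\<^bsub>A\<^esub>" if "g \<in> carrier P" for g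
    using that C1_closed[OF f] C1_one[OF f] by (simp add: d1_def A.m_assoc)
  moreover have "d1 P A \<alpha> f g \<one>\<^bsub>P\<^esub> = \<one>\<^bsub>A\<^esub>" if "g \<in> carrier P" for g
    using that C1_closed[OF f] C1_one[OF f] by (simp add: d1_def act_unit)
  ultimately show ?thesis using C1_closed[OF f] by (auto simp: C2_def d1_def)
qed

lemma d2_C3: assumes f: "f \<in> C2 P A" shows "d2 P A \<alpha> f \<in> C3 P A"
proof -
  note fi = C2_closed[OF f] and f1 = C2_one[OF f]
  have "d2 P A \<alpha> f \<one>\<^bsub>P\<^esub> g h = \<one>\<^bsub>A\<^esub>" if "g \<in> carrier P" "h \<in> carrier P" for g h
    using that fi f1 by (simp add: d2_def)
  moreover have "d2 P A \<alpha> f g \<one>\<^bsub>P\<^esub> h = \<one>\<^bsub>A\<^esub>" if "g \<in> carrier P" "h \<in> carrier P" for g h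
    using that fi f1 by (simp add: d2_def A.m_assoc)
  moreover have "d2 P A \<alpha> f g h \<one>\<^bsub>P\<^esub> = \<one>\<^bsub>A\<^esub>" if "g \<in> carrier P" "h \<in> carrier P" for g h
    using that fi f1 by (simp add: d2_def act_unit A.m_assoc)
  ultimately show ?thesis using fi by (auto simp: C3_def d2_def)
qed

lemma d2_d1:
  assumes f: "\<And>g. g \<in> carrier P \<Longrightarrow> f g \<in> carrier A"
    and g: "g \<in> carrier P" and h: "h \<in> carrier P" and k: "k \<in> carrier P"
  shows "d2 P A \<alpha> (d1 P A \<alpha> f) g h k = \<one>\<^bsub>A\<^esub>"
proof (rule d2_unique[OF d1_closed[where f=f, OF f] g h k A.one_closed])
  let ?D = "d1 P A \<alpha> f"
  note [simp] = f g h k d1_closed[where f=f, OF f]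
  have e1: "?D (g \<otimes>\<^bsub>P\<^esub> h) k \<otimes>\<^bsub>A\<^esub> f (g \<otimes>\<^bsub>P\<^esub> h \<otimes>\<^bsub>P\<^esub> k) = f k \<otimes>\<^bsub>A\<^esub> \<alpha> k (f (g \<otimes>\<^bsub>P\<^esub> h))"
    by (rule d1_eq) simp_all
  have e2: "\<alpha> k (?D g h) \<otimes>\<^bsub>A\<^esub> \<alpha> k (f (g \<otimes>\<^bsub>P\<^esub> h)) = \<alpha> k (f h) \<otimes>\<^bsub>A\<^esub> \<alpha> k (\<alpha> h (f g))"
  proof -
    have "\<alpha> k (?D g h \<otimes>\<^bsub>A\<^esub> f (g \<otimes>\<^bsub>P\<^esub> h)) = \<alpha> k (f h \<otimes>\<^bsub>A\<^esub> \<alpha> h (f g))"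
      using d1_eq[where f=f, OF f g h] by simp
    thus ?thesis by simp
  qed
  have e3: "?D h k \<otimes>\<^bsub>A\<^esub> f (h \<otimes>\<^bsub>P\<^esub> k) = f k \<otimes>\<^bsub>A\<^esub> \<alpha> k (f h)"
    by (rule d1_eq) simp_all
  have e4: "?D g (h \<otimes>\<^bsub>P\<^esub> k) \<otimes>\<^bsub>A\<^esub> f (g \<otimes>\<^bsub>P\<^esub> h \<otimes>\<^bsub>P\<^esub> k) = f (h \<otimes>\<^bsub>P\<^esub> k) \<otimes>\<^bsub>A\<^esub> \<alpha> k (\<alpha> h (f g))"
    using d1_eq[where f=f and g=g and h="h \<otimes>\<^bsub>P\<^esub> k", OF f g] by (simp add: P.m_assoc act_compose)
  define x1 where "x1 = f (g \<otimes>\<^bsub>P\<^esub> h \<otimes>\<^bsub>P\<^esub> k)"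
  define x2 where "x2 = \<alpha> k (f (g \<otimes>\<^bsub>P\<^esub> h))"
  define x3 where "x3 = f (h \<otimes>\<^bsub>P\<^esub> k)"
  have [simp]: "x1 \<in> carrier A" "x2 \<in> carrier A" "x3 \<in> carrier A" by (simp_all add: x1_def x2_def x3_def)
  have "(?D (g \<otimes>\<^bsub>P\<^esub> h) k \<otimes>\<^bsub>A\<^esub> \<alpha> k (?D g h)) \<otimes>\<^bsub>A\<^esub> (x1 \<otimes>\<^bsub>A\<^esub> x2 \<otimes>\<^bsub>A\<^esub> x3)
      = (?D (g \<otimes>\<^bsub>P\<^esub> h) k \<otimes>\<^bsub>A\<^esub> x1) \<otimes>\<^bsub>A\<^esub> (\<alpha> k (?D g h) \<otimes>\<^bsub>A\<^esub> x2) \<otimes>\<^bsub>A\<^esub> x3"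
    by (simp add: A.m_ac)
  also have "\<dots> = (f k \<otimes>\<^bsub>A\<^esub> x2) \<otimes>\<^bsub>A\<^esub> (\<alpha> k (f h) \<otimes>\<^bsub>A\<^esub> \<alpha> k (\<alpha> h (f g))) \<otimes>\<^bsub>A\<^esub> x3"
    using e1 e2 by (simp add: x1_def x2_def)
  also have "\<dots> = (f k \<otimes>\<^bsub>A\<^esub> \<alpha> k (f h)) \<otimes>\<^bsub>A\<^esub> (x3 \<otimes>\<^bsub>A\<^esub> \<alpha> k (\<alpha> h (f g))) \<otimes>\<^bsub>A\<^esub> x2"
    by (simp add: A.m_ac)
  also have "\<dots> = (?D h k \<otimes>\<^bsub>A\<^esub> x3) \<otimes>\<^bsub>A\<^esub> (?D g (h \<otimes>\<^bsub>P\<^esub> k) \<otimes>\<^bsub>A\<^esub> x1) \<otimes>\<^bsub>A\<^esub> x2"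
    using e3 e4 by (simp add: x1_def x3_def)
  also have "\<dots> = (?D h k \<otimes>\<^bsub>A\<^esub> ?D g (h \<otimes>\<^bsub>P\<^esub> k)) \<otimes>\<^bsub>A\<^esub> (x1 \<otimes>\<^bsub>A\<^esub> x2 \<otimes>\<^bsub>A\<^esub> x3)"
    by (simp add: A.m_ac)
  finally have "?D (g \<otimes>\<^bsub>P\<^esub> h) k \<otimes>\<^bsub>A\<^esub> \<alpha> k (?D g h) = ?D h k \<otimes>\<^bsub>A\<^esub> ?D g (h \<otimes>\<^bsub>P\<^esub> k)"
    by (simp del: A.r_cancel_one A.r_cancel_one')
  thus "\<one>\<^bsub>A\<^esub> \<otimes>\<^bsub>A\<^esub> ?D (g \<otimes>\<^bsub>P\<^esub> h) k \<otimes>\<^bsub>A\<^esub> \<alpha> k (?D g h) = ?D h k \<otimes>\<^bsub>A\<^esub> ?D g (h \<otimes>\<^bsub>P\<^esub> k)"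
    by (simp add: A.m_assoc)
qed

lemma d1_mult:
  assumes f: "\<And>g. g \<in> carrier P \<Longrightarrow> f g \<in> carrier A" and f': "\<And>g. g \<in> carrier P \<Longrightarrow> f' g \<in> carrier A"
    and g: "g \<in> carrier P" and h: "h \<in> carrier P"
  shows "d1 P A \<alpha> (\<lambda>x. f x \<otimes>\<^bsub>A\<^esub> f' x) g h = d1 P A \<alpha> f g h \<otimes>\<^bsub>A\<^esub> d1 P A \<alpha> f' g h"
proof (rule d1_unique)
  note [simp] = f f' g h d1_closed[where f=f, OF f] d1_closed[where f=f', OF f']
  have "d1 P A \<alpha> f g h \<otimes>\<^bsub>A\<^esub> d1 P A \<alpha> f' g h \<otimes>\<^bsub>A\<^esub> (f (g \<otimes>\<^bsub>P\<^esub> h) \<otimes>\<^bsub>A\<^esub> f' (g \<otimes>\<^bsub>P\<^esub> h))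
     = (d1 P A \<alpha> f g h \<otimes>\<^bsub>A\<^esub> f (g \<otimes>\<^bsub>P\<^esub> h)) \<otimes>\<^bsub>A\<^esub> (d1 P A \<alpha> f' g h \<otimes>\<^bsub>A\<^esub> f' (g \<otimes>\<^bsub>P\<^esub> h))"
    by (simp add: A.m_ac)
  also have "\<dots> = (f h \<otimes>\<^bsub>A\<^esub> \<alpha> h (f g)) \<otimes>\<^bsub>A\<^esub> (f' h \<otimes>\<^bsub>A\<^esub> \<alpha> h (f' g))"
    by (simp add: d1_eq[where f=f, OF f g h] d1_eq[where f=f', OF f' g h])
  also have "\<dots> = (f h \<otimes>\<^bsub>A\<^esub> f' h) \<otimes>\<^bsub>A\<^esub> \<alpha> h (f g \<otimes>\<^bsub>A\<^esub> f' g)"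
    by (simp add: A.m_ac)
  finally show "d1 P A \<alpha> f g h \<otimes>\<^bsub>A\<^esub> d1 P A \<alpha> f' g h \<otimes>\<^bsub>A\<^esub> (f (g \<otimes>\<^bsub>P\<^esub> h) \<otimes>\<^bsub>A\<^esub> f' (g \<otimes>\<^bsub>P\<^esub> h))
     = (f h \<otimes>\<^bsub>A\<^esub> f' h) \<otimes>\<^bsub>A\<^esub> \<alpha> h (f g \<otimes>\<^bsub>A\<^esub> f' g)" .
qed (use f f' g h d1_closed[where f=f, OF f] d1_closed[where f=f', OF f'] in auto)

lemma d1_pow:
  assumes f: "\<And>g. g \<in> carrier P \<Longrightarrow> f g \<in> carrier A"
    and g: "g \<in> carrier P" and h: "h \<in> carrier P"
  shows "d1 P A \<alpha> (\<lambda>x. f x [^]\<^bsub>A\<^esub> (n::nat)) g h = d1 P A \<alpha> f g h [^]\<^bsub>A\<^esub> n"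
proof (rule d1_unique)
  note [simp] = f g h d1_closed[where f=f, OF f]
  have "d1 P A \<alpha> f g h [^]\<^bsub>A\<^esub> n \<otimes>\<^bsub>A\<^esub> f (g \<otimes>\<^bsub>P\<^esub> h) [^]\<^bsub>A\<^esub> n
     = (d1 P A \<alpha> f g h \<otimes>\<^bsub>A\<^esub> f (g \<otimes>\<^bsub>P\<^esub> h)) [^]\<^bsub>A\<^esub> n"
    by (simp add: A.pow_mult_distrib A.m_comm)
  also have "\<dots> = (f h \<otimes>\<^bsub>A\<^esub> \<alpha> h (f g)) [^]\<^bsub>A\<^esub> n" by (simp add: d1_eq[where f=f, OF f g h])
  also have "\<dots> = f h [^]\<^bsub>A\<^esub> n \<otimes>\<^bsub>A\<^esub> \<alpha> h (f g [^]\<^bsub>A\<^esub> n)"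
    by (simp add: A.pow_mult_distrib A.m_comm)
  finally show "d1 P A \<alpha> f g h [^]\<^bsub>A\<^esub> n \<otimes>\<^bsub>A\<^esub> f (g \<otimes>\<^bsub>P\<^esub> h) [^]\<^bsub>A\<^esub> n
     = f h [^]\<^bsub>A\<^esub> n \<otimes>\<^bsub>A\<^esub> \<alpha> h (f g [^]\<^bsub>A\<^esub> n)" .
qed (use f g h d1_closed[where f=f, OF f] in auto)

lemma d2_mult:
  assumes f: "\<And>g h. g \<in> carrier P \<Longrightarrow> h \<in> carrier P \<Longrightarrow> f g h \<in> carrier A"
    and f': "\<And>g h. g \<in> carrier P \<Longrightarrow> h \<in> carrier P \<Longrightarrow> f' g h \<in> carrier A"
    and g: "g \<in> carrier P" and h: "h \<in> carrier P" and k: "k \<in> carrier P"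
  shows "d2 P A \<alpha> (\<lambda>x y. f x y \<otimes>\<^bsub>A\<^esub> f' x y) g h k = d2 P A \<alpha> f g h k \<otimes>\<^bsub>A\<^esub> d2 P A \<alpha> f' g h k"
proof (rule d2_unique)
  note [simp] = f f' g h k d2_closed[where f=f, OF f] d2_closed[where f=f', OF f']
  have "d2 P A \<alpha> f g h k \<otimes>\<^bsub>A\<^esub> d2 P A \<alpha> f' g h k \<otimes>\<^bsub>A\<^esub> (f (g \<otimes>\<^bsub>P\<^esub> h) k \<otimes>\<^bsub>A\<^esub> f' (g \<otimes>\<^bsub>P\<^esub> h) k)
          \<otimes>\<^bsub>A\<^esub> \<alpha> k (f g h \<otimes>\<^bsub>A\<^esub> f' g h)
     = (d2 P A \<alpha> f g h k \<otimes>\<^bsub>A\<^esub> f (g \<otimes>\<^bsub>P\<^esub> h) k \<otimes>\<^bsub>A\<^esub> \<alpha> k (f g h))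
       \<otimes>\<^bsub>A\<^esub> (d2 P A \<alpha> f' g h k \<otimes>\<^bsub>A\<^esub> f' (g \<otimes>\<^bsub>P\<^esub> h) k \<otimes>\<^bsub>A\<^esub> \<alpha> k (f' g h))"
    by (simp add: A.m_ac)
  also have "\<dots> = (f h k \<otimes>\<^bsub>A\<^esub> f g (h \<otimes>\<^bsub>P\<^esub> k)) \<otimes>\<^bsub>A\<^esub> (f' h k \<otimes>\<^bsub>A\<^esub> f' g (h \<otimes>\<^bsub>P\<^esub> k))"
    by (simp add: d2_eq[where f=f, OF f g h k] d2_eq[where f=f', OF f' g h k])
  also have "\<dots> = (f h k \<otimes>\<^bsub>A\<^esub> f' h k) \<otimes>\<^bsub>A\<^esub> (f g (h \<otimes>\<^bsub>P\<^esub> k) \<otimes>\<^bsub>A\<^esub> f' g (h \<otimes>\<^bsub>P\<^esub> k))"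
    by (simp add: A.m_ac)
  finally show "d2 P A \<alpha> f g h k \<otimes>\<^bsub>A\<^esub> d2 P A \<alpha> f' g h k \<otimes>\<^bsub>A\<^esub> (f (g \<otimes>\<^bsub>P\<^esub> h) k \<otimes>\<^bsub>A\<^esub> f' (g \<otimes>\<^bsub>P\<^esub> h) k)
          \<otimes>\<^bsub>A\<^esub> \<alpha> k (f g h \<otimes>\<^bsub>A\<^esub> f' g h)
     = (f h k \<otimes>\<^bsub>A\<^esub> f' h k) \<otimes>\<^bsub>A\<^esub> (f g (h \<otimes>\<^bsub>P\<^esub> k) \<otimes>\<^bsub>A\<^esub> f' g (h \<otimes>\<^bsub>P\<^esub> k))" .
qed (use f f' g h k d2_closed[where f=f, OF f] d2_closed[where f=f', OF f'] in auto)

lemma d2_pow: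
  assumes f: "\<And>g h. g \<in> carrier P \<Longrightarrow> h \<in> carrier P \<Longrightarrow> f g h \<in> carrier A"
    and g: "g \<in> carrier P" and h: "h \<in> carrier P" and k: "k \<in> carrier P"
  shows "d2 P A \<alpha> (\<lambda>x y. f x y [^]\<^bsub>A\<^esub> (n::nat)) g h k = d2 P A \<alpha> f g h k [^]\<^bsub>A\<^esub> n"
proof (rule d2_unique)
  note [simp] = f g h k d2_closed[where f=f, OF f]
  have "d2 P A \<alpha> f g h k [^]\<^bsub>A\<^esub> n \<otimes>\<^bsub>A\<^esub> f (g \<otimes>\<^bsub>P\<^esub> h) k [^]\<^bsub>A\<^esub> n \<otimes>\<^bsub>A\<^esub> \<alpha> k (f g h [^]\<^bsub>A\<^esub> n)
     = (d2 P A \<alpha> f g h k \<otimes>\<^bsub>A\<^esub> f (g \<otimes>\<^bsub>P\<^esub> h) k \<otimes>\<^bsub>A\<^esub> \<alpha> k (f g h)) [^]\<^bsub>A\<^esub> n"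
    by (simp add: A.pow_mult_distrib A.m_comm)
  also have "\<dots> = (f h k \<otimes>\<^bsub>A\<^esub> f g (h \<otimes>\<^bsub>P\<^esub> k)) [^]\<^bsub>A\<^esub> n" by (simp add: d2_eq[where f=f, OF f g h k])
  also have "\<dots> = f h k [^]\<^bsub>A\<^esub> n \<otimes>\<^bsub>A\<^esub> f g (h \<otimes>\<^bsub>P\<^esub> k) [^]\<^bsub>A\<^esub> n"
    by (simp add: A.pow_mult_distrib A.m_comm)
  finally show "d2 P A \<alpha> f g h k [^]\<^bsub>A\<^esub> n \<otimes>\<^bsub>A\<^esub> f (g \<otimes>\<^bsub>P\<^esub> h) k [^]\<^bsub>A\<^esub> n \<otimes>\<^bsub>A\<^esub> \<alpha> k (f g h [^]\<^bsub>A\<^esub> n)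
     = f h k [^]\<^bsub>A\<^esub> n \<otimes>\<^bsub>A\<^esub> f g (h \<otimes>\<^bsub>P\<^esub> k) [^]\<^bsub>A\<^esub> n" .
qed (use f g h k d2_closed[where f=f, OF f] in auto)

lemma Z2_C2: "\<tau> \<in> Z2 P A \<alpha> \<Longrightarrow> \<tau> \<in> C2 P A" by (simp add: Z2_def)

lemma cocycle_eq:
  assumes t: "\<tau> \<in> Z2 P A \<alpha>" and g: "g \<in> carrier P" and h: "h \<in> carrier P" and k: "k \<in> carrier P"
  shows "\<tau> (g \<otimes>\<^bsub>P\<^esub> h) k \<otimes>\<^bsub>A\<^esub> \<alpha> k (\<tau> g h) = \<tau> h k \<otimes>\<^bsub>A\<^esub> \<tau> g (h \<otimes>\<^bsub>P\<^esub> k)"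
proof -
  have c: "\<And>g h. g \<in> carrier P \<Longrightarrow> h \<in> carrier P \<Longrightarrow> \<tau> g h \<in> carrier A"
    using C2_closed[OF Z2_C2[OF t]] .
  have "d2 P A \<alpha> \<tau> g h k = \<one>\<^bsub>A\<^esub>" using t g h k by (simp add: Z2_def)
  with d2_eq[where f=\<tau>, OF c g h k] show ?thesis using g h k c by (simp add: A.m_assoc)
qed

lemma group_module_subgroup: assumes L: "subgroup L P" shows "group_module (P\<lparr>carrier := L\<rparr>) A \<alpha>"
proof (rule group_module.intro)
  show "group (P\<lparr>carrier := L\<rparr>)" by (rule subgroup.subgroup_is_group[OF L group_P])
  show "comm_group A" by (rule comm_group_A)
  have sub: "L \<subseteq> carrier P" using L by (rule subgroup.subset)
  show "\<And>g. g \<in> carrier (P\<lparr>carrier := L\<rparr>) \<Longrightarrow> \<alpha> g \<in> hom A A" using sub act_hom by auto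
  show "\<And>t. t \<in> carrier A \<Longrightarrow> \<alpha> \<one>\<^bsub>P\<lparr>carrier := L\<rparr>\<^esub> t = t" using act_unit by simp
  show "\<And>g h t. g \<in> carrier (P\<lparr>carrier := L\<rparr>) \<Longrightarrow> h \<in> carrier (P\<lparr>carrier := L\<rparr>) \<Longrightarrow> t \<in> carrier A \<Longrightarrow>
     \<alpha> (g \<otimes>\<^bsub>P\<lparr>carrier := L\<rparr>\<^esub> h) t = \<alpha> h (\<alpha> g t)" using sub by (auto intro!: act_compose)
qed

lemma C1_mult: "f \<in> C1 P A \<Longrightarrow> f' \<in> C1 P A \<Longrightarrow> (\<lambda>g. f g \<otimes>\<^bsub>A\<^esub> f' g) \<in> C1 P A"
  by (simp add: C1_def)
lemma C1_pow: "f \<in> C1 P A \<Longrightarrow> (\<lambda>g. f g [^]\<^bsub>A\<^esub> (n::nat)) \<in> C1 P A"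
  by (simp add: C1_def)
lemma C1_inv: "f \<in> C1 P A \<Longrightarrow> (\<lambda>g. inv\<^bsub>A\<^esub> (f g)) \<in> C1 P A"
  by (simp add: C1_def)
lemma C2_mult: "f \<in> C2 P A \<Longrightarrow> f' \<in> C2 P A \<Longrightarrow> (\<lambda>g h. f g h \<otimes>\<^bsub>A\<^esub> f' g h) \<in> C2 P A"
  by (simp add: C2_def)
lemma C2_pow: "f \<in> C2 P A \<Longrightarrow> (\<lambda>g h. f g h [^]\<^bsub>A\<^esub> (n::nat)) \<in> C2 P A"
  by (simp add: C2_def)
lemma C2_inv: "f \<in> C2 P A \<Longrightarrow> (\<lambda>g h. inv\<^bsub>A\<^esub> (f g h)) \<in> C2 P A"
  by (simp add: C2_def)

lemma d1_cong: "(\<And>x. x \<in> carrier P \<Longrightarrow> f x = f' x) \<Longrightarrow> g \<in> carrier P \<Longrightarrow> h \<in> carrier P \<Longrightarrow>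
   d1 P A \<alpha> f g h = d1 P A \<alpha> f' g h"
  by (simp add: d1_def)
lemma d2_cong: "(\<And>x y. x \<in> carrier P \<Longrightarrow> y \<in> carrier P \<Longrightarrow> f x y = f' x y) \<Longrightarrow>
   g \<in> carrier P \<Longrightarrow> h \<in> carrier P \<Longrightarrow> k \<in> carrier P \<Longrightarrow>
   d2 P A \<alpha> f g h k = d2 P A \<alpha> f' g h k"
  by (simp add: d2_def)

lemma d1_const_one: "d1 P A \<alpha> (\<lambda>_. \<one>\<^bsub>A\<^esub>) g h = \<one>\<^bsub>A\<^esub>"
  by (simp add: d1_def)
lemma d2_const_one: "d2 P A \<alpha> (\<lambda>_ _. \<one>\<^bsub>A\<^esub>) g h k = \<one>\<^bsub>A\<^esub>"
  by (simp add: d2_def)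

lemma d1_inv:
  assumes f: "\<And>g. g \<in> carrier P \<Longrightarrow> f g \<in> carrier A" and g: "g \<in> carrier P" and h: "h \<in> carrier P"
  shows "d1 P A \<alpha> (\<lambda>x. inv\<^bsub>A\<^esub> (f x)) g h = inv\<^bsub>A\<^esub> (d1 P A \<alpha> f g h)"
proof -
  have fi: "\<And>g. g \<in> carrier P \<Longrightarrow> inv\<^bsub>A\<^esub> (f g) \<in> carrier A" using f by simp
  have "d1 P A \<alpha> (\<lambda>x. inv\<^bsub>A\<^esub> (f x)) g h \<otimes>\<^bsub>A\<^esub> d1 P A \<alpha> f g h
      = d1 P A \<alpha> (\<lambda>x. inv\<^bsub>A\<^esub> (f x) \<otimes>\<^bsub>A\<^esub> f x) g h"
    using d1_mult[where f="\<lambda>x. inv\<^bsub>A\<^esub> (f x)" and f'=f, OF fi f g h] by simp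
  also have "\<dots> = d1 P A \<alpha> (\<lambda>_. \<one>\<^bsub>A\<^esub>) g h" by (rule d1_cong) (simp_all add: f g h)
  also have "\<dots> = \<one>\<^bsub>A\<^esub>" by (rule d1_const_one)
  finally show ?thesis using A.inv_equality d1_closed[where f=f, OF f] d1_closed[where f="\<lambda>x. inv\<^bsub>A\<^esub> (f x)", OF fi]
    by metis
qed

lemma Z2I: "f \<in> C2 P A \<Longrightarrow> (\<And>g h k. g \<in> carrier P \<Longrightarrow> h \<in> carrier P \<Longrightarrow> k \<in> carrier P \<Longrightarrow>
   d2 P A \<alpha> f g h k = \<one>\<^bsub>A\<^esub>) \<Longrightarrow> f \<in> Z2 P A \<alpha>"
  by (simp add: Z2_def)

lemma Z2_d2: "f \<in> Z2 P A \<alpha> \<Longrightarrow> g \<in> carrier P \<Longrightarrow> h \<in> carrier P \<Longrightarrow> k \<in> carrier P \<Longrightarrow>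
   d2 P A \<alpha> f g h k = \<one>\<^bsub>A\<^esub>"
  by (simp add: Z2_def)

lemma Z2_mult: assumes "f \<in> Z2 P A \<alpha>" "f' \<in> Z2 P A \<alpha>" shows "(\<lambda>g h. f g h \<otimes>\<^bsub>A\<^esub> f' g h) \<in> Z2 P A \<alpha>"
proof (rule Z2I)
  show "(\<lambda>g h. f g h \<otimes>\<^bsub>A\<^esub> f' g h) \<in> C2 P A" using assms by (simp add: Z2_C2 C2_mult)
  fix g h k assume ghk: "g \<in> carrier P" "h \<in> carrier P" "k \<in> carrier P"
  have c: "\<And>g h. g \<in> carrier P \<Longrightarrow> h \<in> carrier P \<Longrightarrow> f g h \<in> carrier A"
          "\<And>g h. g \<in> carrier P \<Longrightarrow> h \<in> carrier P \<Longrightarrow> f' g h \<in> carrier A"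
    using assms by (simp_all add: Z2_C2 C2_closed)
  show "d2 P A \<alpha> (\<lambda>g h. f g h \<otimes>\<^bsub>A\<^esub> f' g h) g h k = \<one>\<^bsub>A\<^esub>"
    using d2_mult[where f=f and f'=f', OF c ghk] assms ghk by (simp add: Z2_d2)
qed

lemma d2_cocycle_mult:
  assumes \<rho>: "\<rho> \<in> Z2 P A \<alpha>" and \<kappa>: "\<And>g h. g \<in> carrier P \<Longrightarrow> h \<in> carrier P \<Longrightarrow> \<kappa> g h \<in> carrier A"
    and ghl: "g \<in> carrier P" "h \<in> carrier P" "l \<in> carrier P"
  shows "d2 P A \<alpha> (\<lambda>x y. \<rho> x y \<otimes>\<^bsub>A\<^esub> \<kappa> x y) g h l = d2 P A \<alpha> \<kappa> g h l"
  using d2_mult[OF C2_closed[OF Z2_C2[OF \<rho>]] \<kappa> ghl] Z2_d2[OF \<rho> ghl] d2_closed[where f=\<kappa>, OF \<kappa>] by simp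

lemma act_finprod:
  assumes g: "g \<in> carrier P" and S: "finite S" and f: "f \<in> S \<rightarrow> carrier A"
  shows "\<alpha> g (finprod A f S) = finprod A (\<lambda>x. \<alpha> g (f x)) S"
  using S f
proof (induction S rule: finite_induct)
  case empty thus ?case using g by simp
next
  case (insert x S)
  have fS: "f \<in> S \<rightarrow> carrier A" and fx: "f x \<in> carrier A" using insert.prems by auto
  have "finprod A f (insert x S) = f x \<otimes>\<^bsub>A\<^esub> finprod A f S"
    using insert.hyps fS fx by (simp add: A.finprod_insert)
  moreover have "finprod A (\<lambda>x. \<alpha> g (f x)) (insert x S) = \<alpha> g (f x) \<otimes>\<^bsub>A\<^esub> finprod A (\<lambda>x. \<alpha> g (f x)) S"
    using insert.hyps fS fx g by (intro A.finprod_insert) (auto simp: Pi_def)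
  ultimately show ?case using insert.IH[OF fS] g fS fx by (simp add: A.finprod_closed)
qed

lemma finprod_right_translate:
  assumes h: "h \<in> carrier P" and F: "F \<in> carrier P \<rightarrow> carrier A"
  shows "finprod A (\<lambda>g. F (g \<otimes>\<^bsub>P\<^esub> h)) (carrier P) = finprod A F (carrier P)"
proof -
  have im: "(\<lambda>g. g \<otimes>\<^bsub>P\<^esub> h) ` carrier P = carrier P"
  proof
    show "carrier P \<subseteq> (\<lambda>g. g \<otimes>\<^bsub>P\<^esub> h) ` carrier P"
    proof
      fix x assume x: "x \<in> carrier P"
      have "x = (x \<otimes>\<^bsub>P\<^esub> inv\<^bsub>P\<^esub> h) \<otimes>\<^bsub>P\<^esub> h" using x h by (simp add: P.m_assoc)
      thus "x \<in> (\<lambda>g. g \<otimes>\<^bsub>P\<^esub> h) ` carrier P" using x h by blast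
    qed
  qed (use h in auto)
  have "inj_on (\<lambda>g. g \<otimes>\<^bsub>P\<^esub> h) (carrier P)" using h by (auto simp: inj_on_def)
  thus ?thesis using A.finprod_reindex[of F "\<lambda>g. g \<otimes>\<^bsub>P\<^esub> h" "carrier P"] F im by simp
qed

lemma cocycle_pow_order_is_coboundary:
  assumes fin: "finite (carrier P)" and s: "\<sigma> \<in> Z2 P A \<alpha>"
  shows "is_coboundary2 P A \<alpha> (\<lambda>g h. \<sigma> g h [^]\<^bsub>A\<^esub> card (carrier P))"
proof -
  have sc: "\<And>g h. g \<in> carrier P \<Longrightarrow> h \<in> carrier P \<Longrightarrow> \<sigma> g h \<in> carrier A"
    using C2_closed[OF Z2_C2[OF s]] .
  have s1: "\<And>g. g \<in> carrier P \<Longrightarrow> \<sigma> \<one>\<^bsub>P\<^esub> g = \<one>\<^bsub>A\<^esub> \<and> \<sigma> g \<one>\<^bsub>P\<^esub> = \<one>\<^bsub>A\<^esub>"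
    using C2_one[OF Z2_C2[OF s]] .
  \<comment> \<open>average the cocycle identity over its first argument\<close>
  define c where "c h = (if h \<in> carrier P then finprod A (\<lambda>g. \<sigma> g h) (carrier P) else \<one>\<^bsub>A\<^esub>)" for h
  have cc: "\<And>h. c h \<in> carrier A" using sc by (simp add: c_def Pi_def)
  have c1: "c \<one>\<^bsub>P\<^esub> = \<one>\<^bsub>A\<^esub>"
  proof -
    have "finprod A (\<lambda>g. \<sigma> g \<one>\<^bsub>P\<^esub>) (carrier P) = \<one>\<^bsub>A\<^esub>"
      by (rule A.finprod_one_eqI) (simp add: s1)
    thus ?thesis by (simp add: c_def)
  qed
  have cC: "c \<in> C1 P A" unfolding C1_def using cc c1 by (auto simp del: A.finprod_closed) (auto simp: c_def)
  have "\<sigma> h k [^]\<^bsub>A\<^esub> card (carrier P) = d1 P A \<alpha> c h k" if h: "h \<in> carrier P" and k: "k \<in> carrier P" for h k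
  proof (rule d1_unique[symmetric])
    show "\<And>g. g \<in> carrier P \<Longrightarrow> c g \<in> carrier A" by (rule cc)
    show "h \<in> carrier P" "k \<in> carrier P" by (rule h, rule k)
    show "\<sigma> h k [^]\<^bsub>A\<^esub> card (carrier P) \<in> carrier A" using sc h k by simp
    have eq: "\<And>g. g \<in> carrier P \<Longrightarrow> \<sigma> (g \<otimes>\<^bsub>P\<^esub> h) k \<otimes>\<^bsub>A\<^esub> \<alpha> k (\<sigma> g h) = \<sigma> h k \<otimes>\<^bsub>A\<^esub> \<sigma> g (h \<otimes>\<^bsub>P\<^esub> k)"
      using cocycle_eq[OF s] h k by simp
    have "finprod A (\<lambda>g. \<sigma> (g \<otimes>\<^bsub>P\<^esub> h) k \<otimes>\<^bsub>A\<^esub> \<alpha> k (\<sigma> g h)) (carrier P)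
        = finprod A (\<lambda>g. \<sigma> h k \<otimes>\<^bsub>A\<^esub> \<sigma> g (h \<otimes>\<^bsub>P\<^esub> k)) (carrier P)"
      by (rule A.finprod_cong') (use eq sc h k in \<open>auto simp: Pi_def\<close>)
    moreover have "finprod A (\<lambda>g. \<sigma> (g \<otimes>\<^bsub>P\<^esub> h) k \<otimes>\<^bsub>A\<^esub> \<alpha> k (\<sigma> g h)) (carrier P)
        = finprod A (\<lambda>g. \<sigma> (g \<otimes>\<^bsub>P\<^esub> h) k) (carrier P) \<otimes>\<^bsub>A\<^esub> finprod A (\<lambda>g. \<alpha> k (\<sigma> g h)) (carrier P)"
      by (rule A.finprod_multf) (use sc h k in \<open>auto simp: Pi_def\<close>)
    moreover have "finprod A (\<lambda>g. \<sigma> (g \<otimes>\<^bsub>P\<^esub> h) k) (carrier P) = c k"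
      using finprod_right_translate[OF h, of "\<lambda>g. \<sigma> g k"] sc k by (simp add: c_def Pi_def)
    moreover have "finprod A (\<lambda>g. \<alpha> k (\<sigma> g h)) (carrier P) = \<alpha> k (c h)"
      using act_finprod[OF k fin, of "\<lambda>g. \<sigma> g h"] sc h by (simp add: c_def Pi_def)
    moreover have "finprod A (\<lambda>g. \<sigma> h k \<otimes>\<^bsub>A\<^esub> \<sigma> g (h \<otimes>\<^bsub>P\<^esub> k)) (carrier P)
        = \<sigma> h k [^]\<^bsub>A\<^esub> card (carrier P) \<otimes>\<^bsub>A\<^esub> c (h \<otimes>\<^bsub>P\<^esub> k)"
    proof -
      have "finprod A (\<lambda>g. \<sigma> h k \<otimes>\<^bsub>A\<^esub> \<sigma> g (h \<otimes>\<^bsub>P\<^esub> k)) (carrier P)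
          = finprod A (\<lambda>g. \<sigma> h k) (carrier P) \<otimes>\<^bsub>A\<^esub> finprod A (\<lambda>g. \<sigma> g (h \<otimes>\<^bsub>P\<^esub> k)) (carrier P)"
        by (rule A.finprod_multf) (use sc h k in \<open>auto simp: Pi_def\<close>)
      thus ?thesis using sc h k by (simp add: A.finprod_const c_def)
    qed
    ultimately show "\<sigma> h k [^]\<^bsub>A\<^esub> card (carrier P) \<otimes>\<^bsub>A\<^esub> c (h \<otimes>\<^bsub>P\<^esub> k) = c k \<otimes>\<^bsub>A\<^esub> \<alpha> k (c h)"
      by simp
  qed
  thus ?thesis using cC by (auto simp: is_coboundary2_def)
qed

lemma cocycle_pow_is_coboundary:
  assumes fin: "finite (carrier P)" and s: "\<sigma> \<in> Z2 P A \<alpha>" and card: "card (carrier P) = p ^ j"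
    and jN: "j \<le> N"
  shows "is_coboundary2 P A \<alpha> (\<lambda>g h. \<sigma> g h [^]\<^bsub>A\<^esub> (p ^ N))"
proof -
  obtain c where cC: "c \<in> C1 P A" and cd: "\<And>g h. g \<in> carrier P \<Longrightarrow> h \<in> carrier P \<Longrightarrow>
      \<sigma> g h [^]\<^bsub>A\<^esub> card (carrier P) = d1 P A \<alpha> c g h"
    using cocycle_pow_order_is_coboundary[OF fin s] by (auto simp: is_coboundary2_def)
  have sc: "\<And>g h. g \<in> carrier P \<Longrightarrow> h \<in> carrier P \<Longrightarrow> \<sigma> g h \<in> carrier A"
    using C2_closed[OF Z2_C2[OF s]] .
  have cc: "\<And>g. g \<in> carrier P \<Longrightarrow> c g \<in> carrier A" using C1_closed[OF cC] .
  have "\<sigma> g h [^]\<^bsub>A\<^esub> (p ^ N) = d1 P A \<alpha> (\<lambda>x. c x [^]\<^bsub>A\<^esub> (p ^ (N - j))) g h"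
    if g: "g \<in> carrier P" and h: "h \<in> carrier P" for g h
  proof -
    have "p ^ N = p ^ j * p ^ (N - j)" using jN by (simp flip: power_add)
    hence "\<sigma> g h [^]\<^bsub>A\<^esub> (p ^ N) = (\<sigma> g h [^]\<^bsub>A\<^esub> (p ^ j)) [^]\<^bsub>A\<^esub> (p ^ (N - j))"
      using sc g h by (simp add: A.nat_pow_pow)
    also have "\<dots> = d1 P A \<alpha> c g h [^]\<^bsub>A\<^esub> (p ^ (N - j))" using cd[OF g h] card by simp
    also have "\<dots> = d1 P A \<alpha> (\<lambda>x. c x [^]\<^bsub>A\<^esub> (p ^ (N - j))) g h"
      using d1_pow[where f=c, OF cc g h] by simp
    finally show ?thesis .
  qed
  moreover have "(\<lambda>x. c x [^]\<^bsub>A\<^esub> (p ^ (N - j))) \<in> C1 P A" using C1_pow[OF cC] .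
  ultimately show ?thesis unfolding is_coboundary2_def by blast
qed

lemma C2_pow_root:
  assumes s: "s \<in> C2 P A" and sp: "\<And>g h. g \<in> carrier P \<Longrightarrow> h \<in> carrier P \<Longrightarrow> s g h \<in> pT A p N"
  shows "\<exists>u\<in>C2 P A. \<forall>g\<in>carrier P. \<forall>h\<in>carrier P. s g h = u g h [^]\<^bsub>A\<^esub> (p ^ N)"
proof -
  define u where "u g h = (if g \<in> carrier P \<and> h \<in> carrier P \<and> s g h \<noteq> \<one>\<^bsub>A\<^esub>
      then (SOME v. v \<in> carrier A \<and> s g h = v [^]\<^bsub>A\<^esub> (p ^ N)) else \<one>\<^bsub>A\<^esub>)" for g h
  have ex: "\<exists>v. v \<in> carrier A \<and> s g h = v [^]\<^bsub>A\<^esub> (p ^ N)" if "g \<in> carrier P" "h \<in> carrier P" for g h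
    using sp[OF that] by (auto simp: pT_def)
  have u: "u g h \<in> carrier A \<and> s g h = u g h [^]\<^bsub>A\<^esub> (p ^ N)" if "g \<in> carrier P" "h \<in> carrier P" for g h
  proof (cases "s g h = \<one>\<^bsub>A\<^esub>")
    case True thus ?thesis by (simp add: u_def)
  next
    case False thus ?thesis using someI_ex[OF ex[OF that]] that by (simp add: u_def)
  qed
  have "u \<in> C2 P A" using u C2_one[OF s] by (auto simp: C2_def u_def)
  thus ?thesis using u by blast
qed

lemma C3_pow_root:
  assumes s: "s \<in> C3 P A"
    and sp: "\<And>g h l. g \<in> carrier P \<Longrightarrow> h \<in> carrier P \<Longrightarrow> l \<in> carrier P \<Longrightarrow> s g h l \<in> pT A p N"
  shows "\<exists>u\<in>C3 P A. \<forall>g\<in>carrier P. \<forall>h\<in>carrier P. \<forall>l\<in>carrier P. s g h l = u g h l [^]\<^bsub>A\<^esub> (p ^ N)"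
proof -
  define u where "u g h l = (if g \<in> carrier P \<and> h \<in> carrier P \<and> l \<in> carrier P \<and> s g h l \<noteq> \<one>\<^bsub>A\<^esub>
      then (SOME v. v \<in> carrier A \<and> s g h l = v [^]\<^bsub>A\<^esub> (p ^ N)) else \<one>\<^bsub>A\<^esub>)" for g h l
  have ex: "\<exists>v. v \<in> carrier A \<and> s g h l = v [^]\<^bsub>A\<^esub> (p ^ N)"
    if "g \<in> carrier P" "h \<in> carrier P" "l \<in> carrier P" for g h l
    using sp[OF that] by (auto simp: pT_def)
  have u: "u g h l \<in> carrier A \<and> s g h l = u g h l [^]\<^bsub>A\<^esub> (p ^ N)"
    if "g \<in> carrier P" "h \<in> carrier P" "l \<in> carrier P" for g h l
  proof (cases "s g h l = \<one>\<^bsub>A\<^esub>")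
    case True thus ?thesis by (simp add: u_def)
  next
    case False thus ?thesis using someI_ex[OF ex[OF that]] that by (simp add: u_def)
  qed
  have "u \<in> C3 P A" using u s by (auto simp: C3_def u_def)
  thus ?thesis using u by blast
qed

lemma d2_inv:
  assumes f: "\<And>g h. g \<in> carrier P \<Longrightarrow> h \<in> carrier P \<Longrightarrow> f g h \<in> carrier A"
    and g: "g \<in> carrier P" and h: "h \<in> carrier P" and k: "k \<in> carrier P"
  shows "d2 P A \<alpha> (\<lambda>x y. inv\<^bsub>A\<^esub> (f x y)) g h k = inv\<^bsub>A\<^esub> (d2 P A \<alpha> f g h k)"
proof -
  have fi: "\<And>g h. g \<in> carrier P \<Longrightarrow> h \<in> carrier P \<Longrightarrow> inv\<^bsub>A\<^esub> (f g h) \<in> carrier A" using f by simp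
  have "d2 P A \<alpha> (\<lambda>x y. inv\<^bsub>A\<^esub> (f x y)) g h k \<otimes>\<^bsub>A\<^esub> d2 P A \<alpha> f g h k
      = d2 P A \<alpha> (\<lambda>x y. inv\<^bsub>A\<^esub> (f x y) \<otimes>\<^bsub>A\<^esub> f x y) g h k"
    using d2_mult[where f="\<lambda>x y. inv\<^bsub>A\<^esub> (f x y)" and f'=f, OF fi f g h k] by simp
  also have "\<dots> = d2 P A \<alpha> (\<lambda>_ _. \<one>\<^bsub>A\<^esub>) g h k" by (rule d2_cong) (simp_all add: f g h k)
  also have "\<dots> = \<one>\<^bsub>A\<^esub>" by (rule d2_const_one)
  finally show ?thesis using A.inv_equality d2_closed[where f=f, OF f] d2_closed[where f="\<lambda>x y. inv\<^bsub>A\<^esub> (f x y)", OF fi]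
    by metis
qed

lemma B3_iff:
  "F \<in> B3 P A \<alpha> \<longleftrightarrow> is_coboundary3 P A \<alpha> F
     \<and> (\<forall>g h l. \<not> (g \<in> carrier P \<and> h \<in> carrier P \<and> l \<in> carrier P) \<longrightarrow> F g h l = \<one>\<^bsub>A\<^esub>)"
proof
  assume "F \<in> B3 P A \<alpha>"
  then obtain \<omega> where "\<omega> \<in> C2 P A" and "F = d2 P A \<alpha> \<omega>" by (auto simp: B3_def)
  thus "is_coboundary3 P A \<alpha> F
     \<and> (\<forall>g h l. \<not> (g \<in> carrier P \<and> h \<in> carrier P \<and> l \<in> carrier P) \<longrightarrow> F g h l = \<one>\<^bsub>A\<^esub>)"
    by (auto simp: is_coboundary3_def d2_def)
next
  assume a: "is_coboundary3 P A \<alpha> F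
     \<and> (\<forall>g h l. \<not> (g \<in> carrier P \<and> h \<in> carrier P \<and> l \<in> carrier P) \<longrightarrow> F g h l = \<one>\<^bsub>A\<^esub>)"
  then obtain \<omega> where w: "\<omega> \<in> C2 P A"
    and e: "\<forall>g\<in>carrier P. \<forall>h\<in>carrier P. \<forall>l\<in>carrier P. F g h l = d2 P A \<alpha> \<omega> g h l"
    by (auto simp: is_coboundary3_def)
  have "F = d2 P A \<alpha> \<omega>"
  proof (intro ext)
    fix g h l show "F g h l = d2 P A \<alpha> \<omega> g h l"
      using a e by (cases "g \<in> carrier P \<and> h \<in> carrier P \<and> l \<in> carrier P") (auto simp: d2_def)
  qed
  thus "F \<in> B3 P A \<alpha>" using w by (auto simp: B3_def)
qed

lemma is_coboundary3_d2_mult_iff: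
  assumes v: "v \<in> C2 P A"
    and z: "\<And>g h l. g \<in> carrier P \<Longrightarrow> h \<in> carrier P \<Longrightarrow> l \<in> carrier P \<Longrightarrow> z g h l \<in> carrier A"
  shows "is_coboundary3 P A \<alpha> (\<lambda>g h l. d2 P A \<alpha> v g h l \<otimes>\<^bsub>A\<^esub> z g h l) \<longleftrightarrow> is_coboundary3 P A \<alpha> z"
proof
  have vc: "\<And>g h. g \<in> carrier P \<Longrightarrow> h \<in> carrier P \<Longrightarrow> v g h \<in> carrier A" using C2_closed[OF v] .
  have dv: "\<And>g h l. d2 P A \<alpha> v g h l \<in> carrier A" using d2_closed[where f=v, OF vc] .
  {
    assume "is_coboundary3 P A \<alpha> (\<lambda>g h l. d2 P A \<alpha> v g h l \<otimes>\<^bsub>A\<^esub> z g h l)"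
    then obtain \<omega> where w: "\<omega> \<in> C2 P A" and e: "\<And>g h l. g \<in> carrier P \<Longrightarrow> h \<in> carrier P \<Longrightarrow> l \<in> carrier P
        \<Longrightarrow> d2 P A \<alpha> v g h l \<otimes>\<^bsub>A\<^esub> z g h l = d2 P A \<alpha> \<omega> g h l"
      by (auto simp: is_coboundary3_def)
    have "z g h l = d2 P A \<alpha> (\<lambda>x y. inv\<^bsub>A\<^esub> (v x y) \<otimes>\<^bsub>A\<^esub> \<omega> x y) g h l"
      if "g \<in> carrier P" "h \<in> carrier P" "l \<in> carrier P" for g h l
      using that e[OF that, symmetric] z[OF that] dv vc C2_closed[OF w]
      by (simp add: d2_mult d2_inv A.m_assoc[symmetric])
    thus "is_coboundary3 P A \<alpha> z"
      using C2_mult[OF C2_inv[OF v] w] by (auto simp: is_coboundary3_def)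
  }
  assume "is_coboundary3 P A \<alpha> z"
  then obtain \<omega> where w: "\<omega> \<in> C2 P A" and e: "\<And>g h l. g \<in> carrier P \<Longrightarrow> h \<in> carrier P \<Longrightarrow> l \<in> carrier P
      \<Longrightarrow> z g h l = d2 P A \<alpha> \<omega> g h l"
    by (auto simp: is_coboundary3_def)
  have "d2 P A \<alpha> v g h l \<otimes>\<^bsub>A\<^esub> z g h l = d2 P A \<alpha> (\<lambda>x y. v x y \<otimes>\<^bsub>A\<^esub> \<omega> x y) g h l"
    if "g \<in> carrier P" "h \<in> carrier P" "l \<in> carrier P" for g h l
    using that e[OF that] vc C2_closed[OF w] by (simp add: d2_mult)
  thus "is_coboundary3 P A \<alpha> (\<lambda>g h l. d2 P A \<alpha> v g h l \<otimes>\<^bsub>A\<^esub> z g h l)"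
    using C2_mult[OF v w] by (auto simp: is_coboundary3_def)
qed

lemma one_C2: "(\<lambda>_ _. \<one>\<^bsub>A\<^esub>) \<in> C2 P A" by (simp add: C2_def)
lemma one_C3: "(\<lambda>_ _ _. \<one>\<^bsub>A\<^esub>) \<in> C3 P A" by (simp add: C3_def)

lemma one_B3: "(\<lambda>_ _ _. \<one>\<^bsub>A\<^esub>) \<in> B3 P A \<alpha>"
  unfolding B3_iff is_coboundary3_def by (auto intro!: bexI[OF _ one_C2] simp: d2_const_one)

lemma one_Z3: "(\<lambda>_ _ _. \<one>\<^bsub>A\<^esub>) \<in> Z3 P A \<alpha>"
  by (simp add: Z3_def one_C3 d3_def)

lemma C3_closed: "w \<in> C3 P A \<Longrightarrow> g \<in> carrier P \<Longrightarrow> h \<in> carrier P \<Longrightarrow> l \<in> carrier P \<Longrightarrow> w g h l \<in> carrier A"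
  by (simp add: C3_def)
lemma C3_out: "w \<in> C3 P A \<Longrightarrow> \<not> (g \<in> carrier P \<and> h \<in> carrier P \<and> l \<in> carrier P) \<Longrightarrow> w g h l = \<one>\<^bsub>A\<^esub>"
  by (auto simp: C3_def)

lemma cls3_self: assumes w: "w \<in> Z3 P A \<alpha>" shows "w \<in> cls3 P A \<alpha> w"
proof -
  have wc: "w \<in> C3 P A" using w by (simp add: Z3_def)
  have "(\<lambda>g h k. w g h k \<otimes>\<^bsub>A\<^esub> inv\<^bsub>A\<^esub> (w g h k)) = (\<lambda>_ _ _. \<one>\<^bsub>A\<^esub>)"
  proof (intro ext)
    fix g h k show "w g h k \<otimes>\<^bsub>A\<^esub> inv\<^bsub>A\<^esub> (w g h k) = \<one>\<^bsub>A\<^esub>"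
      using C3_closed[OF wc] C3_out[OF wc] by (cases "g \<in> carrier P \<and> h \<in> carrier P \<and> k \<in> carrier P") auto
  qed
  thus ?thesis using w one_B3 by (simp add: cls3_def)
qed

lemma cls3_eq_zero_iff:
  assumes F: "F \<in> C3 P A"
  shows "cls3 P A \<alpha> F = cls3 P A \<alpha> (\<lambda>_ _ _. \<one>\<^bsub>A\<^esub>) \<longleftrightarrow> is_coboundary3 P A \<alpha> F"
proof
  assume "cls3 P A \<alpha> F = cls3 P A \<alpha> (\<lambda>_ _ _. \<one>\<^bsub>A\<^esub>)"
  hence "(\<lambda>_ _ _. \<one>\<^bsub>A\<^esub>) \<in> cls3 P A \<alpha> F" using cls3_self[OF one_Z3] by simp
  hence "(\<lambda>g h l. \<one>\<^bsub>A\<^esub> \<otimes>\<^bsub>A\<^esub> inv\<^bsub>A\<^esub> (F g h l)) \<in> B3 P A \<alpha>" by (simp add: cls3_def)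
  then obtain \<omega> where w: "\<omega> \<in> C2 P A" and e: "\<And>g h l. g \<in> carrier P \<Longrightarrow> h \<in> carrier P \<Longrightarrow> l \<in> carrier P
      \<Longrightarrow> \<one>\<^bsub>A\<^esub> \<otimes>\<^bsub>A\<^esub> inv\<^bsub>A\<^esub> (F g h l) = d2 P A \<alpha> \<omega> g h l"
    by (auto simp: B3_iff is_coboundary3_def)
  have "F g h l = d2 P A \<alpha> (\<lambda>x y. inv\<^bsub>A\<^esub> (\<omega> x y)) g h l"
    if "g \<in> carrier P" "h \<in> carrier P" "l \<in> carrier P" for g h l
    using that e[OF that] C3_closed[OF F that] C2_closed[OF w] by (simp add: d2_inv) (metis A.inv_inv)
  thus "is_coboundary3 P A \<alpha> F" using C2_inv[OF w] by (auto simp: is_coboundary3_def)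
next
  assume "is_coboundary3 P A \<alpha> F"
  then obtain \<omega> where w: "\<omega> \<in> C2 P A" and e: "\<And>g h l. g \<in> carrier P \<Longrightarrow> h \<in> carrier P \<Longrightarrow> l \<in> carrier P
      \<Longrightarrow> F g h l = d2 P A \<alpha> \<omega> g h l"
    by (auto simp: is_coboundary3_def)
  have "(\<lambda>g h l. v g h l \<otimes>\<^bsub>A\<^esub> inv\<^bsub>A\<^esub> (F g h l)) \<in> B3 P A \<alpha>
      \<longleftrightarrow> (\<lambda>g h l. v g h l \<otimes>\<^bsub>A\<^esub> inv\<^bsub>A\<^esub> \<one>\<^bsub>A\<^esub>) \<in> B3 P A \<alpha>" if "v \<in> Z3 P A \<alpha>" for v
  proof -
    have v: "v \<in> C3 P A" using that by (simp add: Z3_def)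
    have "is_coboundary3 P A \<alpha> (\<lambda>g h l. v g h l \<otimes>\<^bsub>A\<^esub> inv\<^bsub>A\<^esub> (F g h l))
        \<longleftrightarrow> is_coboundary3 P A \<alpha> (\<lambda>g h l. d2 P A \<alpha> (\<lambda>x y. inv\<^bsub>A\<^esub> (\<omega> x y)) g h l \<otimes>\<^bsub>A\<^esub> v g h l)"
      by (rule is_coboundary3_cong)
        (use e C3_closed[OF v] C2_closed[OF w] in \<open>simp add: d2_inv d2_closed A.m_comm\<close>)
    also have "\<dots> \<longleftrightarrow> is_coboundary3 P A \<alpha> v"
      by (rule is_coboundary3_d2_mult_iff[OF C2_inv[OF w] C3_closed[OF v]])
    also have "\<dots> \<longleftrightarrow> is_coboundary3 P A \<alpha> (\<lambda>g h l. v g h l \<otimes>\<^bsub>A\<^esub> inv\<^bsub>A\<^esub> \<one>\<^bsub>A\<^esub>)"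
      by (rule is_coboundary3_cong) (simp add: C3_closed[OF v])
    finally show ?thesis using C3_closed[OF v] C3_out[OF v] C3_out[OF F] by (simp add: B3_iff)
  qed
  thus "cls3 P A \<alpha> F = cls3 P A \<alpha> (\<lambda>_ _ _. \<one>\<^bsub>A\<^esub>)" by (auto simp: cls3_def)
qed

lemma pT_mono: "N \<le> k \<Longrightarrow> pT A p k \<subseteq> pT A p N"
proof
  fix x assume Nk: "N \<le> k" and "x \<in> pT A p k"
  then obtain t where t: "t \<in> carrier A" "x = t [^]\<^bsub>A\<^esub> (p ^ k)" by (auto simp: pT_def)
  have "p ^ k = p ^ (k - N) * p ^ N" using Nk by (simp flip: power_add)
  hence "x = (t [^]\<^bsub>A\<^esub> (p ^ (k - N))) [^]\<^bsub>A\<^esub> (p ^ N)" using t by (simp add: A.nat_pow_pow)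
  thus "x \<in> pT A p N" using t by (auto simp: pT_def)
qed

lemma pow_in_pT: "t \<in> carrier A \<Longrightarrow> t [^]\<^bsub>A\<^esub> (p ^ k) \<in> pT A p k"
  by (auto simp: pT_def)

lemma res2_C2: assumes L: "subgroup L P" and f: "f \<in> C2 P A" shows "res2 A L f \<in> C2 (P\<lparr>carrier := L\<rparr>) A"
proof -
  have sub: "L \<subseteq> carrier P" using subgroup.subset[OF L] .
  have one: "\<one>\<^bsub>P\<^esub> \<in> L" using subgroup.one_closed[OF L] .
  have a: "\<And>g h. g \<in> L \<Longrightarrow> h \<in> L \<Longrightarrow> f g h \<in> carrier A" using C2_closed[OF f] sub by blast
  have b: "\<And>g. g \<in> L \<Longrightarrow> f \<one>\<^bsub>P\<^esub> g = \<one>\<^bsub>A\<^esub> \<and> f g \<one>\<^bsub>P\<^esub> = \<one>\<^bsub>A\<^esub>" using C2_one[OF f] sub by blast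
  show ?thesis unfolding C2_def res2_def using a b one by simp
qed

lemma res3_C3: assumes L: "subgroup L P" and f: "f \<in> C3 P A" shows "res3 A L f \<in> C3 (P\<lparr>carrier := L\<rparr>) A"
proof -
  have sub: "L \<subseteq> carrier P" using subgroup.subset[OF L] .
  have one: "\<one>\<^bsub>P\<^esub> \<in> L" using subgroup.one_closed[OF L] .
  have a: "\<And>g h l. g \<in> L \<Longrightarrow> h \<in> L \<Longrightarrow> l \<in> L \<Longrightarrow> f g h l \<in> carrier A" using C3_closed[OF f] sub by blast
  have b: "\<And>g h. g \<in> L \<Longrightarrow> h \<in> L \<Longrightarrow> f \<one>\<^bsub>P\<^esub> g h = \<one>\<^bsub>A\<^esub> \<and> f g \<one>\<^bsub>P\<^esub> h = \<one>\<^bsub>A\<^esub> \<and> f g h \<one>\<^bsub>P\<^esub> = \<one>\<^bsub>A\<^esub>"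
  proof -
    fix g h assume gh: "g \<in> L" "h \<in> L"
    hence "g \<in> carrier P" "h \<in> carrier P" using sub by auto
    thus "f \<one>\<^bsub>P\<^esub> g h = \<one>\<^bsub>A\<^esub> \<and> f g \<one>\<^bsub>P\<^esub> h = \<one>\<^bsub>A\<^esub> \<and> f g h \<one>\<^bsub>P\<^esub> = \<one>\<^bsub>A\<^esub>"
      using f unfolding C3_def by blast
  qed
  show ?thesis unfolding C3_def res3_def using a b one by simp
qed

lemma d2_res2: assumes L: "subgroup L P" and g: "g \<in> L" and h: "h \<in> L" and l: "l \<in> L"
  shows "d2 (P\<lparr>carrier := L\<rparr>) A \<alpha> (res2 A L f) g h l = d2 P A \<alpha> f g h l"
proof -
  have sub: "L \<subseteq> carrier P" using subgroup.subset[OF L] .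
  have gP: "g \<in> carrier P" and hP: "h \<in> carrier P" and lP: "l \<in> carrier P" using g h l sub by auto
  have ghL: "g \<otimes>\<^bsub>P\<^esub> h \<in> L" and hlL: "h \<otimes>\<^bsub>P\<^esub> l \<in> L"
    using subgroup.m_closed[OF L] g h l by auto
  show ?thesis unfolding d2_def res2_def using g h l gP hP lP ghL hlL by simp
qed

lemma res2_Z2: assumes L: "subgroup L P" and f: "f \<in> Z2 P A \<alpha>" shows "res2 A L f \<in> Z2 (P\<lparr>carrier := L\<rparr>) A \<alpha>"
proof -
  have "d2 (P\<lparr>carrier := L\<rparr>) A \<alpha> (res2 A L f) g h k = \<one>\<^bsub>A\<^esub>" if "g \<in> L" "h \<in> L" "k \<in> L" for g h k
    using d2_res2[OF L that] Z2_d2[OF f] subgroup.subset[OF L] that by (simp add: subset_iff)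
  thus ?thesis using res2_C2[OF L Z2_C2[OF f]] by (simp add: Z2_def)
qed

lemma resH3_eq_zero_iff:
  assumes L: "subgroup L P" and \<eta>: "\<eta> \<in> H3 P A \<alpha>" and \<eta>z: "\<eta> = cls3 P A \<alpha> z" and z: "z \<in> C3 P A"
  shows "resH3 P A \<alpha> L \<eta> = cls3 (P\<lparr>carrier := L\<rparr>) A \<alpha> (\<lambda>_ _ _. \<one>\<^bsub>A\<^esub>)
         \<longleftrightarrow> is_coboundary3 (P\<lparr>carrier := L\<rparr>) A \<alpha> z"
proof -
  let ?PL = "P\<lparr>carrier := L\<rparr>"
  interpret PL: group_module ?PL A \<alpha> by (rule group_module_subgroup[OF L])
  have sub: "L \<subseteq> carrier P" using L by (rule subgroup.subset)
  define z1 where "z1 = (SOME w. w \<in> \<eta>)"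
  obtain w0 where "w0 \<in> Z3 P A \<alpha>" and "\<eta> = cls3 P A \<alpha> w0" using \<eta> by (auto simp: H3_def)
  hence "z1 \<in> \<eta>" unfolding z1_def using cls3_self by (metis someI)
  hence z1: "z1 \<in> C3 P A" and "(\<lambda>g h l. z1 g h l \<otimes>\<^bsub>A\<^esub> inv\<^bsub>A\<^esub> (z g h l)) \<in> B3 P A \<alpha>"
    using \<eta>z by (simp_all add: cls3_def Z3_def)
  then obtain v where v: "v \<in> C2 P A" and ve: "\<And>g h l. g \<in> carrier P \<Longrightarrow> h \<in> carrier P \<Longrightarrow> l \<in> carrier P
      \<Longrightarrow> z1 g h l \<otimes>\<^bsub>A\<^esub> inv\<^bsub>A\<^esub> (z g h l) = d2 P A \<alpha> v g h l"
    by (auto simp: B3_iff is_coboundary3_def)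
  have "resH3 P A \<alpha> L \<eta> = cls3 ?PL A \<alpha> (res3 A L z1)" by (simp add: resH3_def z1_def)
  hence "resH3 P A \<alpha> L \<eta> = cls3 ?PL A \<alpha> (\<lambda>_ _ _. \<one>\<^bsub>A\<^esub>) \<longleftrightarrow> is_coboundary3 ?PL A \<alpha> (res3 A L z1)"
    using PL.cls3_eq_zero_iff[OF res3_C3[OF L z1]] by simp
  also have "\<dots> \<longleftrightarrow> is_coboundary3 ?PL A \<alpha> (\<lambda>g h l. d2 ?PL A \<alpha> (res2 A L v) g h l \<otimes>\<^bsub>A\<^esub> z g h l)"
  proof (rule is_coboundary3_cong)
    fix g h l assume "g \<in> carrier ?PL" "h \<in> carrier ?PL" "l \<in> carrier ?PL"
    hence L3: "g \<in> L" "h \<in> L" "l \<in> L" and P3: "g \<in> carrier P" "h \<in> carrier P" "l \<in> carrier P"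
      using sub by auto
    have "z1 g h l = d2 P A \<alpha> v g h l \<otimes>\<^bsub>A\<^esub> z g h l"
      using A.inv_solve_right[of "d2 P A \<alpha> v g h l" "z1 g h l" "z g h l"] ve[OF P3]
        C3_closed[OF z1 P3] C3_closed[OF z P3] d2_closed[where f=v, OF C2_closed[OF v]] by metis
    thus "res3 A L z1 g h l = d2 ?PL A \<alpha> (res2 A L v) g h l \<otimes>\<^bsub>A\<^esub> z g h l"
      using L3 by (simp add: res3_def d2_res2[OF L L3])
  qed
  also have "\<dots> \<longleftrightarrow> is_coboundary3 ?PL A \<alpha> z"
    by (rule PL.is_coboundary3_d2_mult_iff[OF res2_C2[OF L v]]) (use C3_closed[OF z] sub in auto)
  finally show ?thesis .
qed

lemma pT_subgroup: "subgroup (pT A p k) A"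
proof (rule A.subgroupI)
  show "pT A p k \<subseteq> carrier A" by (auto simp: pT_def)
  show "pT A p k \<noteq> {}" by (auto simp: pT_def)
  show "\<And>a. a \<in> pT A p k \<Longrightarrow> inv\<^bsub>A\<^esub> a \<in> pT A p k"
    by (auto simp: pT_def A.nat_pow_inv[symmetric])
  show "\<And>a b. a \<in> pT A p k \<Longrightarrow> b \<in> pT A p k \<Longrightarrow> a \<otimes>\<^bsub>A\<^esub> b \<in> pT A p k"
  proof -
    fix a b assume "a \<in> pT A p k" "b \<in> pT A p k"
    then obtain s t where st: "s \<in> carrier A" "t \<in> carrier A" "a = s [^]\<^bsub>A\<^esub> (p ^ k)" "b = t [^]\<^bsub>A\<^esub> (p ^ k)"
      by (auto simp: pT_def)
    hence "a \<otimes>\<^bsub>A\<^esub> b = (s \<otimes>\<^bsub>A\<^esub> t) [^]\<^bsub>A\<^esub> (p ^ k)" by (simp add: A.pow_mult_distrib A.m_comm)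
    thus "a \<otimes>\<^bsub>A\<^esub> b \<in> pT A p k" using st by (auto simp: pT_def)
  qed
qed

lemma pT_act_stable: "g \<in> carrier P \<Longrightarrow> \<alpha> g ` pT A p k \<subseteq> pT A p k"
  by (auto simp: pT_def)

section \<open>Extensions and their splittings\<close>

lemma Ext_assoc:
  assumes t: "\<tau> \<in> Z2 P A \<alpha>" and x: "x \<in> carrier (Ext P A \<alpha> \<tau>)" and y: "y \<in> carrier (Ext P A \<alpha> \<tau>)"
    and z: "z \<in> carrier (Ext P A \<alpha> \<tau>)"
  shows "x \<otimes>\<^bsub>Ext P A \<alpha> \<tau>\<^esub> y \<otimes>\<^bsub>Ext P A \<alpha> \<tau>\<^esub> z = x \<otimes>\<^bsub>Ext P A \<alpha> \<tau>\<^esub> (y \<otimes>\<^bsub>Ext P A \<alpha> \<tau>\<^esub> z)"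
proof -
  have [simp]: "\<And>g h. g \<in> carrier P \<Longrightarrow> h \<in> carrier P \<Longrightarrow> \<tau> g h \<in> carrier A"
    using C2_closed[OF Z2_C2[OF t]] .
  obtain g a where xx: "x = (g, a)" "g \<in> carrier P" "a \<in> carrier A" using x by (auto simp: Ext_def)
  obtain h b where yy: "y = (h, b)" "h \<in> carrier P" "b \<in> carrier A" using y by (auto simp: Ext_def)
  obtain k c where zz: "z = (k, c)" "k \<in> carrier P" "c \<in> carrier A" using z by (auto simp: Ext_def)
  note [simp] = xx yy zz
  have ce: "\<tau> (g \<otimes>\<^bsub>P\<^esub> h) k \<otimes>\<^bsub>A\<^esub> \<alpha> k (\<tau> g h) = \<tau> h k \<otimes>\<^bsub>A\<^esub> \<tau> g (h \<otimes>\<^bsub>P\<^esub> k)"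
    by (rule cocycle_eq[OF t]) simp_all
  have "\<alpha> k (\<alpha> h a \<otimes>\<^bsub>A\<^esub> b \<otimes>\<^bsub>A\<^esub> \<tau> g h) \<otimes>\<^bsub>A\<^esub> c \<otimes>\<^bsub>A\<^esub> \<tau> (g \<otimes>\<^bsub>P\<^esub> h) k
     = \<alpha> k (\<alpha> h a) \<otimes>\<^bsub>A\<^esub> \<alpha> k b \<otimes>\<^bsub>A\<^esub> c \<otimes>\<^bsub>A\<^esub> (\<tau> (g \<otimes>\<^bsub>P\<^esub> h) k \<otimes>\<^bsub>A\<^esub> \<alpha> k (\<tau> g h))"
    by (simp add: A.m_ac)
  also have "\<dots> = \<alpha> k (\<alpha> h a) \<otimes>\<^bsub>A\<^esub> \<alpha> k b \<otimes>\<^bsub>A\<^esub> c \<otimes>\<^bsub>A\<^esub> (\<tau> h k \<otimes>\<^bsub>A\<^esub> \<tau> g (h \<otimes>\<^bsub>P\<^esub> k))"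
    by (simp only: ce)
  also have "\<dots> = \<alpha> (h \<otimes>\<^bsub>P\<^esub> k) a \<otimes>\<^bsub>A\<^esub> (\<alpha> k b \<otimes>\<^bsub>A\<^esub> c \<otimes>\<^bsub>A\<^esub> \<tau> h k) \<otimes>\<^bsub>A\<^esub> \<tau> g (h \<otimes>\<^bsub>P\<^esub> k)"
    by (simp add: A.m_ac act_compose)
  finally show "x \<otimes>\<^bsub>Ext P A \<alpha> \<tau>\<^esub> y \<otimes>\<^bsub>Ext P A \<alpha> \<tau>\<^esub> z = x \<otimes>\<^bsub>Ext P A \<alpha> \<tau>\<^esub> (y \<otimes>\<^bsub>Ext P A \<alpha> \<tau>\<^esub> z)"
    by (simp add: Ext_def P.m_assoc)
qed

lemma Ext_group:
  assumes t: "\<tau> \<in> Z2 P A \<alpha>"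
  shows "group (Ext P A \<alpha> \<tau>)"
proof -
  have c[simp]: "\<And>g h. g \<in> carrier P \<Longrightarrow> h \<in> carrier P \<Longrightarrow> \<tau> g h \<in> carrier A"
    using C2_closed[OF Z2_C2[OF t]] .
  have t1: "\<And>g. g \<in> carrier P \<Longrightarrow> \<tau> \<one>\<^bsub>P\<^esub> g = \<one>\<^bsub>A\<^esub> \<and> \<tau> g \<one>\<^bsub>P\<^esub> = \<one>\<^bsub>A\<^esub>"
    using C2_one[OF Z2_C2[OF t]] .
  show ?thesis
  proof (rule groupI)
    fix x y z assume "x \<in> carrier (Ext P A \<alpha> \<tau>)" "y \<in> carrier (Ext P A \<alpha> \<tau>)"
      "z \<in> carrier (Ext P A \<alpha> \<tau>)"
    thus "x \<otimes>\<^bsub>Ext P A \<alpha> \<tau>\<^esub> y \<otimes>\<^bsub>Ext P A \<alpha> \<tau>\<^esub> z = x \<otimes>\<^bsub>Ext P A \<alpha> \<tau>\<^esub> (y \<otimes>\<^bsub>Ext P A \<alpha> \<tau>\<^esub> z)"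
      by (rule Ext_assoc[OF t])
  next
    fix x y assume x: "x \<in> carrier (Ext P A \<alpha> \<tau>)" and y: "y \<in> carrier (Ext P A \<alpha> \<tau>)"
    thus "x \<otimes>\<^bsub>Ext P A \<alpha> \<tau>\<^esub> y \<in> carrier (Ext P A \<alpha> \<tau>)" by (auto simp: Ext_def)
  next
    show "\<one>\<^bsub>Ext P A \<alpha> \<tau>\<^esub> \<in> carrier (Ext P A \<alpha> \<tau>)" by (simp add: Ext_def)
  next
    fix x assume x: "x \<in> carrier (Ext P A \<alpha> \<tau>)"
    then obtain g a where xx: "x = (g, a)" "g \<in> carrier P" "a \<in> carrier A" by (auto simp: Ext_def)
    thus "\<one>\<^bsub>Ext P A \<alpha> \<tau>\<^esub> \<otimes>\<^bsub>Ext P A \<alpha> \<tau>\<^esub> x = x" using t1 by (simp add: Ext_def)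
  next
    fix x assume x: "x \<in> carrier (Ext P A \<alpha> \<tau>)"
    then obtain g a where xx: "x = (g, a)" "g \<in> carrier P" "a \<in> carrier A" by (auto simp: Ext_def)
    let ?b = "\<alpha> (inv\<^bsub>P\<^esub> g) (inv\<^bsub>A\<^esub> (a \<otimes>\<^bsub>A\<^esub> \<tau> (inv\<^bsub>P\<^esub> g) g))"
    have "(inv\<^bsub>P\<^esub> g, ?b) \<in> carrier (Ext P A \<alpha> \<tau>)" using xx by (simp add: Ext_def)
    moreover have "(inv\<^bsub>P\<^esub> g, ?b) \<otimes>\<^bsub>Ext P A \<alpha> \<tau>\<^esub> x = \<one>\<^bsub>Ext P A \<alpha> \<tau>\<^esub>"
      using xx by (simp add: Ext_def act_act_inv A.m_assoc del: act_inv)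
    ultimately show "\<exists>y\<in>carrier (Ext P A \<alpha> \<tau>). y \<otimes>\<^bsub>Ext P A \<alpha> \<tau>\<^esub> x = \<one>\<^bsub>Ext P A \<alpha> \<tau>\<^esub>" by blast
  qed
qed

lemma Ext_mult: "(g, a) \<otimes>\<^bsub>Ext P A \<alpha> \<tau>\<^esub> (h, b) = (g \<otimes>\<^bsub>P\<^esub> h, \<alpha> h a \<otimes>\<^bsub>A\<^esub> b \<otimes>\<^bsub>A\<^esub> \<tau> g h)"
  by (simp add: Ext_def)

lemma Ext_one: "\<one>\<^bsub>Ext P A \<alpha> \<tau>\<^esub> = (\<one>\<^bsub>P\<^esub>, \<one>\<^bsub>A\<^esub>)"
  by (simp add: Ext_def)

lemma Ext_complement_graph:
  assumes t: "\<tau> \<in> Z2 P A \<alpha>" and L: "subgroup L P"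
    and C: "subgroup C (Ext P A \<alpha> \<tau>)" and CY: "C \<subseteq> preim (Ext P A \<alpha> \<tau>) L"
    and CN: "C \<inter> base P A = {\<one>\<^bsub>Ext P A \<alpha> \<tau>\<^esub>}"
    and CNY: "C <#>\<^bsub>Ext P A \<alpha> \<tau>\<^esub> base P A = preim (Ext P A \<alpha> \<tau>) L"
  obtains c where "\<And>g. g \<in> L \<Longrightarrow> (g, c g) \<in> C \<and> c g \<in> carrier A"
    and "\<And>g a. (g, a) \<in> C \<Longrightarrow> a = c g"
proof -
  let ?E = "Ext P A \<alpha> \<tau>"
  interpret E: group ?E by (rule Ext_group[OF t])
  interpret C: subgroup C ?E by (rule C)
  have sub: "L \<subseteq> carrier P" using L by (rule subgroup.subset)
  have Cc: "\<And>g a. (g, a) \<in> C \<Longrightarrow> g \<in> L \<and> a \<in> carrier A"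
    using CY by (auto simp: preim_def Ext_def)
  have uniq: "a = b" if "(g, a) \<in> C" "(g, b) \<in> C" for g a b
  proof -
    let ?u = "inv\<^bsub>?E\<^esub> (g, b) \<otimes>\<^bsub>?E\<^esub> (g, a)"
    have cE: "(g, a) \<in> carrier ?E" "(g, b) \<in> carrier ?E" using that C.subset by auto
    have uC: "?u \<in> C" using that by simp
    obtain k m where um: "?u = (k, m)" by force
    have km: "k \<in> carrier P" "m \<in> carrier A" using uC C.subset um by (auto simp: Ext_def)
    have yu: "(g, b) \<otimes>\<^bsub>?E\<^esub> ?u = (g, a)" using cE by (simp add: E.m_assoc[symmetric])
    have "g \<otimes>\<^bsub>P\<^esub> k = g" using yu um by (simp add: Ext_mult)
    hence "k = \<one>\<^bsub>P\<^esub>" using Cc[OF that(1)] sub km by auto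
    hence "?u = \<one>\<^bsub>?E\<^esub>" using uC CN um km by (auto simp: base_def)
    thus ?thesis using yu cE by simp
  qed
  have ex: "\<exists>a. (g, a) \<in> C" if g: "g \<in> L" for g
  proof -
    have "(g, \<one>\<^bsub>A\<^esub>) \<in> C <#>\<^bsub>?E\<^esub> base P A" using g sub CNY by (auto simp: preim_def Ext_def)
    then obtain y m where y: "y \<in> C" and e: "(g, \<one>\<^bsub>A\<^esub>) = y \<otimes>\<^bsub>?E\<^esub> (\<one>\<^bsub>P\<^esub>, m)"
      unfolding set_mult_def base_def by blast
    obtain k a where ka: "y = (k, a)" by force
    note c = y[unfolded ka] and e = e[unfolded ka]
    have "g = k" using e Cc[OF c] sub by (auto simp: Ext_mult)
    thus ?thesis using c by blast
  qed
  define c where "c g = (THE a. (g, a) \<in> C)" for g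
  have "(g, c g) \<in> C" if "g \<in> L" for g
    unfolding c_def using ex[OF that] uniq by (metis theI)
  thus ?thesis using that Cc uniq by blast
qed

lemma coboundary_of_splits_over_Ext:
  assumes t: "\<tau> \<in> Z2 P A \<alpha>" and L: "subgroup L P"
    and split: "splits_over (Ext P A \<alpha> \<tau>) (preim (Ext P A \<alpha> \<tau>) L) (base P A)"
  shows "is_coboundary2 (P\<lparr>carrier := L\<rparr>) A \<alpha> \<tau>"
proof -
  let ?E = "Ext P A \<alpha> \<tau>" and ?PL = "P\<lparr>carrier := L\<rparr>"
  interpret PL: group_module ?PL A \<alpha> by (rule group_module_subgroup[OF L])
  obtain C where C: "subgroup C ?E" and "C \<subseteq> preim ?E L" "C \<inter> base P A = {\<one>\<^bsub>?E\<^esub>}"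
    "C <#>\<^bsub>?E\<^esub> base P A = preim ?E L"
    using split unfolding splits_over_def by blast
  then obtain c where cC: "\<And>g. g \<in> L \<Longrightarrow> (g, c g) \<in> C \<and> c g \<in> carrier A"
    and uniq: "\<And>g a. (g, a) \<in> C \<Longrightarrow> a = c g"
    using Ext_complement_graph[OF t L] by metis
  have sub: "L \<subseteq> carrier P" using L by (rule subgroup.subset)
  have c1: "c \<one>\<^bsub>P\<^esub> = \<one>\<^bsub>A\<^esub>"
    using uniq subgroup.one_closed[OF C] by (simp add: Ext_one)
  have cm: "c (g \<otimes>\<^bsub>P\<^esub> h) = \<alpha> h (c g) \<otimes>\<^bsub>A\<^esub> c h \<otimes>\<^bsub>A\<^esub> \<tau> g h" if "g \<in> L" "h \<in> L" for g h
    using uniq subgroup.m_closed[OF C cC[OF that(1), THEN conjunct1] cC[OF that(2), THEN conjunct1]]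
    by (simp add: Ext_mult)
  define f where "f g = (if g \<in> L then inv\<^bsub>A\<^esub> (c g) else \<one>\<^bsub>A\<^esub>)" for g
  have fC: "f \<in> C1 ?PL A" using cC c1 L by (auto simp: C1_def f_def subgroup.one_closed)
  have "\<tau> g h = d1 ?PL A \<alpha> f g h" if g: "g \<in> L" and h: "h \<in> L" for g h
  proof (rule PL.d1_unique[symmetric])
    have ghL: "g \<otimes>\<^bsub>P\<^esub> h \<in> L" using g h L by (simp add: subgroup.m_closed)
    have gP: "g \<in> carrier P" and hP: "h \<in> carrier P" using g h sub by auto
    note [simp] = cC[OF g] cC[OF h] cC[OF ghL] gP hP C2_closed[OF Z2_C2[OF t] gP hP]
    show "\<And>x. x \<in> carrier ?PL \<Longrightarrow> f x \<in> carrier A" using cC by (simp add: f_def)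
    show "g \<in> carrier ?PL" "h \<in> carrier ?PL" "\<tau> g h \<in> carrier A"
      using g h C2_closed[OF Z2_C2[OF t]] by simp_all
    have "\<tau> g h \<otimes>\<^bsub>A\<^esub> inv\<^bsub>A\<^esub> (c (g \<otimes>\<^bsub>P\<^esub> h)) \<otimes>\<^bsub>A\<^esub> c (g \<otimes>\<^bsub>P\<^esub> h) = \<tau> g h"
      by (simp add: A.m_assoc)
    also have "\<dots> = inv\<^bsub>A\<^esub> (c h) \<otimes>\<^bsub>A\<^esub> inv\<^bsub>A\<^esub> (\<alpha> h (c g)) \<otimes>\<^bsub>A\<^esub> c (g \<otimes>\<^bsub>P\<^esub> h)"
      using cm[OF g h] by (simp add: A.inv_inv_mult_cancel)
    finally have "\<tau> g h \<otimes>\<^bsub>A\<^esub> inv\<^bsub>A\<^esub> (c (g \<otimes>\<^bsub>P\<^esub> h)) = inv\<^bsub>A\<^esub> (c h) \<otimes>\<^bsub>A\<^esub> inv\<^bsub>A\<^esub> (\<alpha> h (c g))"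
      by (simp del: A.r_cancel_one A.r_cancel_one')
    thus "\<tau> g h \<otimes>\<^bsub>A\<^esub> f (g \<otimes>\<^bsub>?PL\<^esub> h) = f h \<otimes>\<^bsub>A\<^esub> \<alpha> h (f g)"
      using g h ghL by (simp add: f_def)
  qed
  thus ?thesis using fC by (auto simp: is_coboundary2_def)
qed

lemma Ext_section_hom:
  assumes t: "\<tau> \<in> Z2 P A \<alpha>" and L: "subgroup L P" and f: "f \<in> C1 (P\<lparr>carrier := L\<rparr>) A"
    and fd: "\<And>g h. g \<in> L \<Longrightarrow> h \<in> L \<Longrightarrow> \<tau> g h = d1 (P\<lparr>carrier := L\<rparr>) A \<alpha> f g h"
  shows "group_hom (P\<lparr>carrier := L\<rparr>) (Ext P A \<alpha> \<tau>) (\<lambda>g. (g, inv\<^bsub>A\<^esub> (f g)))"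
proof -
  let ?E = "Ext P A \<alpha> \<tau>" and ?PL = "P\<lparr>carrier := L\<rparr>"
  interpret PL: group_module ?PL A \<alpha> by (rule group_module_subgroup[OF L])
  have sub: "L \<subseteq> carrier P" using L by (rule subgroup.subset)
  have fA: "\<And>g. g \<in> L \<Longrightarrow> f g \<in> carrier A" using PL.C1_closed[OF f] by simp
  show ?thesis
  proof (intro group_hom.intro group_hom_axioms.intro homI)
    show "group ?PL" by (rule PL.P.is_group)
    show "group ?E" by (rule Ext_group[OF t])
    show "\<And>g. g \<in> carrier ?PL \<Longrightarrow> (g, inv\<^bsub>A\<^esub> (f g)) \<in> carrier ?E"
      using fA sub by (auto simp: Ext_def)
    fix g h assume "g \<in> carrier ?PL" "h \<in> carrier ?PL"
    hence gL: "g \<in> L" and hL: "h \<in> L" by simp_all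
    have ghL: "g \<otimes>\<^bsub>P\<^esub> h \<in> L" using gL hL L by (simp add: subgroup.m_closed)
    have gP: "g \<in> carrier P" and hP: "h \<in> carrier P" using gL hL sub by auto
    note [simp] = fA[OF gL] fA[OF hL] fA[OF ghL] gP hP C2_closed[OF Z2_C2[OF t] gP hP]
    have de: "\<tau> g h \<otimes>\<^bsub>A\<^esub> f (g \<otimes>\<^bsub>P\<^esub> h) = f h \<otimes>\<^bsub>A\<^esub> \<alpha> h (f g)"
      using PL.d1_eq[where f=f, of g h] fd[OF gL hL] fA gL hL by simp
    have "\<alpha> h (inv\<^bsub>A\<^esub> (f g)) \<otimes>\<^bsub>A\<^esub> inv\<^bsub>A\<^esub> (f h) \<otimes>\<^bsub>A\<^esub> \<tau> g h \<otimes>\<^bsub>A\<^esub> f (g \<otimes>\<^bsub>P\<^esub> h)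
        = inv\<^bsub>A\<^esub> (\<alpha> h (f g)) \<otimes>\<^bsub>A\<^esub> inv\<^bsub>A\<^esub> (f h) \<otimes>\<^bsub>A\<^esub> (f h \<otimes>\<^bsub>A\<^esub> \<alpha> h (f g))"
      by (simp add: A.m_assoc de)
    also have "\<dots> = inv\<^bsub>A\<^esub> (f (g \<otimes>\<^bsub>P\<^esub> h)) \<otimes>\<^bsub>A\<^esub> f (g \<otimes>\<^bsub>P\<^esub> h)"
      using A.inv_inv_mult_cancel[of "\<alpha> h (f g)" "f h" "\<one>\<^bsub>A\<^esub>"] by (simp add: A.m_ac)
    finally have "\<alpha> h (inv\<^bsub>A\<^esub> (f g)) \<otimes>\<^bsub>A\<^esub> inv\<^bsub>A\<^esub> (f h) \<otimes>\<^bsub>A\<^esub> \<tau> g h = inv\<^bsub>A\<^esub> (f (g \<otimes>\<^bsub>P\<^esub> h))"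
      by (rule A.right_cancel[THEN iffD1, rotated 3]) simp_all
    thus "(g \<otimes>\<^bsub>?PL\<^esub> h, inv\<^bsub>A\<^esub> (f (g \<otimes>\<^bsub>?PL\<^esub> h)))
        = (g, inv\<^bsub>A\<^esub> (f g)) \<otimes>\<^bsub>?E\<^esub> (h, inv\<^bsub>A\<^esub> (f h))"
      by (simp add: Ext_mult)
  qed
qed

lemma splits_over_Ext_of_coboundary:
  assumes t: "\<tau> \<in> Z2 P A \<alpha>" and L: "subgroup L P" and cob: "is_coboundary2 (P\<lparr>carrier := L\<rparr>) A \<alpha> \<tau>"
  shows "splits_over (Ext P A \<alpha> \<tau>) (preim (Ext P A \<alpha> \<tau>) L) (base P A)"
proof -
  let ?E = "Ext P A \<alpha> \<tau>" and ?PL = "P\<lparr>carrier := L\<rparr>"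
  interpret PL: group_module ?PL A \<alpha> by (rule group_module_subgroup[OF L])
  obtain f where f: "f \<in> C1 ?PL A" and fd: "\<And>g h. g \<in> L \<Longrightarrow> h \<in> L \<Longrightarrow> \<tau> g h = d1 ?PL A \<alpha> f g h"
    using cob by (auto simp: is_coboundary2_def)
  define s where "s g = (g, inv\<^bsub>A\<^esub> (f g))" for g
  have fA: "\<And>g. g \<in> L \<Longrightarrow> f g \<in> carrier A" using PL.C1_closed[OF f] by simp
  have f1: "f \<one>\<^bsub>P\<^esub> = \<one>\<^bsub>A\<^esub>" using PL.C1_one[OF f] by simp
  have sub: "L \<subseteq> carrier P" using L by (rule subgroup.subset)
  have t1: "\<And>g. g \<in> carrier P \<Longrightarrow> \<tau> g \<one>\<^bsub>P\<^esub> = \<one>\<^bsub>A\<^esub>" using C2_one[OF Z2_C2[OF t]] by blast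
  have "s ` L <#>\<^bsub>?E\<^esub> base P A = preim ?E L"
  proof
    show "s ` L <#>\<^bsub>?E\<^esub> base P A \<subseteq> preim ?E L"
      using fA sub t1 by (auto simp: set_mult_def s_def base_def preim_def Ext_def)
    show "preim ?E L \<subseteq> s ` L <#>\<^bsub>?E\<^esub> base P A"
    proof
      fix x assume "x \<in> preim ?E L"
      then obtain g a where x: "x = (g, a)" and g: "g \<in> L" and a: "a \<in> carrier A"
        by (auto simp: preim_def Ext_def)
      have "x = s g \<otimes>\<^bsub>?E\<^esub> (\<one>\<^bsub>P\<^esub>, f g \<otimes>\<^bsub>A\<^esub> a)"
        using x fA[OF g] a g sub t1 act_unit by (auto simp: s_def Ext_mult A.m_assoc[symmetric])
      moreover have "(\<one>\<^bsub>P\<^esub>, f g \<otimes>\<^bsub>A\<^esub> a) \<in> base P A" using fA[OF g] a by (simp add: base_def)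
      ultimately show "x \<in> s ` L <#>\<^bsub>?E\<^esub> base P A" using g unfolding set_mult_def by blast
    qed
  qed
  moreover have "s ` L \<inter> base P A = {\<one>\<^bsub>?E\<^esub>}"
    using f1 subgroup.one_closed[OF L] by (auto simp: s_def base_def Ext_one image_iff)
  moreover have "subgroup (s ` L) ?E"
    using group_hom.img_is_subgroup[OF Ext_section_hom[OF t L f fd]] by (simp add: s_def)
  moreover have "s ` L \<subseteq> preim ?E L" using fA sub by (auto simp: s_def preim_def Ext_def)
  ultimately show ?thesis unfolding splits_over_def by blast
qed

lemma splits_over_Ext_iff:
  assumes "\<tau> \<in> Z2 P A \<alpha>" and "subgroup L P"
  shows "splits_over (Ext P A \<alpha> \<tau>) (preim (Ext P A \<alpha> \<tau>) L) (base P A) \<longleftrightarrow>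
         is_coboundary2 (P\<lparr>carrier := L\<rparr>) A \<alpha> \<tau>"
  using coboundary_of_splits_over_Ext[OF assms] splits_over_Ext_of_coboundary[OF assms] by blast

end

section \<open>Quotients by \<open>p^k A\<close> and the connecting homomorphism\<close>

locale quotient_module = group_module +
  fixes H
  assumes H_subgroup: "subgroup H A" and H_act_stable: "\<And>g. g \<in> carrier P \<Longrightarrow> \<alpha> g ` H \<subseteq> H"
begin

sublocale H: normal H A using A.subgroup_imp_normal[OF H_subgroup] by simp

abbreviation "cst t \<equiv> H #>\<^bsub>A\<^esub> t"

lemma H_subset: "H \<subseteq> carrier A" by (rule subgroup.subset[OF H_subgroup])

lemma H_act_eq: "g \<in> carrier P \<Longrightarrow> \<alpha> g ` H = H"
proof
  assume g: "g \<in> carrier P"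
  show "\<alpha> g ` H \<subseteq> H" using H_act_stable[OF g] .
  show "H \<subseteq> \<alpha> g ` H"
  proof
    fix x assume x: "x \<in> H"
    hence "\<alpha> (inv\<^bsub>P\<^esub> g) x \<in> H" using H_act_stable[of "inv\<^bsub>P\<^esub> g"] g by auto
    moreover have "\<alpha> g (\<alpha> (inv\<^bsub>P\<^esub> g) x) = x" using act_act_inv g x H_subset by auto
    ultimately show "x \<in> \<alpha> g ` H" by (metis image_eqI)
  qed
qed

lemma cst_act: "g \<in> carrier P \<Longrightarrow> t \<in> carrier A \<Longrightarrow> actM \<alpha> g (cst t) = cst (\<alpha> g t)"
proof -
  assume g: "g \<in> carrier P" and t: "t \<in> carrier A"
  have "actM \<alpha> g (cst t) = (\<lambda>h. \<alpha> g h \<otimes>\<^bsub>A\<^esub> \<alpha> g t) ` H"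
    using g t H_subset by (auto simp: actM_def r_coset_def image_iff)
  also have "\<dots> = (\<lambda>h. h \<otimes>\<^bsub>A\<^esub> \<alpha> g t) ` (\<alpha> g ` H)" by (simp add: image_image)
  also have "\<dots> = cst (\<alpha> g t)" using H_act_eq[OF g] by (auto simp: r_coset_def)
  finally show ?thesis .
qed

lemma quotient_comm_group: "comm_group (A Mod H)" by (rule A.abelian_FactGroup[OF H_subgroup])

lemma quotient_carrier: "carrier (A Mod H) = cst ` carrier A" by (rule carrier_FactGroup)

lemma cst_closed: "t \<in> carrier A \<Longrightarrow> cst t \<in> carrier (A Mod H)" by (simp add: quotient_carrier)

lemma cst_inv: "a \<in> carrier A \<Longrightarrow> inv\<^bsub>A Mod H\<^esub> (cst a) = cst (inv\<^bsub>A\<^esub> a)"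
  by (simp add: H.inv_FactGroup cst_closed H.rcos_inv)

lemma cst_one: "cst \<one>\<^bsub>A\<^esub> = \<one>\<^bsub>A Mod H\<^esub>"
  using A.coset_join2[OF A.one_closed H_subgroup] H_subgroup by (simp add: subgroup.one_closed)

lemma cst_eq_iff: "a \<in> carrier A \<Longrightarrow> b \<in> carrier A \<Longrightarrow> cst a = cst b \<longleftrightarrow> a \<otimes>\<^bsub>A\<^esub> inv\<^bsub>A\<^esub> b \<in> H"
proof
  assume a: "a \<in> carrier A" and b: "b \<in> carrier A"
  { assume "cst a = cst b"
    hence "a \<in> cst b" using A.rcos_self[OF a H_subgroup] by simp
    thus "a \<otimes>\<^bsub>A\<^esub> inv\<^bsub>A\<^esub> b \<in> H" using subgroup.rcos_module_imp[OF H_subgroup A.is_group b] by simp }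
  { assume "a \<otimes>\<^bsub>A\<^esub> inv\<^bsub>A\<^esub> b \<in> H"
    hence "a \<in> cst b" using subgroup.rcos_module_rev[OF H_subgroup A.is_group b a] by simp
    thus "cst a = cst b" using A.repr_independence[OF _ b H_subgroup] by simp }
qed

lemma cst_eq_one_iff: "a \<in> carrier A \<Longrightarrow> cst a = \<one>\<^bsub>A Mod H\<^esub> \<longleftrightarrow> a \<in> H"
  using cst_eq_iff[of a "\<one>\<^bsub>A\<^esub>"] cst_one by simp

lemma quotient_group_module: "group_module P (A Mod H) (actM \<alpha>)"
proof (rule group_module.intro)
  show "group P" by (rule group_P)
  show "comm_group (A Mod H)" by (rule quotient_comm_group)
  show "actM \<alpha> g \<in> hom (A Mod H) (A Mod H)" if g: "g \<in> carrier P" for g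
  proof (unfold hom_def, intro CollectI conjI ballI)
    show "actM \<alpha> g \<in> carrier (A Mod H) \<rightarrow> carrier (A Mod H)"
      using g by (auto simp: quotient_carrier cst_act)
    fix U V assume "U \<in> carrier (A Mod H)" "V \<in> carrier (A Mod H)"
    then obtain a b where U: "U = cst a" "a \<in> carrier A" and V: "V = cst b" "b \<in> carrier A"
      by (auto simp: quotient_carrier)
    show "actM \<alpha> g (U \<otimes>\<^bsub>A Mod H\<^esub> V) = actM \<alpha> g U \<otimes>\<^bsub>A Mod H\<^esub> actM \<alpha> g V"
      using U V g by (simp add: H.rcos_sum cst_act)
  qed
  show "actM \<alpha> \<one>\<^bsub>P\<^esub> U = U" if "U \<in> carrier (A Mod H)" for U
    using that act_unit by (auto simp: quotient_carrier cst_act)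
  show "actM \<alpha> (g \<otimes>\<^bsub>P\<^esub> h) U = actM \<alpha> h (actM \<alpha> g U)"
    if "g \<in> carrier P" "h \<in> carrier P" "U \<in> carrier (A Mod H)" for g h U
    using that act_compose by (auto simp: quotient_carrier cst_act)
qed

sublocale M: group_module P "A Mod H" "actM \<alpha>" by (rule quotient_group_module)

lemma d1_cst:
  assumes f: "\<And>g. g \<in> carrier P \<Longrightarrow> f g \<in> carrier A" and g: "g \<in> carrier P" and h: "h \<in> carrier P"
  shows "d1 P (A Mod H) (actM \<alpha>) (\<lambda>x. cst (f x)) g h = cst (d1 P A \<alpha> f g h)"
  using f g h by (simp add: d1_def cst_inv cst_act H.rcos_sum)

lemma d2_cst:
  assumes f: "\<And>g h. g \<in> carrier P \<Longrightarrow> h \<in> carrier P \<Longrightarrow> f g h \<in> carrier A"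
    and g: "g \<in> carrier P" and h: "h \<in> carrier P" and k: "k \<in> carrier P"
  shows "d2 P (A Mod H) (actM \<alpha>) (\<lambda>x y. cst (f x y)) g h k = cst (d2 P A \<alpha> f g h k)"
  using f g h k by (simp add: d2_def cst_inv cst_act H.rcos_sum)

lemma C2_quotient_lift:
  assumes k: "\<kappa> \<in> C2 P (A Mod H)"
  shows "\<exists>\<kappa>'\<in>C2 P A. \<forall>g\<in>carrier P. \<forall>h\<in>carrier P. \<kappa> g h = cst (\<kappa>' g h)"
proof -
  \<comment> \<open>lifting the trivial class to \<open>\<one>\<close> keeps the lift normalised\<close>
  define \<kappa>' where "\<kappa>' g h = (if g \<in> carrier P \<and> h \<in> carrier P \<and> \<kappa> g h \<noteq> H
      then (SOME t. t \<in> carrier A \<and> \<kappa> g h = cst t) else \<one>\<^bsub>A\<^esub>)" for g h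
  have ex: "\<exists>t. t \<in> carrier A \<and> \<kappa> g h = cst t" if "g \<in> carrier P" "h \<in> carrier P" for g h
    using M.C2_closed[OF k that] by (auto simp: quotient_carrier)
  have kk: "\<kappa>' g h \<in> carrier A \<and> \<kappa> g h = cst (\<kappa>' g h)" if "g \<in> carrier P" "h \<in> carrier P" for g h
  proof (cases "\<kappa> g h = H")
    case True thus ?thesis using cst_one that by (simp add: \<kappa>'_def)
  next
    case False
    have P: "(SOME t. t \<in> carrier A \<and> \<kappa> g h = cst t) \<in> carrier A \<and> \<kappa> g h = cst (SOME t. t \<in> carrier A \<and> \<kappa> g h = cst t)"
      by (rule someI_ex[OF ex[OF that]])
    have eq: "\<kappa>' g h = (SOME t. t \<in> carrier A \<and> \<kappa> g h = cst t)" using False that by (simp add: \<kappa>'_def)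
    show ?thesis unfolding eq by (rule P)
  qed
  have o1: "\<kappa>' g h = \<one>\<^bsub>A\<^esub>" if "g \<notin> carrier P \<or> h \<notin> carrier P" for g h
    using that by (auto simp: \<kappa>'_def)
  have o2: "\<kappa>' \<one>\<^bsub>P\<^esub> g = \<one>\<^bsub>A\<^esub> \<and> \<kappa>' g \<one>\<^bsub>P\<^esub> = \<one>\<^bsub>A\<^esub>" if "g \<in> carrier P" for g
  proof -
    have "\<kappa> \<one>\<^bsub>P\<^esub> g = H" "\<kappa> g \<one>\<^bsub>P\<^esub> = H" using M.C2_one[OF k that] by simp_all
    thus ?thesis unfolding \<kappa>'_def by simp
  qed
  have "\<kappa>' \<in> C2 P A" unfolding C2_def using kk o1 o2 by blast
  thus ?thesis using kk by blast
qed

lemma C1_quotient_lift: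
  assumes f: "f \<in> C1 P (A Mod H)"
  shows "\<exists>f'\<in>C1 P A. \<forall>g\<in>carrier P. f g = cst (f' g)"
proof -
  define f' where "f' g = (if g \<in> carrier P \<and> f g \<noteq> H
      then (SOME t. t \<in> carrier A \<and> f g = cst t) else \<one>\<^bsub>A\<^esub>)" for g
  have ex: "\<exists>t. t \<in> carrier A \<and> f g = cst t" if "g \<in> carrier P" for g
    using M.C1_closed[OF f that] by (auto simp: quotient_carrier)
  have ff: "f' g \<in> carrier A \<and> f g = cst (f' g)" if "g \<in> carrier P" for g
  proof (cases "f g = H")
    case True thus ?thesis using cst_one that by (simp add: f'_def)
  next
    case False
    have P: "(SOME t. t \<in> carrier A \<and> f g = cst t) \<in> carrier A \<and> f g = cst (SOME t. t \<in> carrier A \<and> f g = cst t)"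
      by (rule someI_ex[OF ex[OF that]])
    have eq: "f' g = (SOME t. t \<in> carrier A \<and> f g = cst t)" using False that by (simp add: f'_def)
    show ?thesis unfolding eq by (rule P)
  qed
  have o1: "f' g = \<one>\<^bsub>A\<^esub>" if "g \<notin> carrier P" for g using that by (simp add: f'_def)
  have o2: "f' \<one>\<^bsub>P\<^esub> = \<one>\<^bsub>A\<^esub>"
  proof -
    have "f \<one>\<^bsub>P\<^esub> = H" using M.C1_one[OF f] by simp
    thus ?thesis unfolding f'_def by simp
  qed
  have "f' \<in> C1 P A" unfolding C1_def using ff o1 o2 by blast
  thus ?thesis using ff by blast
qed

lemma Z2_quotient:
  assumes r: "\<rho> \<in> Z2 P A \<alpha>"
  shows "(\<lambda>g h. cst (\<rho> g h)) \<in> Z2 P (A Mod H) (actM \<alpha>)"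
proof (rule M.Z2I)
  have rc: "\<And>g h. g \<in> carrier P \<Longrightarrow> h \<in> carrier P \<Longrightarrow> \<rho> g h \<in> carrier A" using C2_closed[OF Z2_C2[OF r]] .
  show "(\<lambda>g h. cst (\<rho> g h)) \<in> C2 P (A Mod H)"
  proof -
    have a: "\<forall>g\<in>carrier P. \<forall>h\<in>carrier P. cst (\<rho> g h) \<in> carrier (A Mod H)" using rc cst_closed by blast
    have b: "\<forall>g h. (g \<notin> carrier P \<or> h \<notin> carrier P) \<longrightarrow> cst (\<rho> g h) = \<one>\<^bsub>A Mod H\<^esub>"
      using C2_out[OF Z2_C2[OF r]] cst_one by simp
    have c: "\<forall>g\<in>carrier P. cst (\<rho> \<one>\<^bsub>P\<^esub> g) = \<one>\<^bsub>A Mod H\<^esub> \<and> cst (\<rho> g \<one>\<^bsub>P\<^esub>) = \<one>\<^bsub>A Mod H\<^esub>"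
      using C2_one[OF Z2_C2[OF r]] cst_one by simp
    show ?thesis unfolding C2_def using a b c by blast
  qed
  fix g h k assume ghk: "g \<in> carrier P" "h \<in> carrier P" "k \<in> carrier P"
  show "d2 P (A Mod H) (actM \<alpha>) (\<lambda>g h. cst (\<rho> g h)) g h k = \<one>\<^bsub>A Mod H\<^esub>"
    using d2_cst[where f=\<rho>, OF rc ghk] Z2_d2[OF r ghk] cst_one by simp
qed

lemma quotient_module_subgroup: "subgroup L P \<Longrightarrow> quotient_module (P\<lparr>carrier := L\<rparr>) A \<alpha> H"
  by (intro quotient_module.intro quotient_module_axioms.intro group_module_subgroup)
    (use H_subgroup H_act_stable subgroup.subset in auto)

lemma C1_quotient: "f \<in> C1 P A \<Longrightarrow> (\<lambda>g. cst (f g)) \<in> C1 P (A Mod H)"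
  by (auto simp: C1_def cst_closed cst_one)

lemma is_coboundary2_quotient_iff:
  assumes \<tau>: "\<And>g h. g \<in> carrier P \<Longrightarrow> h \<in> carrier P \<Longrightarrow> \<tau> g h \<in> carrier A"
  shows "is_coboundary2 P (A Mod H) (actM \<alpha>) (\<lambda>g h. cst (\<tau> g h)) \<longleftrightarrow>
         (\<exists>f\<in>C1 P A. \<forall>g\<in>carrier P. \<forall>h\<in>carrier P. \<tau> g h \<otimes>\<^bsub>A\<^esub> inv\<^bsub>A\<^esub> (d1 P A \<alpha> f g h) \<in> H)"
proof
  assume "is_coboundary2 P (A Mod H) (actM \<alpha>) (\<lambda>g h. cst (\<tau> g h))"
  then obtain F where F: "F \<in> C1 P (A Mod H)" and Fd: "\<And>g h. g \<in> carrier P \<Longrightarrow> h \<in> carrier P \<Longrightarrow>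
      cst (\<tau> g h) = d1 P (A Mod H) (actM \<alpha>) F g h"
    by (auto simp: is_coboundary2_def)
  obtain f where f: "f \<in> C1 P A" and Ff: "\<forall>g\<in>carrier P. F g = cst (f g)"
    using C1_quotient_lift[OF F] by blast
  have "\<tau> g h \<otimes>\<^bsub>A\<^esub> inv\<^bsub>A\<^esub> (d1 P A \<alpha> f g h) \<in> H" if "g \<in> carrier P" "h \<in> carrier P" for g h
  proof -
    have "cst (\<tau> g h) = d1 P (A Mod H) (actM \<alpha>) (\<lambda>x. cst (f x)) g h"
      using Fd[OF that] M.d1_cong[of F "\<lambda>x. cst (f x)", OF _ that] Ff by simp
    also have "\<dots> = cst (d1 P A \<alpha> f g h)" using d1_cst[OF C1_closed[OF f] that] .
    finally show ?thesis using cst_eq_iff \<tau>[OF that] d1_closed[where f=f, OF C1_closed[OF f]] by simp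
  qed
  thus "\<exists>f\<in>C1 P A. \<forall>g\<in>carrier P. \<forall>h\<in>carrier P. \<tau> g h \<otimes>\<^bsub>A\<^esub> inv\<^bsub>A\<^esub> (d1 P A \<alpha> f g h) \<in> H"
    using f by blast
next
  assume "\<exists>f\<in>C1 P A. \<forall>g\<in>carrier P. \<forall>h\<in>carrier P. \<tau> g h \<otimes>\<^bsub>A\<^esub> inv\<^bsub>A\<^esub> (d1 P A \<alpha> f g h) \<in> H"
  then obtain f where f: "f \<in> C1 P A"
    and fH: "\<And>g h. g \<in> carrier P \<Longrightarrow> h \<in> carrier P \<Longrightarrow> \<tau> g h \<otimes>\<^bsub>A\<^esub> inv\<^bsub>A\<^esub> (d1 P A \<alpha> f g h) \<in> H"
    by blast
  have "cst (\<tau> g h) = d1 P (A Mod H) (actM \<alpha>) (\<lambda>x. cst (f x)) g h" if "g \<in> carrier P" "h \<in> carrier P" for g h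
    using fH[OF that] cst_eq_iff \<tau>[OF that] d1_closed[where f=f, OF C1_closed[OF f]] d1_cst[OF C1_closed[OF f] that]
    by simp
  thus "is_coboundary2 P (A Mod H) (actM \<alpha>) (\<lambda>g h. cst (\<tau> g h))"
    using C1_quotient[OF f] by (auto simp: is_coboundary2_def)
qed

end

context group_module begin

lemma quotient_module_pT: "quotient_module P A \<alpha> (pT A p k)"
  by (rule quotient_module.intro[OF group_module_axioms]) (simp add: quotient_module_axioms_def pT_subgroup pT_act_stable)

lemma conn_lift:
  assumes \<kappa>: "\<kappa> \<in> Z2 P (A Mod pT A p n) (actM \<alpha>)"
  obtains \<kappa>' z where "\<kappa>' \<in> C2 P A"
    and "\<And>g h. g \<in> carrier P \<Longrightarrow> h \<in> carrier P \<Longrightarrow> \<kappa> g h = pT A p n #>\<^bsub>A\<^esub> \<kappa>' g h"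
    and "z \<in> C3 P A"
    and "\<And>g h l. g \<in> carrier P \<Longrightarrow> h \<in> carrier P \<Longrightarrow> l \<in> carrier P \<Longrightarrow>
           z g h l [^]\<^bsub>A\<^esub> (p ^ n) = d2 P A \<alpha> \<kappa>' g h l"
    and "conn P A \<alpha> p n \<kappa> = cls3 P A \<alpha> z"
proof -
  interpret Q: quotient_module P A \<alpha> "pT A p n" by (rule quotient_module_pT)
  let ?lifts = "\<lambda>z. z \<in> C3 P A \<and> (\<exists>\<kappa>'\<in>C2 P A.
      (\<forall>g\<in>carrier P. \<forall>h\<in>carrier P. \<kappa> g h = r_coset A (pT A p n) (\<kappa>' g h))
    \<and> (\<forall>g\<in>carrier P. \<forall>h\<in>carrier P. \<forall>l\<in>carrier P. z g h l [^]\<^bsub>A\<^esub> (p ^ n) = d2 P A \<alpha> \<kappa>' g h l))"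
  have "\<exists>z. ?lifts z"
  proof -
    obtain \<kappa>' where k': "\<kappa>' \<in> C2 P A" and ke: "\<forall>g\<in>carrier P. \<forall>h\<in>carrier P. \<kappa> g h = Q.cst (\<kappa>' g h)"
      using Q.C2_quotient_lift[OF Q.M.Z2_C2[OF \<kappa>]] by blast
    have kc: "\<And>g h. g \<in> carrier P \<Longrightarrow> h \<in> carrier P \<Longrightarrow> \<kappa>' g h \<in> carrier A" using C2_closed[OF k'] .
    have "d2 P A \<alpha> \<kappa>' g h l \<in> pT A p n"
      if "g \<in> carrier P" "h \<in> carrier P" "l \<in> carrier P" for g h l
    proof -
      have "Q.cst (d2 P A \<alpha> \<kappa>' g h l) = d2 P (A Mod pT A p n) (actM \<alpha>) \<kappa> g h l"
        using Q.d2_cst[where f=\<kappa>', OF kc that] Q.M.d2_cong[of \<kappa> "\<lambda>x y. Q.cst (\<kappa>' x y)", OF _ that] ke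
        by simp
      thus ?thesis using Q.M.Z2_d2[OF \<kappa> that] Q.cst_eq_one_iff[OF d2_closed[where f=\<kappa>', OF kc]] by simp
    qed
    then obtain z where "z \<in> C3 P A"
      and "\<forall>g\<in>carrier P. \<forall>h\<in>carrier P. \<forall>l\<in>carrier P. d2 P A \<alpha> \<kappa>' g h l = z g h l [^]\<^bsub>A\<^esub> (p ^ n)"
      using C3_pow_root[OF d2_C3[OF k']] by blast
    thus ?thesis using k' ke by (intro exI[of _ z] conjI bexI[of _ \<kappa>']) auto
  qed
  hence "?lifts (SOME z. ?lifts z)" by (rule someI_ex)
  moreover have "conn P A \<alpha> p n \<kappa> = cls3 P A \<alpha> (SOME z. ?lifts z)" by (simp add: conn_def)
  ultimately show ?thesis using that by blast
qed

end

section \<open>Torsion-free modules over finite \<open>p\<close>-groups\<close>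

locale torsion_free_module = group_module +
  fixes p :: nat
  assumes p_torsion_free: "\<And>t j. t \<in> carrier A \<Longrightarrow> t [^]\<^bsub>A\<^esub> (p ^ j) = \<one>\<^bsub>A\<^esub> \<Longrightarrow> t = \<one>\<^bsub>A\<^esub>"
begin

lemma pow_p_inj:
  assumes a: "a \<in> carrier A" and b: "b \<in> carrier A" and e: "a [^]\<^bsub>A\<^esub> (p ^ j) = b [^]\<^bsub>A\<^esub> (p ^ j)"
  shows "a = b"
proof -
  have "(a \<otimes>\<^bsub>A\<^esub> inv\<^bsub>A\<^esub> b) [^]\<^bsub>A\<^esub> (p ^ j) = a [^]\<^bsub>A\<^esub> (p ^ j) \<otimes>\<^bsub>A\<^esub> inv\<^bsub>A\<^esub> (b [^]\<^bsub>A\<^esub> (p ^ j))"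
    using a b by (simp add: A.pow_mult_distrib A.m_comm A.nat_pow_inv)
  also have "\<dots> = \<one>\<^bsub>A\<^esub>" using e b by simp
  finally have "a \<otimes>\<^bsub>A\<^esub> inv\<^bsub>A\<^esub> b = \<one>\<^bsub>A\<^esub>" using p_torsion_free a b by simp
  thus ?thesis using a b by (metis A.inv_equality A.inv_inv A.inv_closed A.m_comm)
qed

lemma torsion_free_module_subgroup: "subgroup L P \<Longrightarrow> torsion_free_module (P\<lparr>carrier := L\<rparr>) A \<alpha> p"
  by (rule torsion_free_module.intro[OF group_module_subgroup]) (simp_all add: torsion_free_module_axioms_def p_torsion_free)

lemma root_difference_Z2:
  assumes \<kappa>0: "\<kappa>0 \<in> C2 P A" and \<omega>: "\<omega> \<in> C2 P A"
    and d: "\<And>g h l. g \<in> carrier P \<Longrightarrow> h \<in> carrier P \<Longrightarrow> l \<in> carrier P \<Longrightarrow>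
             d2 P A \<alpha> \<omega> g h l [^]\<^bsub>A\<^esub> (p ^ (N + M)) = d2 P A \<alpha> (\<lambda>x y. \<kappa>0 x y [^]\<^bsub>A\<^esub> (p ^ N)) g h l"
  shows "(\<lambda>g h. \<kappa>0 g h \<otimes>\<^bsub>A\<^esub> inv\<^bsub>A\<^esub> (\<omega> g h [^]\<^bsub>A\<^esub> (p ^ M))) \<in> Z2 P A \<alpha>"
proof -
  define \<sigma> where "\<sigma> g h = \<kappa>0 g h \<otimes>\<^bsub>A\<^esub> inv\<^bsub>A\<^esub> (\<omega> g h [^]\<^bsub>A\<^esub> (p ^ M))" for g h
  have \<sigma>C: "\<sigma> \<in> C2 P A" unfolding \<sigma>_def by (intro C2_mult C2_inv C2_pow \<kappa>0 \<omega>)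
  have \<omega>c: "\<And>g h. g \<in> carrier P \<Longrightarrow> h \<in> carrier P \<Longrightarrow> \<omega> g h \<in> carrier A" using C2_closed[OF \<omega>] .
  have \<sigma>c: "\<And>g h. g \<in> carrier P \<Longrightarrow> h \<in> carrier P \<Longrightarrow> \<sigma> g h \<in> carrier A" using C2_closed[OF \<sigma>C] .
  have "d2 P A \<alpha> \<sigma> g h l = \<one>\<^bsub>A\<^esub>" if g: "g \<in> carrier P" and h: "h \<in> carrier P" and l: "l \<in> carrier P" for g h l
  proof -
    have d\<sigma>c: "d2 P A \<alpha> \<sigma> g h l \<in> carrier A" and d\<omega>c: "d2 P A \<alpha> \<omega> g h l \<in> carrier A"
      using d2_closed[where f=\<sigma>, OF \<sigma>c] d2_closed[where f=\<omega>, OF \<omega>c] by auto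
    have "d2 P A \<alpha> (\<lambda>x y. \<kappa>0 x y [^]\<^bsub>A\<^esub> (p ^ N)) g h l
        = d2 P A \<alpha> (\<lambda>x y. (\<sigma> x y \<otimes>\<^bsub>A\<^esub> \<omega> x y [^]\<^bsub>A\<^esub> (p ^ M)) [^]\<^bsub>A\<^esub> (p ^ N)) g h l"
      by (rule d2_cong) (use \<omega>c C2_closed[OF \<kappa>0] in \<open>simp_all add: \<sigma>_def A.m_assoc g h l\<close>)
    also have "\<dots> = (d2 P A \<alpha> \<sigma> g h l \<otimes>\<^bsub>A\<^esub> d2 P A \<alpha> \<omega> g h l [^]\<^bsub>A\<^esub> (p ^ M)) [^]\<^bsub>A\<^esub> (p ^ N)"
      using \<sigma>c \<omega>c g h l by (simp add: d2_pow d2_mult)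
    also have "\<dots> = d2 P A \<alpha> \<sigma> g h l [^]\<^bsub>A\<^esub> (p ^ N) \<otimes>\<^bsub>A\<^esub> d2 P A \<alpha> \<omega> g h l [^]\<^bsub>A\<^esub> (p ^ (N + M))"
      using d\<sigma>c d\<omega>c by (simp add: A.pow_mult_distrib A.m_comm A.nat_pow_pow power_add mult.commute)
    finally have "d2 P A \<alpha> \<sigma> g h l [^]\<^bsub>A\<^esub> (p ^ N) = \<one>\<^bsub>A\<^esub>"
      using d[OF g h l] d\<sigma>c d\<omega>c by (metis A.nat_pow_closed A.r_cancel_one')
    thus ?thesis using p_torsion_free d\<sigma>c by blast
  qed
  hence "\<sigma> \<in> Z2 P A \<alpha>" using \<sigma>C by (simp add: Z2_def)
  thus ?thesis by (simp add: \<sigma>_def[abs_def])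
qed

lemma congruent_to_coboundary_of_d2_pow:
  assumes fin: "finite (carrier P)" and card: "card (carrier P) = p ^ j" and jN: "j \<le> N" and Nk: "N \<le> k"
    and \<kappa>: "\<kappa> \<in> C2 P A" and \<kappa>_div: "\<And>g h. g \<in> carrier P \<Longrightarrow> h \<in> carrier P \<Longrightarrow> \<kappa> g h \<in> pT A p N"
    and z: "\<And>g h l. g \<in> carrier P \<Longrightarrow> h \<in> carrier P \<Longrightarrow> l \<in> carrier P \<Longrightarrow>
             z g h l \<in> carrier A \<and> z g h l [^]\<^bsub>A\<^esub> (p ^ k) = d2 P A \<alpha> \<kappa> g h l"
    and z_cob: "is_coboundary3 P A \<alpha> z"
  shows "\<exists>c\<in>C1 P A. \<forall>g\<in>carrier P. \<forall>h\<in>carrier P. \<kappa> g h \<otimes>\<^bsub>A\<^esub> inv\<^bsub>A\<^esub> (d1 P A \<alpha> c g h) \<in> pT A p k"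
proof -
  obtain M where k: "k = N + M" using Nk le_Suc_ex by blast
  obtain \<omega> where \<omega>: "\<omega> \<in> C2 P A"
    and z\<omega>: "\<forall>g\<in>carrier P. \<forall>h\<in>carrier P. \<forall>l\<in>carrier P. z g h l = d2 P A \<alpha> \<omega> g h l"
    using z_cob unfolding is_coboundary3_def by blast
  have "\<exists>\<kappa>0\<in>C2 P A. \<forall>g\<in>carrier P. \<forall>h\<in>carrier P. \<kappa> g h = \<kappa>0 g h [^]\<^bsub>A\<^esub> (p ^ N)"
    by (rule C2_pow_root[OF \<kappa> \<kappa>_div])
  then obtain \<kappa>0 where \<kappa>0: "\<kappa>0 \<in> C2 P A" and \<kappa>0e: "\<forall>g\<in>carrier P. \<forall>h\<in>carrier P. \<kappa> g h = \<kappa>0 g h [^]\<^bsub>A\<^esub> (p ^ N)"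
    by blast
  \<comment> \<open>\<open>\<sigma> = \<kappa>/p^N - p^M \<omega>\<close> is a cocycle, so \<open>p^N \<sigma>\<close> is a coboundary\<close>
  let ?\<sigma> = "\<lambda>g h. \<kappa>0 g h \<otimes>\<^bsub>A\<^esub> inv\<^bsub>A\<^esub> (\<omega> g h [^]\<^bsub>A\<^esub> (p ^ M))"
  have "?\<sigma> \<in> Z2 P A \<alpha>"
  proof (rule root_difference_Z2[OF \<kappa>0 \<omega>])
    fix g h l assume ghl: "g \<in> carrier P" "h \<in> carrier P" "l \<in> carrier P"
    have "d2 P A \<alpha> (\<lambda>x y. \<kappa>0 x y [^]\<^bsub>A\<^esub> (p ^ N)) g h l = d2 P A \<alpha> \<kappa> g h l"
      by (rule d2_cong) (use \<kappa>0e ghl in simp_all)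
    thus "d2 P A \<alpha> \<omega> g h l [^]\<^bsub>A\<^esub> (p ^ (N + M)) = d2 P A \<alpha> (\<lambda>x y. \<kappa>0 x y [^]\<^bsub>A\<^esub> (p ^ N)) g h l"
      using z\<omega>[rule_format, OF ghl] z[OF ghl] k by simp
  qed
  hence "is_coboundary2 P A \<alpha> (\<lambda>g h. ?\<sigma> g h [^]\<^bsub>A\<^esub> (p ^ N))"
    by (rule cocycle_pow_is_coboundary[OF fin _ card jN])
  then obtain c where c: "c \<in> C1 P A" and cd: "\<And>g h. g \<in> carrier P \<Longrightarrow> h \<in> carrier P \<Longrightarrow>
      ?\<sigma> g h [^]\<^bsub>A\<^esub> (p ^ N) = d1 P A \<alpha> c g h"
    unfolding is_coboundary2_def by blast
  have "\<kappa> g h \<otimes>\<^bsub>A\<^esub> inv\<^bsub>A\<^esub> (d1 P A \<alpha> c g h) \<in> pT A p k" if "g \<in> carrier P" "h \<in> carrier P" for g h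
  proof -
    have \<omega>c: "\<omega> g h \<in> carrier A" and \<kappa>0c: "\<kappa>0 g h \<in> carrier A"
      using C2_closed[OF \<omega> that] C2_closed[OF \<kappa>0 that] .
    have "\<kappa> g h = (?\<sigma> g h \<otimes>\<^bsub>A\<^esub> \<omega> g h [^]\<^bsub>A\<^esub> (p ^ M)) [^]\<^bsub>A\<^esub> (p ^ N)"
      using \<kappa>0e that \<omega>c \<kappa>0c by (simp add: A.m_assoc)
    also have "\<dots> = d1 P A \<alpha> c g h \<otimes>\<^bsub>A\<^esub> \<omega> g h [^]\<^bsub>A\<^esub> (p ^ k)"
      using cd[OF that, symmetric] \<omega>c \<kappa>0c
      by (simp add: k A.pow_mult_distrib A.m_comm A.nat_pow_pow power_add mult.commute)
    finally have "\<kappa> g h \<otimes>\<^bsub>A\<^esub> inv\<^bsub>A\<^esub> (d1 P A \<alpha> c g h) = \<omega> g h [^]\<^bsub>A\<^esub> (p ^ k)"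
      using A.inv_solve_right[of "\<omega> g h [^]\<^bsub>A\<^esub> (p ^ k)" "\<kappa> g h" "d1 P A \<alpha> c g h"] \<omega>c
        d1_closed[where f=c, OF C1_closed[OF c]] A.m_comm C2_closed[OF \<kappa> that] by simp
    thus ?thesis using pow_in_pT \<omega>c by simp
  qed
  thus ?thesis using c by blast
qed

lemma is_coboundary3_of_pow_eq_d2:
  assumes \<kappa>: "\<kappa> \<in> C2 P A" and f: "f \<in> C1 P A"
    and cong: "\<And>g h. g \<in> carrier P \<Longrightarrow> h \<in> carrier P \<Longrightarrow> \<kappa> g h \<otimes>\<^bsub>A\<^esub> inv\<^bsub>A\<^esub> (d1 P A \<alpha> f g h) \<in> pT A p k"
    and z: "\<And>g h l. g \<in> carrier P \<Longrightarrow> h \<in> carrier P \<Longrightarrow> l \<in> carrier P \<Longrightarrow>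
             z g h l \<in> carrier A \<and> z g h l [^]\<^bsub>A\<^esub> (p ^ k) = d2 P A \<alpha> \<kappa> g h l"
  shows "is_coboundary3 P A \<alpha> z"
proof -
  have \<kappa>c: "\<And>g h. g \<in> carrier P \<Longrightarrow> h \<in> carrier P \<Longrightarrow> \<kappa> g h \<in> carrier A" using C2_closed[OF \<kappa>] .
  have fc: "\<And>g. g \<in> carrier P \<Longrightarrow> f g \<in> carrier A" using C1_closed[OF f] .
  have dfc: "\<And>g h. d1 P A \<alpha> f g h \<in> carrier A" using d1_closed[where f=f, OF fc] .
  have "\<exists>u\<in>C2 P A. \<forall>g\<in>carrier P. \<forall>h\<in>carrier P. \<kappa> g h \<otimes>\<^bsub>A\<^esub> inv\<^bsub>A\<^esub> (d1 P A \<alpha> f g h) = u g h [^]\<^bsub>A\<^esub> (p ^ k)"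
    by (rule C2_pow_root) (use C2_mult[OF \<kappa> C2_inv[OF d1_C2[OF f]]] cong in simp_all)
  then obtain u where u: "u \<in> C2 P A"
    and ue: "\<forall>g\<in>carrier P. \<forall>h\<in>carrier P. \<kappa> g h \<otimes>\<^bsub>A\<^esub> inv\<^bsub>A\<^esub> (d1 P A \<alpha> f g h) = u g h [^]\<^bsub>A\<^esub> (p ^ k)"
    by blast
  note ue = ue[rule_format]
  have uc: "\<And>g h. g \<in> carrier P \<Longrightarrow> h \<in> carrier P \<Longrightarrow> u g h \<in> carrier A" using C2_closed[OF u] .
  have \<kappa>u: "\<kappa> g h = d1 P A \<alpha> f g h \<otimes>\<^bsub>A\<^esub> u g h [^]\<^bsub>A\<^esub> (p ^ k)" if "g \<in> carrier P" "h \<in> carrier P" for g h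
    using A.mult_mult_inv_cancel[of "d1 P A \<alpha> f g h" "\<kappa> g h"] ue[OF that] \<kappa>c[OF that] dfc by simp
  have "z g h l = d2 P A \<alpha> u g h l" if g: "g \<in> carrier P" and h: "h \<in> carrier P" and l: "l \<in> carrier P" for g h l
  proof -
    have "d2 P A \<alpha> \<kappa> g h l = d2 P A \<alpha> (\<lambda>x y. d1 P A \<alpha> f x y \<otimes>\<^bsub>A\<^esub> u x y [^]\<^bsub>A\<^esub> (p ^ k)) g h l"
      by (rule d2_cong) (simp_all add: \<kappa>u g h l)
    also have "\<dots> = d2 P A \<alpha> (d1 P A \<alpha> f) g h l \<otimes>\<^bsub>A\<^esub> d2 P A \<alpha> (\<lambda>x y. u x y [^]\<^bsub>A\<^esub> (p ^ k)) g h l"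
      by (rule d2_mult) (use dfc uc g h l in simp_all)
    also have "\<dots> = d2 P A \<alpha> u g h l [^]\<^bsub>A\<^esub> (p ^ k)"
      using d2_d1[where f=f, OF fc g h l] d2_pow[where f=u, OF uc g h l] d2_closed[where f=u, OF uc] by simp
    finally show ?thesis using z[OF g h l] d2_closed[where f=u, OF uc] by (auto intro: pow_p_inj[where j=k])
  qed
  thus ?thesis using u by (auto simp: is_coboundary3_def)
qed

lemma is_coboundary2_of_congruent_coboundary:
  assumes fin: "finite (carrier P)" and card: "card (carrier P) = p ^ j" and jk: "j \<le> k"
    and \<rho>: "\<rho> \<in> Z2 P A \<alpha>" and b: "b \<in> C1 P A"
    and cong: "\<And>g h. g \<in> carrier P \<Longrightarrow> h \<in> carrier P \<Longrightarrow> \<rho> g h \<otimes>\<^bsub>A\<^esub> inv\<^bsub>A\<^esub> (d1 P A \<alpha> b g h) \<in> pT A p k"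
  shows "is_coboundary2 P A \<alpha> \<rho>"
proof -
  have \<rho>c: "\<And>g h. g \<in> carrier P \<Longrightarrow> h \<in> carrier P \<Longrightarrow> \<rho> g h \<in> carrier A" using C2_closed[OF Z2_C2[OF \<rho>]] .
  have bc: "\<And>g. g \<in> carrier P \<Longrightarrow> b g \<in> carrier A" using C1_closed[OF b] .
  have dbc: "\<And>g h. d1 P A \<alpha> b g h \<in> carrier A" using d1_closed[where f=b, OF bc] .
  have "\<exists>u\<in>C2 P A. \<forall>g\<in>carrier P. \<forall>h\<in>carrier P. \<rho> g h \<otimes>\<^bsub>A\<^esub> inv\<^bsub>A\<^esub> (d1 P A \<alpha> b g h) = u g h [^]\<^bsub>A\<^esub> (p ^ k)"
    by (rule C2_pow_root) (use C2_mult[OF Z2_C2[OF \<rho>] C2_inv[OF d1_C2[OF b]]] cong in simp_all)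
  then obtain u where u: "u \<in> C2 P A"
    and ue: "\<forall>g\<in>carrier P. \<forall>h\<in>carrier P. \<rho> g h \<otimes>\<^bsub>A\<^esub> inv\<^bsub>A\<^esub> (d1 P A \<alpha> b g h) = u g h [^]\<^bsub>A\<^esub> (p ^ k)"
    by blast
  note ue = ue[rule_format]
  have uc: "\<And>g h. g \<in> carrier P \<Longrightarrow> h \<in> carrier P \<Longrightarrow> u g h \<in> carrier A" using C2_closed[OF u] .
  have "d2 P A \<alpha> u g h l = \<one>\<^bsub>A\<^esub>" if g: "g \<in> carrier P" and h: "h \<in> carrier P" and l: "l \<in> carrier P" for g h l
  proof -
    have "d2 P A \<alpha> u g h l [^]\<^bsub>A\<^esub> (p ^ k) = d2 P A \<alpha> (\<lambda>x y. u x y [^]\<^bsub>A\<^esub> (p ^ k)) g h l"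
      by (rule d2_pow[symmetric, OF uc g h l])
    also have "\<dots> = d2 P A \<alpha> (\<lambda>x y. \<rho> x y \<otimes>\<^bsub>A\<^esub> inv\<^bsub>A\<^esub> (d1 P A \<alpha> b x y)) g h l"
      by (rule d2_cong) (simp_all add: ue g h l)
    also have "\<dots> = d2 P A \<alpha> \<rho> g h l \<otimes>\<^bsub>A\<^esub> d2 P A \<alpha> (\<lambda>x y. inv\<^bsub>A\<^esub> (d1 P A \<alpha> b x y)) g h l"
      by (rule d2_mult) (use \<rho>c dbc g h l in simp_all)
    also have "\<dots> = \<one>\<^bsub>A\<^esub>"
      using Z2_d2[OF \<rho> g h l] d2_inv[where f="d1 P A \<alpha> b", OF _ g h l] d2_d1[where f=b, OF bc g h l] dbc
      by simp
    finally show ?thesis using p_torsion_free d2_closed[where f=u, OF uc] by blast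
  qed
  hence "u \<in> Z2 P A \<alpha>" using u by (simp add: Z2_def)
  hence "is_coboundary2 P A \<alpha> (\<lambda>g h. u g h [^]\<^bsub>A\<^esub> (p ^ k))"
    by (rule cocycle_pow_is_coboundary[OF fin _ card jk])
  then obtain c where c: "c \<in> C1 P A" and cd: "\<And>g h. g \<in> carrier P \<Longrightarrow> h \<in> carrier P \<Longrightarrow>
      u g h [^]\<^bsub>A\<^esub> (p ^ k) = d1 P A \<alpha> c g h"
    unfolding is_coboundary2_def by blast
  have "\<rho> g h = d1 P A \<alpha> (\<lambda>x. c x \<otimes>\<^bsub>A\<^esub> b x) g h" if "g \<in> carrier P" "h \<in> carrier P" for g h
  proof -
    have "\<rho> g h = d1 P A \<alpha> c g h \<otimes>\<^bsub>A\<^esub> d1 P A \<alpha> b g h"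
      using A.inv_solve_right[of "d1 P A \<alpha> c g h" "\<rho> g h" "d1 P A \<alpha> b g h"] ue[OF that] cd[OF that]
        \<rho>c[OF that] dbc d1_closed[where f=c, OF C1_closed[OF c]] by metis
    thus ?thesis using d1_mult[where f=c and f'=b, OF C1_closed[OF c] bc that] by simp
  qed
  thus ?thesis using C1_mult[OF c b] by (auto simp: is_coboundary2_def)
qed

lemma coboundaries_of_congruent_coboundary:
  assumes fin: "finite (carrier P)" and card: "card (carrier P) = p ^ j" and jN: "j \<le> N" and Nk: "N \<le> k"
    and \<rho>: "\<rho> \<in> Z2 P A \<alpha>" and \<kappa>: "\<kappa> \<in> C2 P A"
    and \<kappa>_div: "\<And>g h. g \<in> carrier P \<Longrightarrow> h \<in> carrier P \<Longrightarrow> \<kappa> g h \<in> pT A p N"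
    and z: "\<And>g h l. g \<in> carrier P \<Longrightarrow> h \<in> carrier P \<Longrightarrow> l \<in> carrier P \<Longrightarrow>
             z g h l \<in> carrier A \<and> z g h l [^]\<^bsub>A\<^esub> (p ^ k) = d2 P A \<alpha> \<kappa> g h l"
    and f: "f \<in> C1 P A"
    and f_cong: "\<And>g h. g \<in> carrier P \<Longrightarrow> h \<in> carrier P \<Longrightarrow>
                 \<rho> g h \<otimes>\<^bsub>A\<^esub> \<kappa> g h \<otimes>\<^bsub>A\<^esub> inv\<^bsub>A\<^esub> (d1 P A \<alpha> f g h) \<in> pT A p k"
  shows "is_coboundary2 P A \<alpha> \<rho> \<and> is_coboundary3 P A \<alpha> z"
proof -
  interpret H: subgroup "pT A p k" A by (rule pT_subgroup)
  have \<rho>c: "\<And>g h. g \<in> carrier P \<Longrightarrow> h \<in> carrier P \<Longrightarrow> \<rho> g h \<in> carrier A" using C2_closed[OF Z2_C2[OF \<rho>]] .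
  have \<kappa>c: "\<And>g h. g \<in> carrier P \<Longrightarrow> h \<in> carrier P \<Longrightarrow> \<kappa> g h \<in> carrier A" using C2_closed[OF \<kappa>] .
  have z_cob: "is_coboundary3 P A \<alpha> z"
  proof (rule is_coboundary3_of_pow_eq_d2[OF C2_mult[OF Z2_C2[OF \<rho>] \<kappa>] f])
    show "\<And>g h. g \<in> carrier P \<Longrightarrow> h \<in> carrier P \<Longrightarrow>
        \<rho> g h \<otimes>\<^bsub>A\<^esub> \<kappa> g h \<otimes>\<^bsub>A\<^esub> inv\<^bsub>A\<^esub> (d1 P A \<alpha> f g h) \<in> pT A p k"
      by (rule f_cong)
    fix g h l assume ghl: "g \<in> carrier P" "h \<in> carrier P" "l \<in> carrier P"
    show "z g h l \<in> carrier A \<and> z g h l [^]\<^bsub>A\<^esub> (p ^ k) = d2 P A \<alpha> (\<lambda>x y. \<rho> x y \<otimes>\<^bsub>A\<^esub> \<kappa> x y) g h l"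
      using z[OF ghl] d2_cocycle_mult[OF \<rho> \<kappa>c ghl] by simp
  qed
  obtain c where c: "c \<in> C1 P A"
    and c_cong: "\<forall>g\<in>carrier P. \<forall>h\<in>carrier P. \<kappa> g h \<otimes>\<^bsub>A\<^esub> inv\<^bsub>A\<^esub> (d1 P A \<alpha> c g h) \<in> pT A p k"
    using congruent_to_coboundary_of_d2_pow[OF fin card jN Nk \<kappa> \<kappa>_div z z_cob] by blast
  have "is_coboundary2 P A \<alpha> \<rho>"
  proof (rule is_coboundary2_of_congruent_coboundary[OF fin card _ \<rho> C1_mult[OF f C1_inv[OF c]]])
    show "j \<le> k" using jN Nk by simp
    fix g h assume gh: "g \<in> carrier P" "h \<in> carrier P"
    have dfc: "d1 P A \<alpha> f g h \<in> carrier A" and dcc: "d1 P A \<alpha> c g h \<in> carrier A"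
      using d1_closed C1_closed f c by blast+
    have "d1 P A \<alpha> (\<lambda>x. f x \<otimes>\<^bsub>A\<^esub> inv\<^bsub>A\<^esub> (c x)) g h = d1 P A \<alpha> f g h \<otimes>\<^bsub>A\<^esub> inv\<^bsub>A\<^esub> (d1 P A \<alpha> c g h)"
      using d1_mult[OF C1_closed[OF f] _ gh] d1_inv[OF C1_closed[OF c] gh] C1_closed[OF c] by simp
    hence "\<rho> g h \<otimes>\<^bsub>A\<^esub> inv\<^bsub>A\<^esub> (d1 P A \<alpha> (\<lambda>x. f x \<otimes>\<^bsub>A\<^esub> inv\<^bsub>A\<^esub> (c x)) g h)
        = (\<rho> g h \<otimes>\<^bsub>A\<^esub> \<kappa> g h \<otimes>\<^bsub>A\<^esub> inv\<^bsub>A\<^esub> (d1 P A \<alpha> f g h))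
          \<otimes>\<^bsub>A\<^esub> inv\<^bsub>A\<^esub> (\<kappa> g h \<otimes>\<^bsub>A\<^esub> inv\<^bsub>A\<^esub> (d1 P A \<alpha> c g h))"
      using A.inv_mult_inv_eq[of "\<rho> g h" "d1 P A \<alpha> f g h" "d1 P A \<alpha> c g h" "\<kappa> g h"]
        \<rho>c[OF gh] \<kappa>c[OF gh] dfc dcc by simp
    thus "\<rho> g h \<otimes>\<^bsub>A\<^esub> inv\<^bsub>A\<^esub> (d1 P A \<alpha> (\<lambda>x. f x \<otimes>\<^bsub>A\<^esub> inv\<^bsub>A\<^esub> (c x)) g h) \<in> pT A p k"
      using f_cong c_cong gh by simp
  qed
  thus ?thesis using z_cob by blast
qed

lemma congruent_coboundary_of_coboundaries:
  assumes fin: "finite (carrier P)" and card: "card (carrier P) = p ^ j" and jN: "j \<le> N" and Nk: "N \<le> k"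
    and \<kappa>: "\<kappa> \<in> C2 P A" and \<kappa>_div: "\<And>g h. g \<in> carrier P \<Longrightarrow> h \<in> carrier P \<Longrightarrow> \<kappa> g h \<in> pT A p N"
    and z: "\<And>g h l. g \<in> carrier P \<Longrightarrow> h \<in> carrier P \<Longrightarrow> l \<in> carrier P \<Longrightarrow>
             z g h l \<in> carrier A \<and> z g h l [^]\<^bsub>A\<^esub> (p ^ k) = d2 P A \<alpha> \<kappa> g h l"
    and \<rho>_cob: "is_coboundary2 P A \<alpha> \<rho>" and z_cob: "is_coboundary3 P A \<alpha> z"
  shows "\<exists>f\<in>C1 P A. \<forall>g\<in>carrier P. \<forall>h\<in>carrier P.
           \<rho> g h \<otimes>\<^bsub>A\<^esub> \<kappa> g h \<otimes>\<^bsub>A\<^esub> inv\<^bsub>A\<^esub> (d1 P A \<alpha> f g h) \<in> pT A p k"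
proof -
  obtain b where b: "b \<in> C1 P A" and \<rho>b: "\<forall>g\<in>carrier P. \<forall>h\<in>carrier P. \<rho> g h = d1 P A \<alpha> b g h"
    using \<rho>_cob unfolding is_coboundary2_def by blast
  obtain c where c: "c \<in> C1 P A"
    and c_cong: "\<forall>g\<in>carrier P. \<forall>h\<in>carrier P. \<kappa> g h \<otimes>\<^bsub>A\<^esub> inv\<^bsub>A\<^esub> (d1 P A \<alpha> c g h) \<in> pT A p k"
    using congruent_to_coboundary_of_d2_pow[OF fin card jN Nk \<kappa> \<kappa>_div z z_cob] by blast
  have "\<rho> g h \<otimes>\<^bsub>A\<^esub> \<kappa> g h \<otimes>\<^bsub>A\<^esub> inv\<^bsub>A\<^esub> (d1 P A \<alpha> (\<lambda>x. b x \<otimes>\<^bsub>A\<^esub> c x) g h) \<in> pT A p k"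
    if gh: "g \<in> carrier P" "h \<in> carrier P" for g h
  proof -
    have dbc: "d1 P A \<alpha> b g h \<in> carrier A" and dcc: "d1 P A \<alpha> c g h \<in> carrier A"
      using d1_closed C1_closed b c by blast+
    show ?thesis
      using d1_mult[OF C1_closed[OF b] C1_closed[OF c] gh] C2_closed[OF \<kappa> gh] dbc dcc \<rho>b c_cong gh
        A.mult_mult_inv_mult_eq[of "d1 P A \<alpha> b g h" "d1 P A \<alpha> c g h" "\<kappa> g h"] by simp
  qed
  thus ?thesis using C1_mult[OF b c] by blast
qed

lemma congruent_coboundary_iff:
  assumes "finite (carrier P)" and "card (carrier P) = p ^ j" and "j \<le> N" and "N \<le> k"
    and "\<rho> \<in> Z2 P A \<alpha>" and "\<kappa> \<in> C2 P A"
    and "\<And>g h. g \<in> carrier P \<Longrightarrow> h \<in> carrier P \<Longrightarrow> \<kappa> g h \<in> pT A p N"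
    and "\<And>g h l. g \<in> carrier P \<Longrightarrow> h \<in> carrier P \<Longrightarrow> l \<in> carrier P \<Longrightarrow>
           z g h l \<in> carrier A \<and> z g h l [^]\<^bsub>A\<^esub> (p ^ k) = d2 P A \<alpha> \<kappa> g h l"
  shows "(\<exists>f\<in>C1 P A. \<forall>g\<in>carrier P. \<forall>h\<in>carrier P.
            \<rho> g h \<otimes>\<^bsub>A\<^esub> \<kappa> g h \<otimes>\<^bsub>A\<^esub> inv\<^bsub>A\<^esub> (d1 P A \<alpha> f g h) \<in> pT A p k)
         \<longleftrightarrow> is_coboundary2 P A \<alpha> \<rho> \<and> is_coboundary3 P A \<alpha> z"
  using coboundaries_of_congruent_coboundary[OF assms] congruent_coboundary_of_coboundaries[OF assms(1-4,6-8)]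
  by blast

lemma splits_over_quotient_Ext_iff:
  assumes L: "subgroup L P" and finL: "finite L" and cardL: "card L = p ^ j" and jN: "j \<le> N" and Nk: "N \<le> k"
    and \<rho>: "\<rho> \<in> Z2 P A \<alpha>" and \<kappa>: "\<kappa> \<in> C2 P A"
    and \<kappa>_div: "\<And>g h. g \<in> carrier P \<Longrightarrow> h \<in> carrier P \<Longrightarrow> \<kappa> g h \<in> pT A p N"
    and z: "\<And>g h l. g \<in> carrier P \<Longrightarrow> h \<in> carrier P \<Longrightarrow> l \<in> carrier P \<Longrightarrow>
             z g h l \<in> carrier A \<and> z g h l [^]\<^bsub>A\<^esub> (p ^ k) = d2 P A \<alpha> \<kappa> g h l"
    and \<tau>: "\<tau> \<in> Z2 P (A Mod pT A p k) (actM \<alpha>)"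
    and \<tau>_eq: "\<And>g h. g \<in> carrier P \<Longrightarrow> h \<in> carrier P \<Longrightarrow> \<tau> g h = pT A p k #>\<^bsub>A\<^esub> (\<rho> g h \<otimes>\<^bsub>A\<^esub> \<kappa> g h)"
  shows "splits_over (Ext P (A Mod pT A p k) (actM \<alpha>) \<tau>) (preim (Ext P (A Mod pT A p k) (actM \<alpha>) \<tau>) L)
           (base P (A Mod pT A p k))
         \<longleftrightarrow> is_coboundary2 (P\<lparr>carrier := L\<rparr>) A \<alpha> \<rho> \<and> is_coboundary3 (P\<lparr>carrier := L\<rparr>) A \<alpha> z"
proof -
  let ?PL = "P\<lparr>carrier := L\<rparr>"
  interpret Q: quotient_module P A \<alpha> "pT A p k" by (rule quotient_module_pT)
  interpret QL: quotient_module ?PL A \<alpha> "pT A p k" by (rule Q.quotient_module_subgroup[OF L])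
  interpret TL: torsion_free_module ?PL A \<alpha> p by (rule torsion_free_module_subgroup[OF L])
  have sub: "L \<subseteq> carrier P" using L by (rule subgroup.subset)
  let ?r\<rho> = "res2 A L \<rho>" and ?r\<kappa> = "res2 A L \<kappa>"
  have r\<rho>\<kappa>c: "?r\<rho> g h \<otimes>\<^bsub>A\<^esub> ?r\<kappa> g h \<in> carrier A" if "g \<in> L" "h \<in> L" for g h
    using that subsetD[OF sub] C2_closed[OF Z2_C2[OF \<rho>]] C2_closed[OF \<kappa>] by (simp add: res2_def)
  have "splits_over (Ext P (A Mod pT A p k) (actM \<alpha>) \<tau>) (preim (Ext P (A Mod pT A p k) (actM \<alpha>) \<tau>) L)
          (base P (A Mod pT A p k))
        \<longleftrightarrow> is_coboundary2 ?PL (A Mod pT A p k) (actM \<alpha>) \<tau>"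
    by (rule Q.M.splits_over_Ext_iff[OF \<tau> L])
  also have "\<dots> \<longleftrightarrow> is_coboundary2 ?PL (A Mod pT A p k) (actM \<alpha>) (\<lambda>g h. Q.cst (?r\<rho> g h \<otimes>\<^bsub>A\<^esub> ?r\<kappa> g h))"
    by (rule is_coboundary2_cong) (use \<tau>_eq sub in \<open>auto simp: res2_def\<close>)
  also have "\<dots> \<longleftrightarrow> (\<exists>f\<in>C1 ?PL A. \<forall>g\<in>L. \<forall>h\<in>L.
      ?r\<rho> g h \<otimes>\<^bsub>A\<^esub> ?r\<kappa> g h \<otimes>\<^bsub>A\<^esub> inv\<^bsub>A\<^esub> (d1 ?PL A \<alpha> f g h) \<in> pT A p k)"
    using QL.is_coboundary2_quotient_iff[of "\<lambda>g h. ?r\<rho> g h \<otimes>\<^bsub>A\<^esub> ?r\<kappa> g h"] r\<rho>\<kappa>c by simp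
  also have "\<dots> \<longleftrightarrow> is_coboundary2 ?PL A \<alpha> ?r\<rho> \<and> is_coboundary3 ?PL A \<alpha> z"
  proof (rule TL.congruent_coboundary_iff[simplified])
    show "finite L" "card L = p ^ j" "j \<le> N" "N \<le> k" by (fact finL cardL jN Nk)+
    show "?r\<rho> \<in> Z2 ?PL A \<alpha>" by (rule res2_Z2[OF L \<rho>])
    show "?r\<kappa> \<in> C2 ?PL A" by (rule res2_C2[OF L \<kappa>])
    show "\<And>g h. g \<in> L \<Longrightarrow> h \<in> L \<Longrightarrow> ?r\<kappa> g h \<in> pT A p N" using \<kappa>_div sub by (auto simp: res2_def)
    show "\<And>g h l. g \<in> L \<Longrightarrow> h \<in> L \<Longrightarrow> l \<in> L \<Longrightarrow>
        z g h l \<in> carrier A \<and> z g h l [^]\<^bsub>A\<^esub> (p ^ k) = d2 ?PL A \<alpha> ?r\<kappa> g h l"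
      using z sub d2_res2[OF L] by (auto simp: subset_iff)
  qed
  also have "\<dots> \<longleftrightarrow> is_coboundary2 ?PL A \<alpha> \<rho> \<and> is_coboundary3 ?PL A \<alpha> z"
    using is_coboundary2_cong[of ?PL ?r\<rho> \<rho>] by (simp add: res2_def)
  finally show ?thesis .
qed

end

section \<open>The coclass family\<close>

lemma card_subgroup_of_prime_power_order:
  assumes p: "Factorial_Ring.prime p" and P: "group P" and card: "card (carrier P) = p ^ m" and L: "subgroup L P"
  obtains j where "j \<le> m" and "card L = p ^ j"
proof -
  have "card (rcosets\<^bsub>P\<^esub> L) * card L = order P" by (rule group.lagrange[OF P L])
  hence "card L dvd p ^ m" using card by (metis dvd_triv_right order_def)
  thus ?thesis using that divides_primepow_nat[OF p] by blast
qed

lemma eta_x_spec: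
  assumes bij: "bij_betw (conn P A \<alpha> p (x + 3 * m)) (K x) (H3 P A \<alpha>)" and \<eta>: "\<eta> \<in> H3 P A \<alpha>"
  shows "eta_x P A \<alpha> p m K \<eta> x \<in> K x \<and> conn P A \<alpha> p (x + 3 * m) (eta_x P A \<alpha> p m K \<eta> x) = \<eta>"
proof -
  obtain \<kappa> where "\<kappa> \<in> K x" "conn P A \<alpha> p (x + 3 * m) \<kappa> = \<eta>"
    using bij \<eta> unfolding bij_betw_def by (metis imageE)
  hence "\<exists>!\<kappa>. \<kappa> \<in> K x \<and> conn P A \<alpha> p (x + 3 * m) \<kappa> = \<eta>"
    using bij unfolding bij_betw_def inj_on_def by blast
  thus ?thesis unfolding eta_x_def by (rule theI')
qed

context group_module begin

lemma J2_lift_in_pT: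
  assumes \<kappa>: "\<kappa> \<in> J2 P A \<alpha> p m k" and gh: "g \<in> carrier P" "h \<in> carrier P"
    and t: "t \<in> carrier A" and \<kappa>t: "\<kappa> g h = pT A p k #>\<^bsub>A\<^esub> t"
  shows "t \<in> pT A p (k - m)"
proof -
  interpret Q: quotient_module P A \<alpha> "pT A p k" by (rule quotient_module_pT)
  interpret H: subgroup "pT A p (k - m)" A by (rule pT_subgroup)
  have "\<kappa> g h \<in> Q.cst ` pT A p (k - m)" using \<kappa> gh unfolding J2_def Z2_def C2_def by auto
  then obtain s where s: "s \<in> pT A p (k - m)" and \<kappa>s: "\<kappa> g h = Q.cst s" by blast
  have "t \<otimes>\<^bsub>A\<^esub> inv\<^bsub>A\<^esub> s \<in> pT A p k" using Q.cst_eq_iff[OF t] s \<kappa>s \<kappa>t by auto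
  moreover have "pT A p k \<subseteq> pT A p (k - m)" by (rule pT_mono) simp
  ultimately have "t \<otimes>\<^bsub>A\<^esub> inv\<^bsub>A\<^esub> s \<otimes>\<^bsub>A\<^esub> s \<in> pT A p (k - m)" using s by blast
  thus ?thesis using t s by (simp add: A.m_assoc)
qed

lemma proj2_add_Z2:
  assumes \<rho>: "\<rho> \<in> Z2 P A \<alpha>" and \<kappa>: "\<kappa> \<in> Z2 P (A Mod pT A p k) (actM \<alpha>)"
  shows "cadd2 (A Mod pT A p k) (proj2 P A p k \<rho>) \<kappa> \<in> Z2 P (A Mod pT A p k) (actM \<alpha>)"
proof -
  interpret Q: quotient_module P A \<alpha> "pT A p k" by (rule quotient_module_pT)
  have "proj2 P A p k \<rho> g h = Q.cst (\<rho> g h)" for g h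
  proof (cases "g \<in> carrier P \<and> h \<in> carrier P")
    case False
    hence "\<rho> g h = \<one>\<^bsub>A\<^esub>" using C2_out[OF Z2_C2[OF \<rho>]] by blast
    thus ?thesis using False Q.cst_one by (simp add: proj2_def)
  qed (simp add: proj2_def)
  hence "proj2 P A p k \<rho> = (\<lambda>g h. Q.cst (\<rho> g h))" by blast
  thus ?thesis using Q.M.Z2_mult[OF Q.Z2_quotient[OF \<rho>] \<kappa>] by (simp add: cadd2_def)
qed

lemma proj2_add_apply:
  assumes \<rho>: "\<rho> \<in> C2 P A" and gh: "g \<in> carrier P" "h \<in> carrier P"
    and t: "t \<in> carrier A" and \<kappa>t: "\<kappa> g h = pT A p k #>\<^bsub>A\<^esub> t"
  shows "cadd2 (A Mod pT A p k) (proj2 P A p k \<rho>) \<kappa> g h = pT A p k #>\<^bsub>A\<^esub> (\<rho> g h \<otimes>\<^bsub>A\<^esub> t)"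
proof -
  interpret Q: quotient_module P A \<alpha> "pT A p k" by (rule quotient_module_pT)
  show ?thesis using gh t \<kappa>t C2_closed[OF \<rho> gh] by (simp add: cadd2_def proj2_def Q.H.rcos_sum)
qed

lemma Gx_lift:
  assumes \<rho>: "\<rho> \<in> Z2 P A \<alpha>" and \<eta>: "\<eta> \<in> H3 P A \<alpha>"
    and bij: "bij_betw (conn P A \<alpha> p (x + 3 * m)) (K x) (H3 P A \<alpha>)"
    and KZ: "K x \<subseteq> Z2 P (Mq A p (x + 3 * m)) (actM \<alpha>)" and KJ: "K x \<subseteq> J2 P A \<alpha> p m (x + 3 * m)"
  obtains \<kappa> z \<tau> where "\<kappa> \<in> C2 P A"
    and "\<And>g h. g \<in> carrier P \<Longrightarrow> h \<in> carrier P \<Longrightarrow> \<kappa> g h \<in> pT A p (x + 2 * m)"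
    and "z \<in> C3 P A"
    and "\<And>g h l. g \<in> carrier P \<Longrightarrow> h \<in> carrier P \<Longrightarrow> l \<in> carrier P \<Longrightarrow>
           z g h l [^]\<^bsub>A\<^esub> (p ^ (x + 3 * m)) = d2 P A \<alpha> \<kappa> g h l"
    and "\<eta> = cls3 P A \<alpha> z"
    and "\<tau> \<in> Z2 P (A Mod pT A p (x + 3 * m)) (actM \<alpha>)"
    and "\<And>g h. g \<in> carrier P \<Longrightarrow> h \<in> carrier P \<Longrightarrow>
           \<tau> g h = pT A p (x + 3 * m) #>\<^bsub>A\<^esub> (\<rho> g h \<otimes>\<^bsub>A\<^esub> \<kappa> g h)"
    and "Gx P A \<alpha> p m \<rho> K \<eta> x = Ext P (A Mod pT A p (x + 3 * m)) (actM \<alpha>) \<tau>"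
proof -
  define k where "k = x + 3 * m"
  define \<eta>x where "\<eta>x = eta_x P A \<alpha> p m K \<eta> x"
  have \<eta>xK: "\<eta>x \<in> K x" and conn\<eta>x: "conn P A \<alpha> p k \<eta>x = \<eta>"
    using eta_x_spec[where K=K and x=x, OF bij \<eta>] by (simp_all add: \<eta>x_def k_def)
  have \<eta>xZ: "\<eta>x \<in> Z2 P (A Mod pT A p k) (actM \<alpha>)" using KZ \<eta>xK by (auto simp: Mq_def k_def)
  obtain \<kappa> z where \<kappa>: "\<kappa> \<in> C2 P A"
    and \<eta>x\<kappa>: "\<And>g h. g \<in> carrier P \<Longrightarrow> h \<in> carrier P \<Longrightarrow> \<eta>x g h = pT A p k #>\<^bsub>A\<^esub> \<kappa> g h"
    and "z \<in> C3 P A" and "\<And>g h l. g \<in> carrier P \<Longrightarrow> h \<in> carrier P \<Longrightarrow> l \<in> carrier P \<Longrightarrow>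
      z g h l [^]\<^bsub>A\<^esub> (p ^ k) = d2 P A \<alpha> \<kappa> g h l"
    and "conn P A \<alpha> p k \<eta>x = cls3 P A \<alpha> z"
    using conn_lift[OF \<eta>xZ] by blast
  moreover have \<eta>xJ: "\<eta>x \<in> J2 P A \<alpha> p m k" using KJ \<eta>xK by (auto simp: k_def)
  have km: "k - m = x + 2 * m" by (simp add: k_def)
  have "\<kappa> g h \<in> pT A p (x + 2 * m)" if "g \<in> carrier P" "h \<in> carrier P" for g h
    using J2_lift_in_pT[OF \<eta>xJ that C2_closed[OF \<kappa> that] \<eta>x\<kappa>[OF that]] unfolding km .
  moreover have "cadd2 (A Mod pT A p k) (proj2 P A p k \<rho>) \<eta>x g h = pT A p k #>\<^bsub>A\<^esub> (\<rho> g h \<otimes>\<^bsub>A\<^esub> \<kappa> g h)"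
    if "g \<in> carrier P" "h \<in> carrier P" for g h
    by (rule proj2_add_apply[where \<kappa>=\<eta>x, OF Z2_C2[OF \<rho>] that C2_closed[OF \<kappa> that] \<eta>x\<kappa>[OF that]])
  moreover have "Gx P A \<alpha> p m \<rho> K \<eta> x
      = Ext P (A Mod pT A p k) (actM \<alpha>) (cadd2 (A Mod pT A p k) (proj2 P A p k \<rho>) \<eta>x)"
    by (simp add: Gx_def Mq_def k_def \<eta>x_def)
  ultimately show ?thesis
    using that proj2_add_Z2[OF \<rho> \<eta>xZ] conn\<eta>x unfolding k_def by metis
qed

end

theorem lemma5p1:
  fixes P :: "'g monoid" and T :: "'a monoid" and \<alpha> :: "'g \<Rightarrow> 'a \<Rightarrow> 'a"
    and p m d :: nat and \<rho> :: "'g \<Rightarrow> 'g \<Rightarrow> 'a" and \<eta> :: "('g \<Rightarrow> 'g \<Rightarrow> 'g \<Rightarrow> 'a) set"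
    and K :: "nat \<Rightarrow> ('g \<Rightarrow> 'g \<Rightarrow> 'a set) set" and L :: "'g set" and x :: nat
  assumes p_prime: "Factorial_Ring.prime p"
    and P_group: "group P" and P_finite: "finite (carrier P)" and P_order: "card (carrier P) = p ^ m"
    and T_group: "comm_group T" and T_Zpd: "T \<cong> product_group {..<d} (\<lambda>_. Zp p)"
    and act_aut: "\<forall>g\<in>carrier P. \<alpha> g \<in> iso T T"
    and act_one: "\<forall>t\<in>carrier T. \<alpha> \<one>\<^bsub>P\<^esub> t = t"
    and act_mult: "\<forall>g\<in>carrier P. \<forall>h\<in>carrier P. \<forall>t\<in>carrier T. \<alpha> (g \<otimes>\<^bsub>P\<^esub> h) t = \<alpha> h (\<alpha> g t)"
    and rho_cocycle: "\<rho> \<in> Z2 P T \<alpha>"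
    and S_infinite: "infinite (carrier (Ext P T \<alpha> \<rho>))"
    and S_coclass: "finite_coclass (Ext P T \<alpha> \<rho>) p"
    and T_gamma: "\<exists>l\<ge>1. lcs (Ext P T \<alpha> \<rho>) l = base P T"
    and T_series: "\<forall>i. card (rcosets\<^bsub>(Ext P T \<alpha> \<rho>)\<lparr>carrier := Tser (Ext P T \<alpha> \<rho>) (base P T) i\<rparr>\<^esub>
                          (Tser (Ext P T \<alpha> \<rho>) (base P T) (Suc i))) = p"
    and eta_H3: "\<eta> \<in> H3 P T \<alpha>"
    and K_compl: "\<forall>y. is_complement2 (Mq T p (y + 3 * m)) (Z2 P (Mq T p (y + 3 * m)) (actM \<alpha>))
                                     (I2 P T \<alpha> p (y + 3 * m)) (K y)"
    and K_J: "\<forall>y. K y \<subseteq> J2 P T \<alpha> p m (y + 3 * m)"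
    and K_mul: "\<forall>y. mul2 P T p (y + 3 * m) ` K y = K (Suc y)"
    and K_iso: "\<forall>y. bij_betw (conn P T \<alpha> p (y + 3 * m)) (K y) (H3 P T \<alpha>)"
    and L_elab: "elem_abelian P p L"
  shows "(splits_over (Gx P T \<alpha> p m \<rho> K \<eta> x) (preim (Gx P T \<alpha> p m \<rho> K \<eta> x) L)
                      (base P (Mq T p (x + 3 * m)))
            \<longleftrightarrow> L \<in> calL_eta P T \<alpha> p \<rho> \<eta>)
       \<and> (splits_over (Gx P T \<alpha> p m \<rho> K \<eta> x) (preim (Gx P T \<alpha> p m \<rho> K \<eta> x) L)
                      (base P (Mq T p (x + 3 * m)))
            \<longrightarrow> splits_over (Ext P T \<alpha> \<rho>) (preim (Ext P T \<alpha> \<rho>) L) (base P T))"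
proof -
  interpret group_module P T \<alpha>
    by (rule group_module.intro[OF P_group T_group]) (use act_aut act_one act_mult in \<open>auto simp: iso_def\<close>)
  interpret torsion_free_module P T \<alpha> p
    by (rule torsion_free_module.intro[OF group_module_axioms])
      (simp add: torsion_free_module_axioms_def iso_Zp_product_torsion_free[OF T_group T_Zpd prime_gt_0_nat[OF p_prime]])
  have L: "subgroup L P" using L_elab by (simp add: elem_abelian_def)
  obtain j where "j \<le> m" and cardL: "card L = p ^ j"
    using card_subgroup_of_prime_power_order[OF p_prime P_group P_order L] .
  have "K x \<subseteq> Z2 P (Mq T p (x + 3 * m)) (actM \<alpha>)" using K_compl by (simp add: is_complement2_def)
  then obtain \<kappa> z \<tau> where \<kappa>: "\<kappa> \<in> C2 P T"
    and \<kappa>_div: "\<And>g h. g \<in> carrier P \<Longrightarrow> h \<in> carrier P \<Longrightarrow> \<kappa> g h \<in> pT T p (x + 2 * m)"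
    and z: "z \<in> C3 P T" and dz: "\<And>g h l. g \<in> carrier P \<Longrightarrow> h \<in> carrier P \<Longrightarrow> l \<in> carrier P \<Longrightarrow>
      z g h l [^]\<^bsub>T\<^esub> (p ^ (x + 3 * m)) = d2 P T \<alpha> \<kappa> g h l"
    and \<eta>z: "\<eta> = cls3 P T \<alpha> z" and \<tau>: "\<tau> \<in> Z2 P (T Mod pT T p (x + 3 * m)) (actM \<alpha>)"
    and \<tau>_eq: "\<And>g h. g \<in> carrier P \<Longrightarrow> h \<in> carrier P \<Longrightarrow>
      \<tau> g h = pT T p (x + 3 * m) #>\<^bsub>T\<^esub> (\<rho> g h \<otimes>\<^bsub>T\<^esub> \<kappa> g h)"
    and Gx: "Gx P T \<alpha> p m \<rho> K \<eta> x = Ext P (T Mod pT T p (x + 3 * m)) (actM \<alpha>) \<tau>"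
    using Gx_lift[where K=K and x=x, OF rho_cocycle eta_H3 K_iso[rule_format] _ K_J[rule_format]] by metis
  have "splits_over (Gx P T \<alpha> p m \<rho> K \<eta> x) (preim (Gx P T \<alpha> p m \<rho> K \<eta> x) L)
      (base P (Mq T p (x + 3 * m)))
      \<longleftrightarrow> is_coboundary2 (P\<lparr>carrier := L\<rparr>) T \<alpha> \<rho> \<and> is_coboundary3 (P\<lparr>carrier := L\<rparr>) T \<alpha> z"
    unfolding Gx Mq_def
    by (rule splits_over_quotient_Ext_iff[OF L finite_subset[OF subgroup.subset[OF L] P_finite] cardL _ _
          rho_cocycle \<kappa> \<kappa>_div _ \<tau> \<tau>_eq])
      (use \<open>j \<le> m\<close> C3_closed[OF z] dz in auto)
  moreover have "L \<in> calL_eta P T \<alpha> p \<rho> \<eta>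
      \<longleftrightarrow> is_coboundary2 (P\<lparr>carrier := L\<rparr>) T \<alpha> \<rho> \<and> is_coboundary3 (P\<lparr>carrier := L\<rparr>) T \<alpha> z"
    using L_elab resH3_eq_zero_iff[OF L eta_H3 \<eta>z z] by (simp add: calL_eta_def calL_def res2_B2_iff)
  ultimately show ?thesis using splits_over_Ext_iff[OF rho_cocycle L] by simp
qed

end
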